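(* Let $G$ be finite and $z\in\mathbb C\setminus\{-1,0,1\}$. Consider the linear maps (a) $\mu\mapsto f_\mu$, $f_\mu(e)=\mu(\bar e)$, from $\{\mu\in\mathrm{FA}(P):\mathcal T'\mu=z\mu\}$ to $\mathrm{Eq}(S,z\,\mathrm{Id})$; (b) $I:\mathrm{Eq}(S,z\,\mathrm{Id})\to\mathrm{Eq}(\Sigma,R_z)=\mathrm{Eq}(\Delta,L_z)$; (c) the lift $f\mapsto f\circ\mathrm{pr}$ from $\mathrm{Eq}(\Sigma,R_z)$ to the $\Gamma$-invariant elements of $\mathrm{Eq}(\Sigma_{\mathbb T},R^{\mathbb T}_z)$; (d) $\mathrm{Res}$ from $\{\mu\in\mathrm{FA}(P):\mathcal T'\mu=z\mu\}$ to $\mathrm{FA}(\partial\mathbb T)^{\Gamma,z}$; (e) the Poisson transform $\mathcal P_z$ from $\mathrm{FA}(\partial\mathbb T)^{\Gamma,z}$ to the $\Gamma$-invariant elements of $\mathrm{Eq}(\Sigma_{\mathbb T},R^{\mathbb T}_z)$. Each of these maps is a linear isomorphism, and the diagram commutes: for every $\mu\in\mathrm{FA}(P)$ with $\mathcal T'\mu=z\mu$, $$(I f_\mu)\circ\mathrm{pr}=\mathcal P_z(\mathrm{Res}\,\mu).$$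
   Context: $G$ is a finite connected graph with vertex set $V$ (no loops, no multiple edges, every vertex of degree $\ge2$), $\deg v=1+q(v)$; $E$ oriented edges, $\iota,\tau$, opposite $\bar e$; turn $e\rightsquigarrow e'$ iff $\tau(e)=\iota(e')$, $e'\ne\bar e$. $P$ = infinite paths $(e_1,e_2,\dots)$ with $e_i\rightsquigarrow e_{i+1}$; $(\mathcal Tf)(e_1,\dots)=\sum_{e_0\rightsquigarrow e_1}f(e_0,e_1,\dots)$. Postal codes: finite paths $c=(c_1,\dots,c_m)$, $m\ge1$, $c_i\rightsquigarrow c_{i+1}$; district $P_c$; $\mathbf 1_c$ its indicator. $\mathrm{FA}(P)=\{\mu:\{\text{postal codes}\}\to\mathbb C:\mu(c)=\sum_{e:c_m\rightsquigarrow e}\mu(c,e)\}$; $\langle f,\mu\rangle=\sum_{|c|=m}f(c)\mu(c)$ for $f$ constant on districts of length $m$; $(\mathcal T'\mu)(c)=\langle\mathcal T\mathbf 1_c,\mu\rangle$. On $G$: $(Sg)(e)=\sum_{e'\rightsquigarrow e}g(e')$; $(\Sigma f)(v)=\sum_{w\text{ adj. }v}f(w)$; $(\Delta f)(v)=\frac1{1+q(v)}(\Sigma f)(v)$; $R_z$, $L_z$ multiplication by $z+q(v)z^{-1}$ resp. $\frac{z+z^{-1}q(v)}{1+q(v)}$; $(Ig)(v)=\sum_{\tau(e)=v}g(e)$; $\mathrm{Eq}(A,B)=\{f:Af=Bf\}$. Universal cover: fix $v_0\in V$; $\mathbb T$ is the tree whose vertices are non-backtracking finite edge paths in $G$ from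 $v_0$ (base vertex $o$ = empty path), each path adjacent to its one-edge extensions; $\mathrm{pr}$ sends a path to its terminal vertex; $\Gamma=\pi_1(G,v_0)$ acts by deck transformations. $\Sigma_{\mathbb T}$, $R^{\mathbb T}_z$ are the analogous operators on functions on vertices of $\mathbb T$ (with $q$ computed in $\mathbb T$, equal to $q$ of the image in $G$). $\partial\mathbb T$ = ends of $\mathbb T$, identified with $P_{v_0}=\{p\in P:\iota(e_1)=v_0\}$; clopen sets are finite disjoint unions of districts $P_c$ with $c$ starting at $v_0$; $\mathrm{FA}(\partial\mathbb T)$ = finitely additive complex set functions on clopen sets, locally constant functions being integrated by finite sums over clopen partitions. $(\mathrm{Res}\,\mu)(P_c)=\mu(c)$ for $c$ starting at $v_0$. With $d$ the tree metric, for an end $\omega$ and vertices $x,y$: $h_\omega(x,y)=d(x,w)-d(y,w)$ for any $w$ on both rays from $x$ and $y$ to $\omega$; horocycle bracket $\langle x,\omega\rangle:=h_\omega(o,x)$. Poisson transform: $(\mathcal P_z\nu)(x)=\int_{\partial\mathbb T}z^{\langle x,\omega\rangle}\,d\nu(\omega)$ (the integrand is locally constant in $\omega$). Twisted action of $\gamma\in\mathrm{Aut}(\mathbb T)$: $(\gamma\nu)(A)=\nu(\gamma^{-1}A)$, $(\pi_z(\gamma)\nu)(A)=\int_Ac_\gamma\,d(\gamma\nu)$, $c_\gamma(\omega)=z^{h_\omega(\gamma o,o)}$; $\mathrm{FA}(\partial\mathbb T)^{\Gamma,z}=\{\nu:\pi_z(\gamma)\nu=\nu\ \forall\gamma\in\Gamma\}$.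 A function $F$ on vertices of $\mathbb T$ is $\Gamma$-invariant if $F(\gamma x)=F(x)$ for all $\gamma\in\Gamma$. *)

theory Defs
  imports Complex_Main
begin

type_synonym 'v edge = "'v \<times> 'v"

definition edges :: "'v set \<Rightarrow> ('v \<Rightarrow> 'v \<Rightarrow> bool) \<Rightarrow> 'v edge set" where
  "edges V adj = {(u, w). u \<in> V \<and> w \<in> V \<and> adj u w}"

definition nbr :: "'v set \<Rightarrow> ('v \<Rightarrow> 'v \<Rightarrow> bool) \<Rightarrow> 'v \<Rightarrow> 'v set" where
  "nbr V adj v = {w \<in> V. adj v w}"

definition qv :: "'v set \<Rightarrow> ('v \<Rightarrow> 'v \<Rightarrow> bool) \<Rightarrow> 'v \<Rightarrow> complex" where
  "qv V adj v = of_nat (card (nbr V adj v)) - 1"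

definition rev_edge :: "'v edge \<Rightarrow> 'v edge" where
  "rev_edge e = (snd e, fst e)"

definition turn :: "'v edge \<Rightarrow> 'v edge \<Rightarrow> bool" where
  "turn e e' \<longleftrightarrow> snd e = fst e' \<and> e' \<noteq> rev_edge e"

definition postal :: "'v set \<Rightarrow> ('v \<Rightarrow> 'v \<Rightarrow> bool) \<Rightarrow> 'v edge list \<Rightarrow> bool" where
  "postal V adj c \<longleftrightarrow> c \<noteq> [] \<and> set c \<subseteq> edges V adj \<and>
     (\<forall>i. Suc i < length c \<longrightarrow> turn (c ! i) (c ! Suc i))"

definition codes :: "'v set \<Rightarrow> ('v \<Rightarrow> 'v \<Rightarrow> bool) \<Rightarrow> nat \<Rightarrow> 'v edge list set" where
  "codes V adj m = {c. postal V adj c \<and> length c = m}"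

definition paths :: "'v set \<Rightarrow> ('v \<Rightarrow> 'v \<Rightarrow> bool) \<Rightarrow> (nat \<Rightarrow> 'v edge) set" where
  "paths V adj = {p. \<forall>i. p i \<in> edges V adj \<and> turn (p i) (p (Suc i))}"

definition district :: "'v set \<Rightarrow> ('v \<Rightarrow> 'v \<Rightarrow> bool) \<Rightarrow> 'v edge list \<Rightarrow> (nat \<Rightarrow> 'v edge) set" where
  "district V adj c = {p \<in> paths V adj. \<forall>i < length c. p i = c ! i}"

definition FA :: "'v set \<Rightarrow> ('v \<Rightarrow> 'v \<Rightarrow> bool) \<Rightarrow> ('v edge list \<Rightarrow> complex) set" where
  "FA V adj = {\<mu>. (\<forall>c. \<not> postal V adj c \<longrightarrow> \<mu> c = 0) \<and>
     (\<forall>c. postal V adj c \<longrightarrow>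
        \<mu> c = (\<Sum>e\<in>{e \<in> edges V adj. turn (last c) e}. \<mu> (c @ [e])))}"

text \<open>pairing <f,mu> for f constant on districts of length m\<close>
definition pairing :: "'v set \<Rightarrow> ('v \<Rightarrow> 'v \<Rightarrow> bool) \<Rightarrow> nat \<Rightarrow> ((nat \<Rightarrow> 'v edge) \<Rightarrow> complex)
     \<Rightarrow> ('v edge list \<Rightarrow> complex) \<Rightarrow> complex" where
  "pairing V adj m f \<mu> = (\<Sum>c\<in>codes V adj m. f (SOME p. p \<in> district V adj c) * \<mu> c)"

definition pcons :: "'v edge \<Rightarrow> (nat \<Rightarrow> 'v edge) \<Rightarrow> (nat \<Rightarrow> 'v edge)" where
  "pcons e p = (\<lambda>i. case i of 0 \<Rightarrow> e | Suc j \<Rightarrow> p j)"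

definition transfer :: "'v set \<Rightarrow> ('v \<Rightarrow> 'v \<Rightarrow> bool) \<Rightarrow> ((nat \<Rightarrow> 'v edge) \<Rightarrow> complex)
     \<Rightarrow> (nat \<Rightarrow> 'v edge) \<Rightarrow> complex" where
  "transfer V adj f p = (\<Sum>e0\<in>{e0 \<in> edges V adj. turn e0 (p 0)}. f (pcons e0 p))"

definition ind :: "'a set \<Rightarrow> 'a \<Rightarrow> complex" where
  "ind A x = (if x \<in> A then 1 else 0)"

definition transferT :: "'v set \<Rightarrow> ('v \<Rightarrow> 'v \<Rightarrow> bool) \<Rightarrow> ('v edge list \<Rightarrow> complex)
     \<Rightarrow> 'v edge list \<Rightarrow> complex" where
  "transferT V adj \<mu> c = (if postal V adj c
      then pairing V adj (length c) (transfer V adj (ind (district V adj c))) \<mu> else 0)"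

definition eigFA :: "'v set \<Rightarrow> ('v \<Rightarrow> 'v \<Rightarrow> bool) \<Rightarrow> complex \<Rightarrow> ('v edge list \<Rightarrow> complex) set" where
  "eigFA V adj z = {\<mu> \<in> FA V adj. transferT V adj \<mu> = (\<lambda>c. z * \<mu> c)}"

definition Sop :: "'v set \<Rightarrow> ('v \<Rightarrow> 'v \<Rightarrow> bool) \<Rightarrow> ('v edge \<Rightarrow> complex) \<Rightarrow> 'v edge \<Rightarrow> complex" where
  "Sop V adj g e = (\<Sum>e'\<in>{e' \<in> edges V adj. turn e' e}. g e')"

definition EqS :: "'v set \<Rightarrow> ('v \<Rightarrow> 'v \<Rightarrow> bool) \<Rightarrow> complex \<Rightarrow> ('v edge \<Rightarrow> complex) set" where
  "EqS V adj z = {g. (\<forall>e. e \<notin> edges V adj \<longrightarrow> g e = 0) \<and>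
      (\<forall>e \<in> edges V adj. Sop V adj g e = z * g e)}"

definition Sigma_op :: "'v set \<Rightarrow> ('v \<Rightarrow> 'v \<Rightarrow> bool) \<Rightarrow> ('v \<Rightarrow> complex) \<Rightarrow> 'v \<Rightarrow> complex" where
  "Sigma_op V adj f v = (\<Sum>w\<in>nbr V adj v. f w)"

definition Delta_op :: "'v set \<Rightarrow> ('v \<Rightarrow> 'v \<Rightarrow> bool) \<Rightarrow> ('v \<Rightarrow> complex) \<Rightarrow> 'v \<Rightarrow> complex" where
  "Delta_op V adj f v = Sigma_op V adj f v / (1 + qv V adj v)"

definition Rz :: "'v set \<Rightarrow> ('v \<Rightarrow> 'v \<Rightarrow> bool) \<Rightarrow> complex \<Rightarrow> ('v \<Rightarrow> complex) \<Rightarrow> 'v \<Rightarrow> complex" where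
  "Rz V adj z f v = (z + qv V adj v * inverse z) * f v"

definition Lz :: "'v set \<Rightarrow> ('v \<Rightarrow> 'v \<Rightarrow> bool) \<Rightarrow> complex \<Rightarrow> ('v \<Rightarrow> complex) \<Rightarrow> 'v \<Rightarrow> complex" where
  "Lz V adj z f v = ((z + inverse z * qv V adj v) / (1 + qv V adj v)) * f v"

definition EqV :: "'v set \<Rightarrow> (('v \<Rightarrow> complex) \<Rightarrow> 'v \<Rightarrow> complex) \<Rightarrow> (('v \<Rightarrow> complex) \<Rightarrow> 'v \<Rightarrow> complex)
     \<Rightarrow> ('v \<Rightarrow> complex) set" where
  "EqV V A B = {f. (\<forall>v. v \<notin> V \<longrightarrow> f v = 0) \<and> (\<forall>v \<in> V. A f v = B f v)}"

definition Iop :: "'v set \<Rightarrow> ('v \<Rightarrow> 'v \<Rightarrow> bool) \<Rightarrow> ('v edge \<Rightarrow> complex) \<Rightarrow> 'v \<Rightarrow> complex" where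
  "Iop V adj g v = (if v \<in> V then (\<Sum>e\<in>{e \<in> edges V adj. snd e = v}. g e) else 0)"

definition fmu :: "'v set \<Rightarrow> ('v \<Rightarrow> 'v \<Rightarrow> bool) \<Rightarrow> ('v edge list \<Rightarrow> complex) \<Rightarrow> 'v edge \<Rightarrow> complex" where
  "fmu V adj \<mu> e = (if e \<in> edges V adj then \<mu> [rev_edge e] else 0)"

text \<open>vertices of the tree: non-backtracking finite edge paths from v0 (empty path = o)\<close>
definition treevert :: "'v set \<Rightarrow> ('v \<Rightarrow> 'v \<Rightarrow> bool) \<Rightarrow> 'v \<Rightarrow> 'v edge list \<Rightarrow> bool" where
  "treevert V adj v0 x \<longleftrightarrow> x = [] \<or> (postal V adj x \<and> fst (hd x) = v0)"

definition pr :: "'v \<Rightarrow> 'v edge list \<Rightarrow> 'v" where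
  "pr v0 x = (if x = [] then v0 else snd (last x))"

definition tnbr :: "'v set \<Rightarrow> ('v \<Rightarrow> 'v \<Rightarrow> bool) \<Rightarrow> 'v \<Rightarrow> 'v edge list \<Rightarrow> 'v edge list set" where
  "tnbr V adj v0 x = {y. treevert V adj v0 y \<and> (\<exists>e. y = x @ [e] \<or> x = y @ [e])}"

definition qT :: "'v set \<Rightarrow> ('v \<Rightarrow> 'v \<Rightarrow> bool) \<Rightarrow> 'v \<Rightarrow> 'v edge list \<Rightarrow> complex" where
  "qT V adj v0 x = of_nat (card (tnbr V adj v0 x)) - 1"

definition SigmaT :: "'v set \<Rightarrow> ('v \<Rightarrow> 'v \<Rightarrow> bool) \<Rightarrow> 'v \<Rightarrow> ('v edge list \<Rightarrow> complex)
     \<Rightarrow> 'v edge list \<Rightarrow> complex" where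
  "SigmaT V adj v0 F x = (\<Sum>y\<in>tnbr V adj v0 x. F y)"

definition RzT :: "'v set \<Rightarrow> ('v \<Rightarrow> 'v \<Rightarrow> bool) \<Rightarrow> 'v \<Rightarrow> complex \<Rightarrow> ('v edge list \<Rightarrow> complex)
     \<Rightarrow> 'v edge list \<Rightarrow> complex" where
  "RzT V adj v0 z F x = (z + qT V adj v0 x * inverse z) * F x"

definition EqT :: "'v set \<Rightarrow> ('v \<Rightarrow> 'v \<Rightarrow> bool) \<Rightarrow> 'v \<Rightarrow> complex \<Rightarrow> ('v edge list \<Rightarrow> complex) set" where
  "EqT V adj v0 z = {F. (\<forall>x. \<not> treevert V adj v0 x \<longrightarrow> F x = 0) \<and>
      (\<forall>x. treevert V adj v0 x \<longrightarrow> SigmaT V adj v0 F x = RzT V adj v0 z F x)}"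

text \<open>Gamma = pi_1(G,v0), represented by reduced closed non-backtracking loops at v0\<close>
definition Gam :: "'v set \<Rightarrow> ('v \<Rightarrow> 'v \<Rightarrow> bool) \<Rightarrow> 'v \<Rightarrow> 'v edge list set" where
  "Gam V adj v0 = {l. treevert V adj v0 l \<and> pr v0 l = v0}"

text \<open>deck transformation of a loop on tree vertices: reduced concatenation\<close>
fun tact :: "'v edge list \<Rightarrow> 'v edge list \<Rightarrow> 'v edge list" where
  "tact l [] = l"
| "tact l (e # x) = (if l \<noteq> [] \<and> e = rev_edge (last l) then tact (butlast l) x else l @ e # x)"

definition invariantT :: "'v set \<Rightarrow> ('v \<Rightarrow> 'v \<Rightarrow> bool) \<Rightarrow> 'v \<Rightarrow> ('v edge list \<Rightarrow> complex) \<Rightarrow> bool" where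
  "invariantT V adj v0 F \<longleftrightarrow>
     (\<forall>l \<in> Gam V adj v0. \<forall>x. treevert V adj v0 x \<longrightarrow> F (tact l x) = F x)"

definition lift :: "'v set \<Rightarrow> ('v \<Rightarrow> 'v \<Rightarrow> bool) \<Rightarrow> 'v \<Rightarrow> ('v \<Rightarrow> complex) \<Rightarrow> 'v edge list \<Rightarrow> complex" where
  "lift V adj v0 f x = (if treevert V adj v0 x then f (pr v0 x) else 0)"

definition ends :: "'v set \<Rightarrow> ('v \<Rightarrow> 'v \<Rightarrow> bool) \<Rightarrow> 'v \<Rightarrow> (nat \<Rightarrow> 'v edge) set" where
  "ends V adj v0 = {p \<in> paths V adj. fst (p 0) = v0}"

definition codes0 :: "'v set \<Rightarrow> ('v \<Rightarrow> 'v \<Rightarrow> bool) \<Rightarrow> 'v \<Rightarrow> nat \<Rightarrow> 'v edge list set" where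
  "codes0 V adj v0 n = {c \<in> codes V adj n. fst (hd c) = v0}"

definition clopen :: "'v set \<Rightarrow> ('v \<Rightarrow> 'v \<Rightarrow> bool) \<Rightarrow> 'v \<Rightarrow> (nat \<Rightarrow> 'v edge) set \<Rightarrow> bool" where
  "clopen V adj v0 A \<longleftrightarrow> (\<exists>C. finite C \<and> (\<forall>c\<in>C. postal V adj c \<and> fst (hd c) = v0) \<and>
      (\<forall>c\<in>C. \<forall>d\<in>C. c \<noteq> d \<longrightarrow> district V adj c \<inter> district V adj d = {}) \<and> A = (\<Union>c\<in>C. district V adj c))"

definition FAend :: "'v set \<Rightarrow> ('v \<Rightarrow> 'v \<Rightarrow> bool) \<Rightarrow> 'v \<Rightarrow> ((nat \<Rightarrow> 'v edge) set \<Rightarrow> complex) set" where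
  "FAend V adj v0 = {\<nu>. (\<forall>A. \<not> clopen V adj v0 A \<longrightarrow> \<nu> A = 0) \<and>
     (\<forall>A B. clopen V adj v0 A \<longrightarrow> clopen V adj v0 B \<longrightarrow> A \<inter> B = {} \<longrightarrow> \<nu> (A \<union> B) = \<nu> A + \<nu> B)}"

text \<open>integral of a locally constant function: finite sum over a partition into districts
  of a level n on which f is constant\<close>
definition integ :: "'v set \<Rightarrow> ('v \<Rightarrow> 'v \<Rightarrow> bool) \<Rightarrow> 'v \<Rightarrow> ((nat \<Rightarrow> 'v edge) set \<Rightarrow> complex)
     \<Rightarrow> ((nat \<Rightarrow> 'v edge) \<Rightarrow> complex) \<Rightarrow> complex" where
  "integ V adj v0 \<nu> f = (let n = (SOME n. 0 < n \<and> (\<forall>c \<in> codes0 V adj v0 n.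
        \<forall>\<omega> \<in> district V adj c. \<forall>\<omega>' \<in> district V adj c. f \<omega> = f \<omega>'))
     in (\<Sum>c\<in>codes0 V adj v0 n. f (SOME \<omega>. \<omega> \<in> district V adj c) * \<nu> (district V adj c)))"

text \<open>(Res mu)(P_c) = mu(c), extended additively to clopen sets\<close>
definition Res :: "'v set \<Rightarrow> ('v \<Rightarrow> 'v \<Rightarrow> bool) \<Rightarrow> 'v \<Rightarrow> ('v edge list \<Rightarrow> complex)
     \<Rightarrow> (nat \<Rightarrow> 'v edge) set \<Rightarrow> complex" where
  "Res V adj v0 \<mu> A = (if clopen V adj v0 A then
     (let n = (SOME n. 0 < n \<and> (\<forall>c \<in> codes0 V adj v0 n.
          district V adj c \<subseteq> A \<or> district V adj c \<inter> A = {}))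
      in (\<Sum>c\<in>{c \<in> codes0 V adj v0 n. district V adj c \<subseteq> A}. \<mu> c))
   else 0)"

fun lcp :: "'a list \<Rightarrow> 'a list \<Rightarrow> nat" where
  "lcp (a # x) (b # y) = (if a = b then Suc (lcp x y) else 0)"
| "lcp _ _ = 0"

definition tdist :: "'a list \<Rightarrow> 'a list \<Rightarrow> int" where
  "tdist x y = int (length x) + int (length y) - 2 * int (lcp x y)"

text \<open>h_omega(x,y) = d(x,w) - d(y,w) with w on both rays from x and y to omega\<close>
definition horo :: "(nat \<Rightarrow> 'a) \<Rightarrow> 'a list \<Rightarrow> 'a list \<Rightarrow> int" where
  "horo \<omega> x y = (let w = map \<omega> [0..<max (length x) (length y)] in tdist x w - tdist y w)"

definition bracket :: "'a list \<Rightarrow> (nat \<Rightarrow> 'a) \<Rightarrow> int" where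
  "bracket x \<omega> = horo \<omega> [] x"

definition Poisson :: "'v set \<Rightarrow> ('v \<Rightarrow> 'v \<Rightarrow> bool) \<Rightarrow> 'v \<Rightarrow> complex
     \<Rightarrow> ((nat \<Rightarrow> 'v edge) set \<Rightarrow> complex) \<Rightarrow> 'v edge list \<Rightarrow> complex" where
  "Poisson V adj v0 z \<nu> x = (if treevert V adj v0 x
      then integ V adj v0 \<nu> (\<lambda>\<omega>. z powi bracket x \<omega>) else 0)"

text \<open>action of a loop (deck transformation) on ends: reduced concatenation l . omega\<close>
definition eact :: "'v edge list \<Rightarrow> (nat \<Rightarrow> 'v edge) \<Rightarrow> (nat \<Rightarrow> 'v edge)" where
  "eact l \<omega> = (let k = (LEAST k. k = length l \<or> \<omega> k \<noteq> rev_edge (l ! (length l - 1 - k)));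
                   r = length l - k
               in (\<lambda>i. if i < r then l ! i else \<omega> (i - r + k)))"

definition push :: "'v set \<Rightarrow> ('v \<Rightarrow> 'v \<Rightarrow> bool) \<Rightarrow> 'v \<Rightarrow> 'v edge list
     \<Rightarrow> ((nat \<Rightarrow> 'v edge) set \<Rightarrow> complex) \<Rightarrow> (nat \<Rightarrow> 'v edge) set \<Rightarrow> complex" where
  "push V adj v0 l \<nu> A = \<nu> {\<omega> \<in> ends V adj v0. eact l \<omega> \<in> A}"

definition cgam :: "complex \<Rightarrow> 'v edge list \<Rightarrow> (nat \<Rightarrow> 'v edge) \<Rightarrow> complex" where
  "cgam z l \<omega> = z powi horo \<omega> (tact l []) []"

definition twist :: "'v set \<Rightarrow> ('v \<Rightarrow> 'v \<Rightarrow> bool) \<Rightarrow> 'v \<Rightarrow> complex \<Rightarrow> 'v edge list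
     \<Rightarrow> ((nat \<Rightarrow> 'v edge) set \<Rightarrow> complex) \<Rightarrow> (nat \<Rightarrow> 'v edge) set \<Rightarrow> complex" where
  "twist V adj v0 z l \<nu> A = (if clopen V adj v0 A
     then integ V adj v0 (push V adj v0 l \<nu>) (\<lambda>\<omega>. ind A \<omega> * cgam z l \<omega>) else 0)"

definition FAinv :: "'v set \<Rightarrow> ('v \<Rightarrow> 'v \<Rightarrow> bool) \<Rightarrow> 'v \<Rightarrow> complex
     \<Rightarrow> ((nat \<Rightarrow> 'v edge) set \<Rightarrow> complex) set" where
  "FAinv V adj v0 z = {\<nu> \<in> FAend V adj v0. \<forall>l \<in> Gam V adj v0. twist V adj v0 z l \<nu> = \<nu>}"

definition lin_iso :: "(('a \<Rightarrow> complex) \<Rightarrow> ('b \<Rightarrow> complex)) \<Rightarrow> ('a \<Rightarrow> complex) set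
     \<Rightarrow> ('b \<Rightarrow> complex) set \<Rightarrow> bool" where
  "lin_iso \<phi> D C \<longleftrightarrow> bij_betw \<phi> D C \<and>
     (\<forall>x\<in>D. \<forall>y\<in>D. \<phi> (\<lambda>a. x a + y a) = (\<lambda>b. \<phi> x b + \<phi> y b)) \<and>
     (\<forall>c. \<forall>x\<in>D. \<phi> (\<lambda>a. c * x a) = (\<lambda>b. c * \<phi> x b))"

end

theory Submission
  imports Defs
begin

text \<open>
  An eigenmeasure of the transposed transfer operator is determined by its values on single edges,
  mu(c) = mu([last c]) / z^(|c|-1), so mu \<mapsto> f_mu identifies it with a solution of S g = z g.
  Summing over incoming edges turns such g into a solution of Sigma f = R_z f, with explicit inverse
  g(a,b) = (z f(a) - f(b)) / (z^2 - 1); this is where z^2 \<noteq> 1 is needed. Two vertices of the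
  covering tree over the same vertex of G differ by a deck transformation, so lifting identifies
  functions on G with invariant functions on the tree.

  On the boundary, translating a long postal code by a loop only changes a bounded initial segment,
  which makes Res mu twisted-invariant. Conversely, for a twisted-invariant nu the quantity
  z^|c| nu(P_c) depends only on the last edge of c (every edge is the last edge of a code from the
  base vertex), which produces the eigenmeasure restricting to nu. Finally, along a tree edge the
  Poisson transform satisfies P nu(x e) = P nu(x) / z + (z^(|x|+1) - z^(|x|-1)) nu(P_xe); by
  induction this gives the commuting square, and since the coefficient never vanishes it also gives
  injectivity of the Poisson transform, whose surjectivity then follows around the square.
\<close>

section \<open>Non-backtracking edge lists and reduced concatenation\<close>

lemma rev_rev_edge[simp]: "rev_edge (rev_edge e) = e"
  by (simp add: rev_edge_def)
lemma fst_rev_edge[simp]: "fst (rev_edge e) = snd e" and snd_rev_edge[simp]: "snd (rev_edge e) = fst e"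
  by (simp_all add: rev_edge_def)
lemma rev_edge_inj[simp]: "rev_edge a = rev_edge b \<longleftrightarrow> a = b"
  by (metis rev_rev_edge)

lemma turn_rev: "turn a b \<longleftrightarrow> turn (rev_edge b) (rev_edge a)"
  unfolding turn_def by (auto simp: rev_edge_def prod_eq_iff)

definition nonbacktracking :: "'v edge list \<Rightarrow> bool" where
  "nonbacktracking x \<longleftrightarrow> (\<forall>i. Suc i < length x \<longrightarrow> turn (x!i) (x!Suc i))"

fun walk :: "'v \<Rightarrow> 'v edge list \<Rightarrow> 'v \<Rightarrow> bool" where
  "walk s [] t \<longleftrightarrow> s = t"
| "walk s (e#x) t \<longleftrightarrow> fst e = s \<and> walk (snd e) x t"

definition rev_path :: "'v edge list \<Rightarrow> 'v edge list" where "rev_path x = rev (map rev_edge x)"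

lemma nonbacktracking_Nil[simp]: "nonbacktracking []" and nonbacktracking_single[simp]: "nonbacktracking [e]" by (auto simp: nonbacktracking_def)

lemma nonbacktracking_Cons: "nonbacktracking (e # x) \<longleftrightarrow> nonbacktracking x \<and> (x \<noteq> [] \<longrightarrow> turn e (hd x))"
  unfolding nonbacktracking_def by (cases x) (auto simp: nth_Cons split: nat.splits)

lemma nonbacktracking_append: "nonbacktracking (x @ y) \<longleftrightarrow> nonbacktracking x \<and> nonbacktracking y \<and> (x \<noteq> [] \<and> y \<noteq> [] \<longrightarrow> turn (last x) (hd y))"
  by (induction x) (auto simp: nonbacktracking_Cons)

lemma nonbacktracking_snoc: "nonbacktracking (x @ [e]) \<longleftrightarrow> nonbacktracking x \<and> (x \<noteq> [] \<longrightarrow> turn (last x) e)"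
  by (simp add: nonbacktracking_append)

lemma nonbacktracking_take: "nonbacktracking x \<Longrightarrow> nonbacktracking (take n x)"
  by (metis append_take_drop_id nonbacktracking_append)
lemma nonbacktracking_drop: "nonbacktracking x \<Longrightarrow> nonbacktracking (drop n x)"
  by (metis append_take_drop_id nonbacktracking_append)
lemma nonbacktracking_butlast: "nonbacktracking x \<Longrightarrow> nonbacktracking (butlast x)"
  by (simp add: butlast_conv_take nonbacktracking_take)
lemma nonbacktracking_tl: "nonbacktracking x \<Longrightarrow> nonbacktracking (tl x)"
  by (metis drop_Suc drop_0 nonbacktracking_drop)

lemma walk_append: "walk s (x @ y) t \<longleftrightarrow> (\<exists>u. walk s x u \<and> walk u y t)"
  by (induction x arbitrary: s) auto

lemma walk_snoc: "walk s (x @ [e]) t \<longleftrightarrow> walk s x (fst e) \<and> snd e = t"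
  by (auto simp: walk_append)

lemma walk_fun: "walk s x t \<Longrightarrow> walk s x t' \<Longrightarrow> t = t'"
  by (induction x arbitrary: s) auto

lemma walk_hd: "walk s x t \<Longrightarrow> x \<noteq> [] \<Longrightarrow> fst (hd x) = s"
  by (cases x) auto

lemma walk_last: "walk s x t \<Longrightarrow> x \<noteq> [] \<Longrightarrow> snd (last x) = t"
  by (induction x arbitrary: s) (auto split: if_splits)

lemma nonbacktracking_walk: "x \<noteq> [] \<Longrightarrow> nonbacktracking x \<Longrightarrow> walk (fst (hd x)) x (snd (last x))"
proof (induction x)
  case (Cons e x)
  then show ?case
    by (cases x) (auto simp: nonbacktracking_Cons turn_def)
qed simp

lemma rev_path_Nil[simp]: "rev_path [] = []" and rev_path_Cons: "rev_path (e#x) = rev_path x @ [rev_edge e]"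
  and rev_path_append: "rev_path (x @ y) = rev_path y @ rev_path x"
  by (auto simp: rev_path_def)
lemma rev_path_rev_path[simp]: "rev_path (rev_path x) = x"
  by (simp add: rev_path_def rev_map comp_def)
lemma length_rev_path[simp]: "length (rev_path x) = length x" by (simp add: rev_path_def)
lemma rev_path_nth: "i < length x \<Longrightarrow> rev_path x ! i = rev_edge (x ! (length x - 1 - i))"
  by (simp add: rev_path_def rev_nth)
lemma rev_path_eq_Nil[simp]: "rev_path x = [] \<longleftrightarrow> x = []" by (simp add: rev_path_def)

lemma walk_rev_path: "walk s x t \<Longrightarrow> walk t (rev_path x) s"
  by (induction x arbitrary: s) (auto simp: rev_path_Cons walk_snoc)

lemma nonbacktracking_rev_path: "nonbacktracking x \<Longrightarrow> nonbacktracking (rev_path x)"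
  unfolding nonbacktracking_def
proof (intro allI impI)
  fix i assume "\<forall>i. Suc i < length x \<longrightarrow> turn (x ! i) (x ! Suc i)" "Suc i < length (rev_path x)"
  then have "turn (x ! (length x - 1 - Suc i)) (x ! Suc (length x - 1 - Suc i))" by auto
  moreover have "Suc (length x - 1 - Suc i) = length x - 1 - i" using \<open>Suc i < length (rev_path x)\<close> by simp
  ultimately show "turn (rev_path x ! i) (rev_path x ! Suc i)"
    using \<open>Suc i < length (rev_path x)\<close> by (simp add: rev_path_nth) (blast intro: turn_rev[THEN iffD1])
qed

lemma set_rev_path: "set (rev_path x) = rev_edge ` set x" by (simp add: rev_path_def)

lemma tact_char:
  "\<exists>k \<le> length a. k \<le> length b \<and> tact a b = take (length a - k) a @ drop k b \<and>
     (\<forall>j<k. b!j = rev_edge (a!(length a - 1 - j))) \<and>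
     (k < length a \<and> k < length b \<longrightarrow> b!k \<noteq> rev_edge (a!(length a - 1 - k)))"
proof (induction a b rule: tact.induct)
  case (1 l)
  then show ?case by (intro exI[of _ 0]) auto
next
  case (2 l e x)
  show ?case
  proof (cases "l \<noteq> [] \<and> e = rev_edge (last l)")
    case True
    from "2.IH"[OF True] obtain k where k: "k \<le> length (butlast l)" "k \<le> length x"
      "tact (butlast l) x = take (length (butlast l) - k) (butlast l) @ drop k x"
      "\<forall>j<k. x!j = rev_edge (butlast l!(length (butlast l) - 1 - j))"
      "k < length (butlast l) \<and> k < length x \<longrightarrow> x!k \<noteq> rev_edge (butlast l!(length (butlast l) - 1 - k))"
      by blast
    have L: "length l \<ge> 1" using True by (cases l) auto
    show ?thesis
    proof (intro exI[of _ "Suc k"] conjI allI impI)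
      show "Suc k \<le> length l" using k L by auto
      show "Suc k \<le> length (e#x)" using k by auto
      have "take (length (butlast l) - k) (butlast l) = take (length l - Suc k) l"
        using L k by (simp add: take_butlast)
      then show "tact l (e # x) = take (length l - Suc k) l @ drop (Suc k) (e # x)"
        using True k(3) by simp
    next
      fix j assume j: "j < Suc k"
      show "(e # x) ! j = rev_edge (l ! (length l - 1 - j))"
      proof (cases j)
        case 0
        then show ?thesis using True by (simp add: last_conv_nth)
      next
        case (Suc j')
        then have "j' < k" using j by simp
        then show ?thesis using k(4) k(1) Suc L by (simp add: nth_butlast)
      qed
    next
      assume a: "Suc k < length l \<and> Suc k < length (e # x)"
      then show "(e # x) ! Suc k \<noteq> rev_edge (l ! (length l - 1 - Suc k))"
        using k(5) by (auto simp add: nth_butlast)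
    qed
  next
    case False
    then show ?thesis
      by (intro exI[of _ 0]) (auto simp: last_conv_nth)
  qed
qed

lemma nonbacktracking_first_uncancelled:
  assumes y: "nonbacktracking y" and canc: "\<forall>j<k. y!j = rev_edge (l!(length l - 1 - j))"
    and k: "0 < k" "k \<le> length l" "k < length y"
  shows "y ! k \<noteq> l ! (length l - k)"
proof -
  have "y ! (k - 1) = rev_edge (l ! (length l - k))" using canc k by (simp add: Suc_diff_le)
  moreover have "turn (y ! (k - 1)) (y ! k)"
    using y k by (metis Suc_pred' nonbacktracking_def)
  ultimately show ?thesis by (auto simp: turn_def)
qed

lemma tact_cancel: "tact (u @ rev_path w) (w @ t) = tact u t"
proof (induction w arbitrary: u t rule: rev_induct)
  case Nil
  then show ?case by simp
next
  case (snoc e w)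
  have "tact (u @ rev_path (w @ [e])) ((w @ [e]) @ t) = tact (u @ [rev_edge e] @ rev_path w) (w @ e # t)"
    by (simp add: rev_path_append rev_path_Cons)
  also have "\<dots> = tact (u @ [rev_edge e]) (e # t)"
    using snoc[of "u @ [rev_edge e]" "e # t"] by simp
  also have "\<dots> = tact u t" by simp
  finally show ?case .
qed

lemma tact_noncancel: "t = [] \<or> u = [] \<or> hd t \<noteq> rev_edge (last u) \<Longrightarrow> tact u t = u @ t"
  by (cases t) auto

section \<open>Paths and districts\<close>

locale finite_graph =
  fixes V :: "'v set" and adj :: "'v \<Rightarrow> 'v \<Rightarrow> bool"
  assumes finV: "finite V"
    and adjV: "\<And>u w. adj u w \<Longrightarrow> u \<in> V \<and> w \<in> V"
    and sym: "\<And>u w. adj u w \<Longrightarrow> adj w u"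
    and irrefl: "\<And>u. \<not> adj u u"
    and conn: "\<forall>u\<in>V. \<forall>w\<in>V. (u, w) \<in> {(a, b). adj a b}\<^sup>*"
    and deg2: "\<forall>v\<in>V. card (nbr V adj v) \<ge> 2"
begin

abbreviation "E \<equiv> edges V adj"

lemma in_E: "(u, w) \<in> E \<longleftrightarrow> adj u w"
  using adjV by (auto simp: edges_def)
lemma in_E': "e \<in> E \<longleftrightarrow> adj (fst e) (snd e)"
  using in_E by (cases e) auto
lemma E_rev: "e \<in> E \<Longrightarrow> rev_edge e \<in> E"
  by (auto simp: in_E' sym)
lemma E_V: "e \<in> E \<Longrightarrow> fst e \<in> V \<and> snd e \<in> V"
  by (auto simp: edges_def)
lemma finE: "finite E"
  by (rule finite_subset[of _ "V \<times> V"]) (auto simp: edges_def finV)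
lemma nbr_iff: "w \<in> nbr V adj v \<longleftrightarrow> adj v w"
  using adjV by (auto simp: nbr_def)
lemma fin_nbr: "finite (nbr V adj v)"
  by (auto simp: nbr_def finV)

lemma postal_iff: "postal V adj c \<longleftrightarrow> c \<noteq> [] \<and> set c \<subseteq> E \<and> nonbacktracking c"
  by (auto simp: postal_def nonbacktracking_def)

lemma exists_other_nbr: "v \<in> V \<Longrightarrow> \<exists>y\<in>nbr V adj v. y \<noteq> t"
proof (rule ccontr)
  assume v: "v \<in> V" and "\<not> (\<exists>y\<in>nbr V adj v. y \<noteq> t)"
  then have "nbr V adj v \<subseteq> {t}" by blast
  then have "card (nbr V adj v) \<le> 1" using card_mono[of "{t}" "nbr V adj v"] by simp
  then show False using deg2 v by force
qed

lemma succ_ex: "e \<in> E \<Longrightarrow> \<exists>e'. e' \<in> E \<and> turn e e'"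
proof -
  assume e: "e \<in> E"
  then obtain w where "w \<in> nbr V adj (snd e)" "w \<noteq> fst e" using exists_other_nbr E_V by blast
  then show ?thesis
    by (intro exI[of _ "(snd e, w)"]) (auto simp: in_E nbr_def turn_def rev_edge_def)
qed

definition succs :: "'v edge \<Rightarrow> 'v edge set" where "succs e = {e' \<in> E. turn e e'}"

lemma fin_succs: "finite (succs e)" using finE by (auto simp: succs_def)

definition next_edge :: "'v edge \<Rightarrow> 'v edge" where "next_edge e = (SOME e'. e' \<in> E \<and> turn e e')"

lemma next_edge_succ: "e \<in> E \<Longrightarrow> next_edge e \<in> E \<and> turn e (next_edge e)"
  unfolding next_edge_def by (rule someI_ex) (rule succ_ex)

lemma iter_next_edge: "e \<in> E \<Longrightarrow> (next_edge ^^ n) e \<in> E \<and> turn ((next_edge ^^ n) e) ((next_edge ^^ Suc n) e)"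
  by (induction n) (auto simp: next_edge_succ)

definition extend_path :: "'v edge list \<Rightarrow> nat \<Rightarrow> 'v edge" where
  "extend_path c i = (if i < length c - 1 then c ! i else (next_edge ^^ (i - (length c - 1))) (last c))"

lemma paths_iff: "p \<in> paths V adj \<longleftrightarrow> (\<forall>i. p i \<in> E \<and> turn (p i) (p (Suc i)))"
  by (simp add: paths_def)

lemma district_iff: "p \<in> district V adj c \<longleftrightarrow> p \<in> paths V adj \<and> map p [0..<length c] = c"
proof -
  have "map p [0..<length c] = c \<longleftrightarrow> (\<forall>i<length c. p i = c!i)"
  proof
    assume "map p [0..<length c] = c"
    then show "\<forall>i<length c. p i = c!i" by (metis add_0 diff_zero nth_map_upt)
  next
    assume "\<forall>i<length c. p i = c!i"
    then show "map p [0..<length c] = c" by (intro nth_equalityI) auto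
  qed
  then show ?thesis by (simp add: district_def)
qed

lemma extend_path_district: assumes c: "postal V adj c" shows "extend_path c \<in> district V adj c"
proof -
  have cne: "c \<noteq> []" and cE: "set c \<subseteq> E" and cnb: "nonbacktracking c" using c by (auto simp: postal_iff)
  have lastE: "last c \<in> E" using cne cE by auto
  have eqc: "extend_path c i = c ! i" if "i < length c" for i
  proof (cases "i < length c - 1")
    case False
    then have "i = length c - 1" using that by simp
    then show ?thesis using cne by (simp add: extend_path_def last_conv_nth)
  qed (simp add: extend_path_def)
  have "extend_path c \<in> paths V adj"
    unfolding paths_iff
  proof
    fix i
    show "extend_path c i \<in> E \<and> turn (extend_path c i) (extend_path c (Suc i))"
    proof (cases "Suc i < length c")
      case True
      then show ?thesis using eqc[of i] eqc[of "Suc i"] cE cnb by (auto simp: nonbacktracking_def)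
    next
      case False
      then have "\<not> i < length c - 1" by simp
      then have "extend_path c i = (next_edge ^^ (i - (length c - 1))) (last c)"
        by (simp add: extend_path_def)
      moreover have "\<not> Suc i < length c - 1" using False by simp
      moreover have "extend_path c (Suc i) = (next_edge ^^ Suc (i - (length c - 1))) (last c)"
        using False cne \<open>\<not> Suc i < length c - 1\<close> by (simp add: extend_path_def Suc_diff_le del: funpow.simps)
      ultimately show ?thesis using iter_next_edge[OF lastE] by simp
    qed
  qed
  then show ?thesis using eqc by (simp add: district_def)
qed

lemma district_ne: "postal V adj c \<Longrightarrow> district V adj c \<noteq> {}"
  using extend_path_district by blast

definition district_rep :: "'v edge list \<Rightarrow> nat \<Rightarrow> 'v edge" where
  "district_rep c = (SOME p. p \<in> district V adj c)"

lemma district_rep_in: "postal V adj c \<Longrightarrow> district_rep c \<in> district V adj c"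
  using district_ne[of c] unfolding district_rep_def by (simp add: some_in_eq)

lemma district_sub_paths: "district V adj c \<subseteq> paths V adj" by (auto simp: district_def)

lemma district_mono: assumes "take (length c) d = c" shows "district V adj d \<subseteq> district V adj c"
proof
  fix p assume p: "p \<in> district V adj d"
  have len: "length c \<le> length d" using arg_cong[OF assms, of length] by simp
  have "\<forall>i<length c. c!i = d!i" using assms by (metis nth_take)
  then show "p \<in> district V adj c" using p len by (auto simp: district_def)
qed

lemma postal_snoc: "postal V adj c \<Longrightarrow> e \<in> E \<Longrightarrow> turn (last c) e \<Longrightarrow> postal V adj (c @ [e])"
  by (auto simp: postal_iff nonbacktracking_snoc)

lemma postal_snoc_iff: "c \<noteq> [] \<Longrightarrow> postal V adj (c @ [e]) \<longleftrightarrow> postal V adj c \<and> e \<in> succs (last c)"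
  by (auto simp: postal_iff nonbacktracking_snoc succs_def)

lemma district_snoc: assumes "postal V adj c"
  shows "district V adj c = (\<Union>e\<in>succs (last c). district V adj (c @ [e]))"
proof
  show "district V adj c \<subseteq> (\<Union>e\<in>succs (last c). district V adj (c @ [e]))"
  proof
    fix p assume p: "p \<in> district V adj c"
    have cne: "c \<noteq> []" using assms by (simp add: postal_iff)
    have "p (length c - 1) = last c" using p cne by (simp add: district_def last_conv_nth)
    moreover have "turn (p (length c - 1)) (p (length c))" "p (length c) \<in> E"
      using p cne unfolding district_def paths_iff by (metis (no_types, lifting) Suc_pred' length_greater_0_conv mem_Collect_eq)+
    ultimately have "p (length c) \<in> succs (last c)" by (simp add: succs_def)
    moreover have "p \<in> district V adj (c @ [p (length c)])"
      using p by (auto simp: district_def nth_append less_Suc_eq)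
    ultimately show "p \<in> (\<Union>e\<in>succs (last c). district V adj (c @ [e]))" by blast
  qed
next
  show "(\<Union>e\<in>succs (last c). district V adj (c @ [e])) \<subseteq> district V adj c"
  proof (rule UN_least)
    fix e show "district V adj (c @ [e]) \<subseteq> district V adj c" by (rule district_mono) simp
  qed
qed

lemma district_disj: "length c = length d \<Longrightarrow> c \<noteq> d \<Longrightarrow> district V adj c \<inter> district V adj d = {}"
  by (auto simp: district_iff)

lemma district_prefix: "p \<in> paths V adj \<Longrightarrow> p \<in> district V adj (map p [0..<n])"
  by (simp add: district_iff)

lemma postal_prefix: "p \<in> paths V adj \<Longrightarrow> n > 0 \<Longrightarrow> postal V adj (map p [0..<n])"
  by (auto simp: postal_def paths_iff)

lemma tact_walk:
  "walk s a u \<Longrightarrow> walk u b t \<Longrightarrow> set a \<subseteq> E \<Longrightarrow> set b \<subseteq> E \<Longrightarrow> nonbacktracking a \<Longrightarrow> nonbacktracking b \<Longrightarrow>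
   walk s (tact a b) t \<and> set (tact a b) \<subseteq> E \<and> nonbacktracking (tact a b)"
proof (induction a b arbitrary: u rule: tact.induct)
  case (1 l)
  then show ?case by simp
next
  case (2 l e x)
  show ?case
  proof (cases "l \<noteq> [] \<and> e = rev_edge (last l)")
    case True
    have wl: "walk s (butlast l @ [last l]) u" using "2.prems"(1) True by simp
    then have w1: "walk s (butlast l) (fst (last l))" by (simp only: walk_snoc)
    have w2: "walk (fst (last l)) x t" using "2.prems"(2) True by auto
    have "set (butlast l) \<subseteq> E" using "2.prems"(3) by (meson in_set_butlastD subset_iff)
    moreover have "nonbacktracking (butlast l)" using "2.prems"(5) by (rule nonbacktracking_butlast)
    moreover have "nonbacktracking x" using "2.prems"(6) by (simp add: nonbacktracking_Cons)
    ultimately show ?thesis using "2.IH"[OF True w1 w2] "2.prems" True by simp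
  next
    case False
    have fe: "fst e = u" using "2.prems"(2) by simp
    have "l \<noteq> [] \<Longrightarrow> snd (last l) = u" by (rule walk_last[OF "2.prems"(1)])
    then have "l \<noteq> [] \<Longrightarrow> turn (last l) e" using False fe by (auto simp: turn_def)
    then have "nonbacktracking (l @ e # x)" using "2.prems"(5,6) by (simp add: nonbacktracking_append)
    moreover have "walk s (l @ e # x) t" using "2.prems"(1,2) by (auto simp: walk_append)
    ultimately show ?thesis using False "2.prems"(3,4) by auto
  qed
qed

end

section \<open>Levels of postal codes and finitely additive set functions on the boundary\<close>

locale rooted_graph = finite_graph + fixes v0 assumes v0: "v0 \<in> V"
begin

abbreviation "C0 \<equiv> codes0 V adj v0"
abbreviation "P \<equiv> district V adj"
abbreviation "ENDS \<equiv> ends V adj v0"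

lemma codes0_iff: "c \<in> C0 n \<longleftrightarrow> postal V adj c \<and> length c = n \<and> fst (hd c) = v0"
  by (simp add: codes0_def codes_def)

lemma fin_codes0: "finite (C0 n)"
proof -
  have "C0 n \<subseteq> {xs. set xs \<subseteq> E \<and> length xs = n}" by (auto simp: codes0_iff postal_iff)
  then show ?thesis using finite_lists_length_eq[OF finE] finite_subset by blast
qed

lemma fin_codes: "finite (codes V adj n)"
proof -
  have "codes V adj n \<subseteq> {xs. set xs \<subseteq> E \<and> length xs = n}" by (auto simp: codes_def postal_iff)
  then show ?thesis using finite_lists_length_eq[OF finE] finite_subset by blast
qed

lemma codes0_Suc: assumes "n \<ge> 1"
  shows "C0 (Suc n) = (\<lambda>(c, e). c @ [e]) ` Sigma (C0 n) (\<lambda>c. succs (last c))"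
proof -
  have A: "d \<in> (\<lambda>(c, e). c @ [e]) ` Sigma (C0 n) (\<lambda>c. succs (last c))" if d: "d \<in> C0 (Suc n)" for d
  proof -
    have "d \<noteq> []" using d by (auto simp: codes0_iff)
    then obtain c e where ce: "d = c @ [e]" by (metis rev_exhaust)
    then have "c \<noteq> []" using d assms by (auto simp: codes0_iff)
    then show ?thesis using d ce by (auto simp: codes0_iff postal_snoc_iff image_iff)
  qed
  have B: "c @ [e] \<in> C0 (Suc n)" if "c \<in> C0 n" "e \<in> succs (last c)" for c e
  proof -
    have "postal V adj c" "length c = n" "fst (hd c) = v0" using that by (auto simp: codes0_iff)
    moreover have "c \<noteq> []" using \<open>postal V adj c\<close> by (simp add: postal_iff)
    moreover have "postal V adj (c @ [e])" using postal_snoc \<open>postal V adj c\<close> that(2) by (simp add: succs_def)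
    ultimately show ?thesis by (simp add: codes0_iff)
  qed
  show ?thesis
    by (intro equalityI subsetI) (use A B in auto)
qed

lemma sum_codes0_Suc: assumes "n \<ge> 1"
  shows "(\<Sum>d\<in>C0 (Suc n). F d) = (\<Sum>c\<in>C0 n. \<Sum>e\<in>succs (last c). F (c @ [e]))"
proof -
  have inj: "inj_on (\<lambda>(c, e). c @ [e]) (Sigma (C0 n) (\<lambda>c. succs (last c)))"
    by (auto simp: inj_on_def)
  have "(\<Sum>d\<in>C0 (Suc n). F d) = (\<Sum>x\<in>Sigma (C0 n) (\<lambda>c. succs (last c)). F ((\<lambda>(c, e). c @ [e]) x))"
    unfolding codes0_Suc[OF assms] by (rule sum.reindex[OF inj, unfolded comp_def])
  also have "\<dots> = (\<Sum>c\<in>C0 n. \<Sum>e\<in>succs (last c). F (c @ [e]))"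
    by (simp add: sum.Sigma fin_codes0 fin_succs split_def)
  finally show ?thesis .
qed

lemma level_sum:
  assumes "n \<ge> 1" "n \<le> m"
    and step: "\<And>k c. n \<le> k \<Longrightarrow> c \<in> C0 k \<Longrightarrow> F c = (\<Sum>e\<in>succs (last c). F (c @ [e]))"
  shows "(\<Sum>d\<in>C0 m. F d) = (\<Sum>c\<in>C0 n. F c)"
  using assms(2)
proof (induction m rule: dec_induct)
  case (step k)
  have "(\<Sum>d\<in>C0 (Suc k). F d) = (\<Sum>c\<in>C0 k. \<Sum>e\<in>succs (last c). F (c @ [e]))"
    using sum_codes0_Suc[of k F] step.hyps assms(1) by simp
  also have "\<dots> = (\<Sum>c\<in>C0 k. F c)"
    by (intro sum.cong refl) (erule assms(3)[OF step.hyps(1), symmetric])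
  finally show ?case using step.IH by simp
qed simp

lemma district_ends: "c \<in> C0 n \<Longrightarrow> P c \<subseteq> ENDS"
  by (auto simp: codes0_iff ends_def district_def postal_iff hd_conv_nth)

lemma ends_prefix: "p \<in> ENDS \<Longrightarrow> n > 0 \<Longrightarrow> map p [0..<n] \<in> C0 n \<and> p \<in> P (map p [0..<n])"
  by (auto simp: codes0_iff ends_def postal_prefix district_prefix hd_map)

abbreviation "CLOPEN \<equiv> clopen V adj v0"

lemma C0_pos: "c \<in> C0 n \<Longrightarrow> n \<ge> 1"
  by (auto simp: codes0_iff postal_iff Suc_le_eq)

lemma C0_self: "postal V adj c \<Longrightarrow> fst (hd c) = v0 \<Longrightarrow> c \<in> C0 (length c)"
  by (simp add: codes0_iff)

lemma district_rep_C0: "c \<in> C0 n \<Longrightarrow> district_rep c \<in> P c"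
  by (simp add: codes0_iff district_rep_in)

lemma P_ne: "c \<in> C0 n \<Longrightarrow> P c \<noteq> {}"
  using district_rep_C0 by blast

lemma clopen_district: "c \<in> C0 n \<Longrightarrow> CLOPEN (P c)"
  unfolding clopen_def by (intro exI[of _ "{c}"]) (auto simp: codes0_iff)

lemma clopen_empty: "CLOPEN {}"
  unfolding clopen_def by (intro exI[of _ "{}"]) auto

lemma clopen_sub_ends: "CLOPEN A \<Longrightarrow> A \<subseteq> ENDS"
  unfolding clopen_def using district_ends C0_self by fastforce

lemma clopen_Un: assumes "CLOPEN A" "CLOPEN B" "A \<inter> B = {}" shows "CLOPEN (A \<union> B)"
proof -
  obtain CA where CA: "finite CA" "\<forall>c\<in>CA. postal V adj c \<and> fst (hd c) = v0"
    "\<forall>c\<in>CA. \<forall>d\<in>CA. c \<noteq> d \<longrightarrow> P c \<inter> P d = {}" "A = (\<Union>c\<in>CA. P c)"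
    using assms(1) unfolding clopen_def by blast
  obtain CB where CB: "finite CB" "\<forall>c\<in>CB. postal V adj c \<and> fst (hd c) = v0"
    "\<forall>c\<in>CB. \<forall>d\<in>CB. c \<noteq> d \<longrightarrow> P c \<inter> P d = {}" "B = (\<Union>c\<in>CB. P c)"
    using assms(2) unfolding clopen_def by blast
  have "\<forall>c\<in>CA \<union> CB. \<forall>d\<in>CA \<union> CB. c \<noteq> d \<longrightarrow> P c \<inter> P d = {}"
  proof (intro ballI impI)
    fix c d assume "c \<in> CA \<union> CB" "d \<in> CA \<union> CB" "c \<noteq> d"
    then have "c \<in> CA \<and> d \<in> CA \<or> c \<in> CB \<and> d \<in> CB \<or> (P c \<subseteq> A \<and> P d \<subseteq> B) \<or> (P c \<subseteq> B \<and> P d \<subseteq> A)"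
      using CA(4) CB(4) by blast
    then show "P c \<inter> P d = {}" using CA(3) CB(3) assms(3) \<open>c \<noteq> d\<close> by (elim disjE) blast+
  qed
  then show ?thesis unfolding clopen_def using CA CB
    by (intro exI[of _ "CA \<union> CB"]) auto
qed

abbreviation "FAE \<equiv> FAend V adj v0"

lemma FAE_empty: "\<nu> \<in> FAE \<Longrightarrow> \<nu> {} = 0"
proof -
  assume a: "\<nu> \<in> FAE"
  have "\<nu> ({} \<union> {}) = \<nu> {} + \<nu> {}" using a clopen_empty unfolding FAend_def by blast
  then show ?thesis by simp
qed

lemma FAE_add: "\<nu> \<in> FAE \<Longrightarrow> CLOPEN A \<Longrightarrow> CLOPEN B \<Longrightarrow> A \<inter> B = {} \<Longrightarrow> \<nu> (A \<union> B) = \<nu> A + \<nu> B"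
  unfolding FAend_def by blast

lemma FAE_Union:
  assumes nu: "\<nu> \<in> FAE" and "finite C" and "\<forall>c\<in>C. postal V adj c \<and> fst (hd c) = v0"
    and "\<forall>c\<in>C. \<forall>d\<in>C. c \<noteq> d \<longrightarrow> P c \<inter> P d = {}"
  shows "\<nu> (\<Union>c\<in>C. P c) = (\<Sum>c\<in>C. \<nu> (P c))"
  using assms(2-)
proof (induction C rule: finite_induct)
  case empty
  then show ?case using FAE_empty[OF nu] by simp
next
  case (insert c C)
  have cl1: "CLOPEN (P c)" using insert.prems(1) clopen_district C0_self by blast
  have cl2: "CLOPEN (\<Union>c\<in>C. P c)" unfolding clopen_def using insert.prems insert.hyps
    by (intro exI[of _ C]) auto
  have "\<forall>d\<in>C. P c \<inter> P d = {}" using insert.prems(2) insert.hyps(2) by (metis insertCI)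
  then have dis: "P c \<inter> (\<Union>c\<in>C. P c) = {}" by blast
  have "\<nu> (\<Union>c\<in>insert c C. P c) = \<nu> (P c \<union> (\<Union>c\<in>C. P c))" by simp
  also have "\<dots> = \<nu> (P c) + \<nu> (\<Union>c\<in>C. P c)" by (rule FAE_add[OF nu cl1 cl2 dis])
  also have "\<nu> (\<Union>c\<in>C. P c) = (\<Sum>c\<in>C. \<nu> (P c))" by (rule insert.IH) (use insert.prems in auto)
  finally show ?case using insert.hyps by simp
qed

definition district_additive where
  "district_additive (\<nu> :: _ \<Rightarrow> complex) \<longleftrightarrow> (\<forall>n c. c \<in> codes0 V adj v0 n \<longrightarrow> \<nu> (district V adj c) = (\<Sum>e\<in>succs (last c). \<nu> (district V adj (c @ [e]))))"

lemma FAE_DA: assumes nu: "\<nu> \<in> FAE" shows "district_additive \<nu>"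
  unfolding district_additive_def
proof (intro allI impI)
  fix n c assume c: "c \<in> C0 n"
  have pc: "postal V adj c" "fst (hd c) = v0" "c \<noteq> []" using c by (auto simp: codes0_iff postal_iff)
  have "P c = (\<Union>e\<in>succs (last c). P (c @ [e]))" by (rule district_snoc[OF pc(1)])
  also have "\<dots> = (\<Union>d\<in>(\<lambda>e. c @ [e]) ` succs (last c). P d)" by simp
  finally have "\<nu> (P c) = \<nu> (\<Union>d\<in>(\<lambda>e. c @ [e]) ` succs (last c). P d)" by simp
  also have "\<dots> = (\<Sum>d\<in>(\<lambda>e. c @ [e]) ` succs (last c). \<nu> (P d))"
  proof (rule FAE_Union[OF nu])
    show "finite ((\<lambda>e. c @ [e]) ` succs (last c))" using fin_succs by simp
    show "\<forall>d\<in>(\<lambda>e. c @ [e]) ` succs (last c). postal V adj d \<and> fst (hd d) = v0"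
      using pc by (auto simp: postal_snoc_iff)
    show "\<forall>d\<in>(\<lambda>e. c @ [e]) ` succs (last c). \<forall>d'\<in>(\<lambda>e. c @ [e]) ` succs (last c). d \<noteq> d' \<longrightarrow> P d \<inter> P d' = {}"
      by (auto intro!: district_disj)
  qed
  also have "\<dots> = (\<Sum>e\<in>succs (last c). \<nu> (P (c @ [e])))"
    by (subst sum.reindex) (auto simp: inj_on_def)
  finally show "\<nu> (P c) = (\<Sum>e\<in>succs (last c). \<nu> (P (c @ [e])))" .
qed

definition const_level where
  "const_level f k \<longleftrightarrow> (\<forall>c\<in>codes0 V adj v0 k. \<forall>\<omega>\<in>district V adj c. \<forall>\<omega>'\<in>district V adj c. f \<omega> = f \<omega>')"

lemma take_C0: "d \<in> C0 m \<Longrightarrow> 1 \<le> k \<Longrightarrow> k \<le> m \<Longrightarrow> take k d \<in> C0 k \<and> P d \<subseteq> P (take k d)"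
proof -
  assume d: "d \<in> C0 m" and k: "1 \<le> k" "k \<le> m"
  have "postal V adj (take k d)" using d k by (auto simp: codes0_iff postal_iff nonbacktracking_take dest: in_set_takeD)
  moreover have "fst (hd (take k d)) = v0" using d k by (auto simp: codes0_iff)
  moreover have "length (take k d) = k" using d k by (auto simp: codes0_iff)
  moreover have "P d \<subseteq> P (take k d)" using d k by (intro district_mono) (auto simp: codes0_iff)
  ultimately show ?thesis by (simp add: codes0_iff)
qed

lemma const_level_mono: "const_level f k \<Longrightarrow> 1 \<le> k \<Longrightarrow> k \<le> m \<Longrightarrow> const_level f m"
  unfolding const_level_def using take_C0 by blast

lemma sum_level_const:
  assumes nu: "district_additive \<nu>" and k: "1 \<le> k" "k \<le> m" and f: "const_level f k"
  shows "(\<Sum>c\<in>C0 m. f (district_rep c) * \<nu> (P c)) = (\<Sum>c\<in>C0 k. f (district_rep c) * \<nu> (P c))"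
proof (rule level_sum[OF k])
  fix j c assume j: "k \<le> j" and c: "c \<in> C0 j"
  have fj: "const_level f j" by (rule const_level_mono[OF f k(1) j])
  have feq: "f (district_rep (c @ [e])) = f (district_rep c)" if e: "e \<in> succs (last c)" for e
  proof -
    have c': "c @ [e] \<in> C0 (Suc j)" using c e codes0_Suc[of j] k j by auto
    have "district_rep (c @ [e]) \<in> P c" using district_rep_C0[OF c'] district_mono[of c "c @ [e]"] by auto
    then show ?thesis using fj c district_rep_C0[OF c] unfolding const_level_def by blast
  qed
  have "(\<Sum>e\<in>succs (last c). f (district_rep (c @ [e])) * \<nu> (P (c @ [e]))) = (\<Sum>e\<in>succs (last c). f (district_rep c) * \<nu> (P (c @ [e])))"
    by (rule sum.cong) (simp_all add: feq)
  also have "\<dots> = f (district_rep c) * (\<Sum>e\<in>succs (last c). \<nu> (P (c @ [e])))"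
    by (rule sum_distrib_left[symmetric])
  also have "\<dots> = f (district_rep c) * \<nu> (P c)" using nu c unfolding district_additive_def by metis
  finally show "f (district_rep c) * \<nu> (P c) = (\<Sum>e\<in>succs (last c). f (district_rep (c @ [e])) * \<nu> (P (c @ [e])))" by simp
qed

lemma integ_level:
  assumes nu: "district_additive \<nu>" and M: "1 \<le> M" and f: "const_level f M"
  shows "integ V adj v0 \<nu> f = (\<Sum>c\<in>C0 M. f (district_rep c) * \<nu> (P c))"
proof -
  let ?Q = "\<lambda>n. 0 < n \<and> (\<forall>c \<in> codes0 V adj v0 n.
        \<forall>\<omega> \<in> district V adj c. \<forall>\<omega>' \<in> district V adj c. f \<omega> = f \<omega>')"
  define N where "N = Eps ?Q"
  have ex: "?Q M" using M f unfolding const_level_def by (intro conjI) (linarith, assumption)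
  have "?Q N" unfolding N_def by (rule someI[of ?Q M, OF ex])
  then have N: "1 \<le> N" "const_level f N" unfolding const_level_def by (linarith, blast)
  have "integ V adj v0 \<nu> f = (\<Sum>c\<in>C0 N. f (district_rep c) * \<nu> (P c))"
    unfolding integ_def N_def[symmetric] district_rep_def by simp
  also have "\<dots> = (\<Sum>c\<in>C0 (max N M). f (district_rep c) * \<nu> (P c))"
    using sum_level_const[OF nu N(1) _ N(2), of "max N M"] by simp
  also have "\<dots> = (\<Sum>c\<in>C0 M. f (district_rep c) * \<nu> (P c))"
    using sum_level_const[OF nu M _ f, of "max N M"] by simp
  finally show ?thesis .
qed

definition decided where
  "decided A k \<longleftrightarrow> (\<forall>c\<in>codes0 V adj v0 k. district V adj c \<subseteq> A \<or> district V adj c \<inter> A = {})"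

lemma decided_mono: "decided A k \<Longrightarrow> 1 \<le> k \<Longrightarrow> k \<le> m \<Longrightarrow> decided A m"
  unfolding decided_def using take_C0 by blast

lemma clopen_decided: assumes "CLOPEN A" shows "\<exists>k\<ge>1. decided A k"
proof -
  obtain C where C: "finite C" "\<forall>c\<in>C. postal V adj c \<and> fst (hd c) = v0"
    "A = (\<Union>c\<in>C. P c)"
    using assms unfolding clopen_def by blast
  define k where "k = max 1 (Max (insert 0 (length ` C)))"
  have kc: "length c \<le> k" if "c \<in> C" for c
    using that C(1) unfolding k_def by (meson Max_ge finite_imageI finite_insert image_eqI insertCI le_max_iff_disj)
  have "decided A k" unfolding decided_def
  proof
    fix d assume d: "d \<in> C0 k"
    show "P d \<subseteq> A \<or> P d \<inter> A = {}"
    proof (cases "\<exists>c\<in>C. take (length c) d = c")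
      case True
      then obtain c where "c \<in> C" "take (length c) d = c" by blast
      then show ?thesis using district_mono C(3) by blast
    next
      case False
      have "P d \<inter> P c = {}" if c: "c \<in> C" for c
      proof (rule ccontr)
        assume "P d \<inter> P c \<noteq> {}"
        then obtain p where p: "p \<in> P d" "p \<in> P c" by blast
        have "take (length c) d = c"
          using p kc[OF c] d unfolding district_iff codes0_iff
          by (metis take_map take_upt add_0 min.absorb1)
        then show False using False c by blast
      qed
      then show ?thesis using C(3) by blast
    qed
  qed
  then show ?thesis unfolding k_def by (intro exI[of _ k]) (auto simp: k_def)
qed

lemma clopen_as_union:
  assumes "CLOPEN A" "1 \<le> k" "decided A k"
  shows "A = (\<Union>c\<in>{c\<in>C0 k. P c \<subseteq> A}. P c)"
proof
  show "A \<subseteq> (\<Union>c\<in>{c\<in>C0 k. P c \<subseteq> A}. P c)"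
  proof
    fix p assume p: "p \<in> A"
    then have pe: "p \<in> ENDS" using clopen_sub_ends assms(1) by blast
    have "map p [0..<k] \<in> C0 k" "p \<in> P (map p [0..<k])" using ends_prefix[OF pe] assms(2) by auto
    moreover then have "P (map p [0..<k]) \<subseteq> A" using assms(3) p unfolding decided_def by blast
    ultimately show "p \<in> (\<Union>c\<in>{c\<in>C0 k. P c \<subseteq> A}. P c)" by blast
  qed
qed blast

lemma FAE_level:
  assumes nu: "\<nu> \<in> FAE" and "CLOPEN A" "1 \<le> k" "decided A k"
  shows "\<nu> A = (\<Sum>c\<in>{c\<in>C0 k. P c \<subseteq> A}. \<nu> (P c))"
proof -
  have "\<nu> A = \<nu> (\<Union>c\<in>{c\<in>C0 k. P c \<subseteq> A}. P c)" using clopen_as_union[OF assms(2-)] by simp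
  also have "\<dots> = (\<Sum>c\<in>{c\<in>C0 k. P c \<subseteq> A}. \<nu> (P c))"
  proof (rule FAE_Union[OF nu])
    show "finite {c\<in>C0 k. P c \<subseteq> A}" using fin_codes0[of k] by simp
  qed (auto simp: codes0_iff intro!: district_disj)
  finally show ?thesis .
qed

lemma FAE_eqI:
  assumes "\<nu> \<in> FAE" "\<nu>' \<in> FAE" and eq: "\<And>n c. c \<in> C0 n \<Longrightarrow> \<nu> (P c) = \<nu>' (P c)"
  shows "\<nu> = \<nu>'"
proof
  fix A
  show "\<nu> A = \<nu>' A"
  proof (cases "CLOPEN A")
    case True
    then obtain k where "1 \<le> k" "decided A k" using clopen_decided by blast
    then show ?thesis unfolding FAE_level[OF assms(1) True \<open>1 \<le> k\<close> \<open>decided A k\<close>] FAE_level[OF assms(2) True \<open>1 \<le> k\<close> \<open>decided A k\<close>]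
      by (intro sum.cong refl) (auto intro: eq)
  next
    case False
    then show ?thesis using assms(1,2) unfolding FAend_def by simp
  qed
qed

abbreviation "FAP \<equiv> FA V adj"
abbreviation "RES \<equiv> Res V adj v0"

lemma FA_step: "\<mu> \<in> FAP \<Longrightarrow> postal V adj c \<Longrightarrow> \<mu> c = (\<Sum>e\<in>succs (last c). \<mu> (c @ [e]))"
  by (simp add: FA_def succs_def)

lemma FA_zero: "\<mu> \<in> FAP \<Longrightarrow> \<not> postal V adj c \<Longrightarrow> \<mu> c = 0"
  by (simp add: FA_def)

lemma sum_level_dec:
  assumes mu: "\<mu> \<in> FAP" and k: "1 \<le> k" "k \<le> m" and A: "decided A k"
  shows "(\<Sum>c\<in>{c\<in>C0 m. P c \<subseteq> A}. \<mu> c) = (\<Sum>c\<in>{c\<in>C0 k. P c \<subseteq> A}. \<mu> c)"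
proof -
  let ?F = "\<lambda>c. if P c \<subseteq> A then \<mu> c else 0"
  have "(\<Sum>c\<in>C0 m. ?F c) = (\<Sum>c\<in>C0 k. ?F c)"
  proof (rule level_sum[OF k])
    fix j c assume j: "k \<le> j" and c: "c \<in> C0 j"
    have dj: "decided A j" by (rule decided_mono[OF A k(1) j])
    have ce: "c @ [e] \<in> C0 (Suc j)" if "e \<in> succs (last c)" for e
      using c that codes0_Suc[of j] k j by auto
    have sub: "P (c @ [e]) \<subseteq> P c" for e by (rule district_mono) simp
    show "?F c = (\<Sum>e\<in>succs (last c). ?F (c @ [e]))"
    proof (cases "P c \<subseteq> A")
      case True
      have "P (c @ [e]) \<subseteq> A" for e using sub[of e] True by blast
      then have "?F (c @ [e]) = \<mu> (c @ [e])" for e by simp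
      then show ?thesis using True FA_step[OF mu] c by (simp add: codes0_iff)
    next
      case False
      then have dis: "P c \<inter> A = {}" using dj c unfolding decided_def by blast
      have "?F (c @ [e]) = 0" if "e \<in> succs (last c)" for e
        using P_ne[OF ce[OF that]] sub[of e] dis by auto
      then show ?thesis using False by simp
    qed
  qed
  then show ?thesis by (simp add: sum.inter_filter fin_codes0)
qed

lemma Res_level:
  assumes mu: "\<mu> \<in> FAP" and A: "CLOPEN A" and k: "1 \<le> k" "decided A k"
  shows "RES \<mu> A = (\<Sum>c\<in>{c\<in>C0 k. P c \<subseteq> A}. \<mu> c)"
proof -
  let ?Q = "\<lambda>n. 0 < n \<and> (\<forall>c \<in> codes0 V adj v0 n. district V adj c \<subseteq> A \<or> district V adj c \<inter> A = {})"
  define N where "N = Eps ?Q"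
  have ex: "?Q k" using k unfolding decided_def by (intro conjI) (linarith, assumption)
  have "?Q N" unfolding N_def by (rule someI[of ?Q k, OF ex])
  then have N: "1 \<le> N" "decided A N" unfolding decided_def by (linarith, blast)
  have "RES \<mu> A = (\<Sum>c\<in>{c\<in>C0 N. P c \<subseteq> A}. \<mu> c)"
    using A unfolding Res_def N_def[symmetric] by simp
  also have "\<dots> = (\<Sum>c\<in>{c\<in>C0 (max N k). P c \<subseteq> A}. \<mu> c)"
    using sum_level_dec[OF mu N(1) _ N(2), of "max N k"] by simp
  also have "\<dots> = (\<Sum>c\<in>{c\<in>C0 k. P c \<subseteq> A}. \<mu> c)"
    using sum_level_dec[OF mu k(1) _ k(2), of "max N k"] by simp
  finally show ?thesis .
qed

lemma decided_district: assumes c: "c \<in> C0 n" shows "decided (P c) n"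
  unfolding decided_def
proof
  fix d assume d: "d \<in> C0 n"
  show "P d \<subseteq> P c \<or> P d \<inter> P c = {}"
  proof (cases "d = c")
    case False
    then show ?thesis using district_disj[of d c] c d by (simp add: codes0_iff)
  qed simp
qed

lemma Res_district: assumes mu: "\<mu> \<in> FAP" and c: "c \<in> C0 n" shows "RES \<mu> (P c) = \<mu> c"
proof -
  have "{d\<in>C0 n. P d \<subseteq> P c} = {c}"
  proof
    show "{d\<in>C0 n. P d \<subseteq> P c} \<subseteq> {c}"
    proof
      fix d assume d: "d \<in> {d\<in>C0 n. P d \<subseteq> P c}"
      show "d \<in> {c}"
      proof (rule ccontr)
        assume "d \<notin> {c}"
        then have "P d \<inter> P c = {}" using d c district_disj by (auto simp: codes0_iff)
        then show False using d P_ne[of d n] by auto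
      qed
    qed
  qed (use c in auto)
  then show ?thesis
    using Res_level[OF mu clopen_district[OF c] C0_pos[OF c] decided_district[OF c]] by simp
qed

lemma Res_FAE: assumes mu: "\<mu> \<in> FAP" shows "RES \<mu> \<in> FAE"
  unfolding FAend_def
proof (intro CollectI conjI allI impI)
  fix A assume "\<not> CLOPEN A" then show "RES \<mu> A = 0" by (simp add: Res_def)
next
  fix A B assume A: "CLOPEN A" and B: "CLOPEN B" and AB: "A \<inter> B = {}"
  obtain ka where ka: "1 \<le> ka" "decided A ka" using clopen_decided[OF A] by blast
  obtain kb where kb: "1 \<le> kb" "decided B kb" using clopen_decided[OF B] by blast
  define k where "k = max ka kb"
  have k: "1 \<le> k" "decided A k" "decided B k"
    using ka kb decided_mono[OF ka(2) ka(1), of k] decided_mono[OF kb(2) kb(1), of k] by (auto simp: k_def)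
  have kab: "decided (A \<union> B) k" using k(2,3) unfolding decided_def by blast
  have split: "{c\<in>C0 k. P c \<subseteq> A \<union> B} = {c\<in>C0 k. P c \<subseteq> A} \<union> {c\<in>C0 k. P c \<subseteq> B}"
    using k(2,3) unfolding decided_def by blast
  have disj: "{c\<in>C0 k. P c \<subseteq> A} \<inter> {c\<in>C0 k. P c \<subseteq> B} = {}"
    using AB P_ne by blast
  have "RES \<mu> (A \<union> B) = (\<Sum>c\<in>{c\<in>C0 k. P c \<subseteq> A \<union> B}. \<mu> c)"
    by (rule Res_level[OF mu clopen_Un[OF A B AB] k(1) kab])
  also have "\<dots> = (\<Sum>c\<in>{c\<in>C0 k. P c \<subseteq> A}. \<mu> c) + (\<Sum>c\<in>{c\<in>C0 k. P c \<subseteq> B}. \<mu> c)"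
    unfolding split by (rule sum.union_disjoint) (use fin_codes0[of k] disj in auto)
  also have "\<dots> = RES \<mu> A + RES \<mu> B"
    using Res_level[OF mu A k(1,2)] Res_level[OF mu B k(1,3)] by simp
  finally show "RES \<mu> (A \<union> B) = RES \<mu> A + RES \<mu> B" .
qed

lemma Res_add: "RES (\<lambda>c. \<mu> c + \<mu>' c) = (\<lambda>A. RES \<mu> A + RES \<mu>' A)"
  by (auto simp: Res_def Let_def sum.distrib)

lemma Res_smult: "RES (\<lambda>c. a * \<mu> c) = (\<lambda>A. a * RES \<mu> A)"
  by (auto simp: Res_def Let_def sum_distrib_left)

end

section \<open>The transfer operator\<close>

context rooted_graph begin

lemma pcons_paths: "p \<in> paths V adj \<Longrightarrow> e0 \<in> E \<Longrightarrow> turn e0 (p 0) \<Longrightarrow> pcons e0 p \<in> paths V adj"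
  unfolding paths_iff pcons_def by (auto split: nat.splits)

lemma pcons_district_iff:
  assumes c: "c \<noteq> []" and pp: "pcons e0 p \<in> paths V adj"
  shows "pcons e0 p \<in> P c \<longleftrightarrow> e0 = hd c \<and> (\<forall>i<length c - 1. p i = c ! Suc i)"
proof -
  have "pcons e0 p \<in> P c \<longleftrightarrow> (\<forall>i<length c. pcons e0 p i = c ! i)"
    using pp by (simp add: district_def)
  also have "\<dots> \<longleftrightarrow> pcons e0 p 0 = c ! 0 \<and> (\<forall>i<length c - 1. pcons e0 p (Suc i) = c ! Suc i)"
  proof
    assume "\<forall>i<length c. pcons e0 p i = c ! i"
    then show "pcons e0 p 0 = c ! 0 \<and> (\<forall>i<length c - 1. pcons e0 p (Suc i) = c ! Suc i)"
      using c by auto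
  next
    assume a: "pcons e0 p 0 = c ! 0 \<and> (\<forall>i<length c - 1. pcons e0 p (Suc i) = c ! Suc i)"
    show "\<forall>i<length c. pcons e0 p i = c ! i"
    proof (intro allI impI)
      fix i assume "i < length c" then show "pcons e0 p i = c ! i" using a by (cases i) auto
    qed
  qed
  finally show ?thesis using c by (simp add: pcons_def hd_conv_nth)
qed

lemma transfer_ind:
  assumes c: "postal V adj c" and p: "p \<in> paths V adj"
  shows "transfer V adj (ind (P c)) p =
    (if turn (hd c) (p 0) \<and> (\<forall>i<length c - 1. p i = c ! Suc i) then 1 else 0)"
proof -
  let ?Q = "\<forall>i<length c - 1. p i = c ! Suc i"
  let ?S = "{e0 \<in> E. turn e0 (p 0)}"
  have cne: "c \<noteq> []" and hdE: "hd c \<in> E" using c by (auto simp: postal_iff)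
  have "transfer V adj (ind (P c)) p = (\<Sum>e0\<in>?S. if ?Q then (if e0 = hd c then 1 else 0) else 0)"
    unfolding transfer_def
    by (rule sum.cong) (auto simp: ind_def pcons_district_iff[OF cne] pcons_paths[OF p])
  also have "\<dots> = (if ?Q then (if hd c \<in> ?S then 1 else 0) else 0)"
  proof (cases ?Q)
    case True then show ?thesis using finE by (simp add: sum.delta)
  next
    case False then show ?thesis by (simp only: False if_False sum.neutral_const)
  qed
  finally show ?thesis using hdE by auto
qed

lemma district_rep_nth: "postal V adj d \<Longrightarrow> i < length d \<Longrightarrow> district_rep d i = d ! i"
  using district_rep_in by (auto simp: district_def)

lemma transferT_val:
  assumes c: "postal V adj c"
  shows "transferT V adj \<mu> c = (\<Sum>d\<in>codes V adj (length c).
     (if turn (hd c) (hd d) \<and> (\<forall>i<length c - 1. d ! i = c ! Suc i) then 1 else 0) * \<mu> d)"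
proof -
  have cne: "c \<noteq> []" using c by (simp add: postal_iff)
  have "transfer V adj (ind (P c)) (district_rep d) =
     (if turn (hd c) (hd d) \<and> (\<forall>i<length c - 1. d ! i = c ! Suc i) then 1 else 0)"
    if d: "d \<in> codes V adj (length c)" for d
  proof -
    have dp: "postal V adj d" "length d = length c" using d by (auto simp: codes_def)
    have dne: "d \<noteq> []" using dp by (simp add: postal_iff)
    have "district_rep d 0 = hd d" using district_rep_nth[OF dp(1), of 0] dne by (simp add: hd_conv_nth)
    moreover have "(\<forall>i<length c - 1. district_rep d i = c ! Suc i) \<longleftrightarrow> (\<forall>i<length c - 1. d ! i = c ! Suc i)"
      using district_rep_nth[OF dp(1)] dp by auto
    moreover have rp: "district_rep d \<in> paths V adj" using district_rep_in[OF dp(1)] district_sub_paths by blast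
    ultimately show ?thesis
      using transfer_ind[OF c rp] by simp
  qed
  note tv = this
  have "transferT V adj \<mu> c = (\<Sum>d\<in>codes V adj (length c). transfer V adj (ind (P c)) (district_rep d) * \<mu> d)"
    using c unfolding transferT_def pairing_def district_rep_def by simp
  also have "\<dots> = (\<Sum>d\<in>codes V adj (length c).
     (if turn (hd c) (hd d) \<and> (\<forall>i<length c - 1. d ! i = c ! Suc i) then 1 else 0) * \<mu> d)"
    by (rule sum.cong[OF refl]) (simp add: tv)
  finally show ?thesis .
qed

lemma codes_1: "codes V adj 1 = (\<lambda>e. [e]) ` E"
proof
  show "codes V adj 1 \<subseteq> (\<lambda>e. [e]) ` E"
  proof
    fix d assume "d \<in> codes V adj 1"
    then have "postal V adj d" "length d = 1" by (auto simp: codes_def)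
    then obtain e where "d = [e]" "e \<in> E" by (cases d) (auto simp: postal_iff)
    then show "d \<in> (\<lambda>e. [e]) ` E" by blast
  qed
qed (auto simp: codes_def postal_iff)

lemma tl_postal: assumes c: "postal V adj c" and len: "length c \<ge> 2"
  shows "postal V adj (tl c) \<and> last (tl c) = last c \<and> tl c \<noteq> [] \<and> length (tl c) = length c - 1"
proof -
  have tne: "tl c \<noteq> []" using len by (cases c) auto
  have "set (tl c) \<subseteq> set c" by (cases c) auto
  then show ?thesis using c tne by (auto simp: postal_iff nonbacktracking_tl last_tl)
qed

lemma shifted_codes:
  assumes c: "postal V adj c" and len: "length c \<ge> 2"
  shows "{d\<in>codes V adj (length c). turn (hd c) (hd d) \<and> (\<forall>i<length c - 1. d ! i = c ! Suc i)}
    = (\<lambda>e. tl c @ [e]) ` succs (last c)"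
    (is "?D = _")
proof
  have cne: "c \<noteq> []" using c by (simp add: postal_iff)
  have tlc: "postal V adj (tl c)" "last (tl c) = last c" "tl c \<noteq> []"
    using tl_postal[OF c len] by auto
  show "?D \<subseteq> (\<lambda>e. tl c @ [e]) ` succs (last c)"
  proof
    fix d assume d: "d \<in> ?D"
    then have dp: "postal V adj d" "length d = length c" "\<forall>i<length c - 1. d ! i = c ! Suc i"
      by (auto simp: codes_def)
    then obtain d' e where de: "d = d' @ [e]" by (metis postal_iff rev_exhaust)
    have "d' = tl c"
    proof (rule nth_equalityI)
      show "length d' = length (tl c)" using de dp by simp
      fix i assume i: "i < length d'"
      then have ic: "i < length c - 1" using de dp(2) by simp
      then have "d ! i = c ! Suc i" using dp(3) by blast
      then show "d' ! i = tl c ! i" using de i ic by (simp add: nth_append nth_tl)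
    qed
    moreover have "e \<in> succs (last d')"
      using dp(1) de \<open>d' = tl c\<close> tlc postal_snoc_iff by blast
    ultimately show "d \<in> (\<lambda>e. tl c @ [e]) ` succs (last c)" using de tlc by auto
  qed
  show "(\<lambda>e. tl c @ [e]) ` succs (last c) \<subseteq> ?D"
  proof
    fix d assume "d \<in> (\<lambda>e. tl c @ [e]) ` succs (last c)"
    then obtain e where e: "e \<in> succs (last c)" "d = tl c @ [e]" by blast
    have "postal V adj d" using postal_snoc_iff[OF tlc(3)] tlc e by auto
    moreover have "length d = length c" using e cne by simp
    moreover have "hd d = c ! 1" using e tlc(3) by (cases c; cases "tl c") auto
    moreover have "turn (hd c) (c ! 1)" using c len by (auto simp: postal_iff nonbacktracking_def hd_conv_nth)
    moreover have "\<forall>i<length c - 1. d ! i = c ! Suc i" using e by (auto simp: nth_append nth_tl)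
    ultimately show "d \<in> ?D" by (simp add: codes_def)
  qed
qed

lemma transferT_FA:
  assumes mu: "\<mu> \<in> FAP" and c: "postal V adj c"
  shows "transferT V adj \<mu> c = (if length c = 1 then (\<Sum>e\<in>succs (hd c). \<mu> [e]) else \<mu> (tl c))"
proof (cases "length c = 1")
  case True
  have "transferT V adj \<mu> c = (\<Sum>d\<in>(\<lambda>e. [e]) ` E. (if turn (hd c) (hd d) then 1 else 0) * \<mu> d)"
    using transferT_val[OF c, of \<mu>] True codes_1 by simp
  also have "\<dots> = (\<Sum>e\<in>E. if turn (hd c) e then \<mu> [e] else 0)"
    by (subst sum.reindex) (auto simp: inj_on_def intro: sum.cong)
  also have "\<dots> = (\<Sum>e\<in>succs (hd c). \<mu> [e])"
    unfolding succs_def using finE by (simp add: sum.inter_filter)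
  finally show ?thesis using True by simp
next
  case False
  have "length c \<noteq> 0" using c by (simp add: postal_iff)
  then have len: "length c \<ge> 2" using False by linarith
  let ?cond = "\<lambda>d. turn (hd c) (hd d) \<and> (\<forall>i<length c - 1. d ! i = c ! Suc i)"
  have "transferT V adj \<mu> c = (\<Sum>d\<in>codes V adj (length c). if ?cond d then \<mu> d else 0)"
    unfolding transferT_val[OF c, of \<mu>] by (rule sum.cong) auto
  also have "\<dots> = (\<Sum>d\<in>{d\<in>codes V adj (length c). ?cond d}. \<mu> d)"
    by (simp add: sum.inter_filter fin_codes)
  also have "\<dots> = (\<Sum>e\<in>succs (last c). \<mu> (tl c @ [e]))"
    unfolding shifted_codes[OF c len] by (subst sum.reindex) (auto simp: inj_on_def)
  also have "\<dots> = \<mu> (tl c)" using FA_step[OF mu] tl_postal[OF c len] by simp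
  finally show ?thesis using False by simp
qed
end

section \<open>Eigenmeasures and edge functions\<close>

locale rooted_graph_eigen = rooted_graph + fixes z :: complex assumes z: "z \<notin> {-1, 0, 1}"
begin

lemma z_nonzero: "z \<noteq> 0" using z by auto
lemma z_square_ne_1: "z * z \<noteq> 1"
proof
  assume "z * z = 1"
  then have "(z - 1) * (z + 1) = 0" by (simp add: algebra_simps)
  then have "z - 1 = 0 \<or> z + 1 = 0" by simp
  moreover have "z + 1 \<noteq> 0" using z by (auto simp: eq_neg_iff_add_eq_0[symmetric])
  ultimately show False using z by auto
qed

abbreviation "EIG \<equiv> eigFA V adj z"

lemma eigFA_iff: "\<mu> \<in> EIG \<longleftrightarrow> \<mu> \<in> FAP \<and> (\<forall>c. postal V adj c \<longrightarrow> transferT V adj \<mu> c = z * \<mu> c)"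
proof
  assume "\<mu> \<in> EIG" then show "\<mu> \<in> FAP \<and> (\<forall>c. postal V adj c \<longrightarrow> transferT V adj \<mu> c = z * \<mu> c)"
    unfolding eigFA_def by simp
next
  assume a: "\<mu> \<in> FAP \<and> (\<forall>c. postal V adj c \<longrightarrow> transferT V adj \<mu> c = z * \<mu> c)"
  have "transferT V adj \<mu> c = z * \<mu> c" for c
  proof (cases "postal V adj c")
    case False
    then show ?thesis using a FA_zero[of \<mu> c] by (simp add: transferT_def)
  qed (use a in blast)
  then show "\<mu> \<in> EIG" using a unfolding eigFA_def by auto
qed

lemma eig_edge: "\<mu> \<in> EIG \<Longrightarrow> e \<in> E \<Longrightarrow> (\<Sum>d\<in>succs e. \<mu> [d]) = z * \<mu> [e]"
proof -
  assume mu: "\<mu> \<in> EIG" and e: "e \<in> E"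
  have pe: "postal V adj [e]" using e by (simp add: postal_iff)
  show ?thesis using transferT_FA[OF _ pe, of \<mu>] mu pe by (simp add: eigFA_iff)
qed

lemma eig_tl: assumes mu: "\<mu> \<in> EIG" and c: "postal V adj c" and len: "length c \<noteq> 1"
  shows "\<mu> (tl c) = z * \<mu> c"
proof -
  have "transferT V adj \<mu> c = \<mu> (tl c)" using transferT_FA[OF _ c, of \<mu>] mu len by (simp add: eigFA_iff)
  moreover have "transferT V adj \<mu> c = z * \<mu> c" using mu c by (simp add: eigFA_iff)
  ultimately show ?thesis by simp
qed

lemma eig_formula: "\<mu> \<in> EIG \<Longrightarrow> postal V adj c \<Longrightarrow> \<mu> c = \<mu> [last c] / z ^ (length c - 1)"
proof (induction "length c" arbitrary: c)
  case 0
  then show ?case by (simp add: postal_iff)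
next
  case (Suc n)
  note IH = Suc.hyps(1) and lenc = Suc.hyps(2) and mu = Suc.prems(1) and pc = Suc.prems(2)
  show ?case
  proof (cases "n = 0")
    case True
    then obtain e where "c = [e]" using lenc by (cases c) auto
    then show ?thesis by simp
  next
    case False
    then obtain m where m: "n = Suc m" by (cases n) auto
    have len: "length c \<noteq> 1" using m lenc by simp
    have "length c \<ge> 2" using m lenc by simp
    then have tlc: "postal V adj (tl c)" "last (tl c) = last c" "length (tl c) = n"
      using tl_postal[OF pc] lenc by auto
    have "\<mu> (tl c) = \<mu> [last c] / z ^ m"
      using IH[of "tl c"] mu tlc m lenc[symmetric] by simp
    moreover have "\<mu> (tl c) = z * \<mu> c" by (rule eig_tl[OF mu pc len])
    ultimately have "z * \<mu> c = \<mu> [last c] / z ^ m" by simp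
    then have "\<mu> c = \<mu> [last c] / z ^ m / z" using z_nonzero by (simp add: field_simps)
    then show ?thesis using m lenc[symmetric] by (simp add: divide_divide_eq_left mult.commute)
  qed
qed

definition eigen_measure :: "('a edge \<Rightarrow> complex) \<Rightarrow> 'a edge list \<Rightarrow> complex" where
  "eigen_measure m c = (if postal V adj c then m (last c) / z ^ (length c - 1) else 0)"

abbreviation "EQS \<equiv> EqS V adj z"
abbreviation "EQV \<equiv> EqV V (Sigma_op V adj) (Rz V adj z)"

lemma eigen_measure_FA: assumes m: "\<And>e. e \<in> E \<Longrightarrow> (\<Sum>d\<in>succs e. m d) = z * m e"
  shows "eigen_measure m \<in> FAP"
  unfolding FA_def
proof (intro CollectI conjI allI impI)
  fix c assume "\<not> postal V adj c" then show "eigen_measure m c = 0" by (simp add: eigen_measure_def)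
next
  fix c assume c: "postal V adj c"
  have cne: "c \<noteq> []" and lE: "last c \<in> E" using c by (auto simp: postal_iff)
  have "(\<Sum>e\<in>{e \<in> E. turn (last c) e}. eigen_measure m (c @ [e])) = (\<Sum>e\<in>succs (last c). m e / z ^ length c)"
    by (rule sum.cong) (auto simp: succs_def eigen_measure_def postal_snoc[OF c])
  also have "\<dots> = (\<Sum>e\<in>succs (last c). m e) / z ^ length c" by (simp add: sum_divide_distrib)
  also have "\<dots> = z * m (last c) / z ^ length c" using m[OF lE] by simp
  also have "\<dots> = m (last c) / z ^ (length c - 1)"
    using cne z_nonzero by (cases "length c") (auto simp: field_simps)
  finally show "eigen_measure m c = (\<Sum>e\<in>{e \<in> E. turn (last c) e}. eigen_measure m (c @ [e]))"
    using c by (simp add: eigen_measure_def)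
qed

lemma eigen_measure_eig: assumes m: "\<And>e. e \<in> E \<Longrightarrow> (\<Sum>d\<in>succs e. m d) = z * m e"
  shows "eigen_measure m \<in> EIG"
  unfolding eigFA_iff
proof (intro conjI allI impI)
  show fa: "eigen_measure m \<in> FAP" by (rule eigen_measure_FA[OF m])
  fix c assume c: "postal V adj c"
  have cne: "c \<noteq> []" and lE: "last c \<in> E" using c by (auto simp: postal_iff)
  show "transferT V adj (eigen_measure m) c = z * eigen_measure m c"
  proof (cases "length c = 1")
    case True
    then obtain e where e: "c = [e]" by (cases c) auto
    have "(\<Sum>d\<in>succs e. eigen_measure m [d]) = (\<Sum>d\<in>succs e. m d)"
      by (rule sum.cong) (auto simp: eigen_measure_def postal_iff succs_def)
    then show ?thesis using transferT_FA[OF fa c] e m lE c by (simp add: eigen_measure_def)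
  next
    case False
    have "length c \<noteq> 0" using cne by simp
    then have len: "length c \<ge> 2" using False by linarith
    have tl: "postal V adj (tl c) \<and> last (tl c) = last c \<and> tl c \<noteq> [] \<and> length (tl c) = length c - 1"
      by (rule tl_postal[OF c len])
    have "eigen_measure m (tl c) = m (last c) / z ^ (length c - 2)" using tl by (simp add: eigen_measure_def numeral_2_eq_2)
    also have "\<dots> = z * (m (last c) / z ^ (length c - 1))"
    proof -
      obtain k where k: "length c = Suc (Suc k)" using len by (metis add_2_eq_Suc le_Suc_ex)
      show ?thesis using z_nonzero by (simp add: k field_simps)
    qed
    finally show ?thesis using transferT_FA[OF fa c] False c by (simp add: eigen_measure_def)
  qed
qed

lemma eig_eq_eigen_measure: "\<mu> \<in> EIG \<Longrightarrow> \<mu> = eigen_measure (\<lambda>e. \<mu> [e])"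
proof
  fix c assume mu: "\<mu> \<in> EIG"
  show "\<mu> c = eigen_measure (\<lambda>e. \<mu> [e]) c"
  proof (cases "postal V adj c")
    case True then show ?thesis using eig_formula[OF mu True] by (simp add: eigen_measure_def)
  next
    case False then show ?thesis using mu FA_zero by (simp add: eigen_measure_def eigFA_iff)
  qed
qed

lemma eig_ext: assumes "\<mu> \<in> EIG" "\<mu>' \<in> EIG" "\<And>e. e \<in> E \<Longrightarrow> \<mu> [e] = \<mu>' [e]" shows "\<mu> = \<mu>'"
proof -
  have "eigen_measure (\<lambda>e. \<mu> [e]) c = eigen_measure (\<lambda>e. \<mu>' [e]) c" for c
  proof (cases "postal V adj c")
    case True
    then have "last c \<in> E" by (auto simp: postal_iff)
    then show ?thesis by (simp add: eigen_measure_def True assms(3))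
  qed (simp add: eigen_measure_def)
  then have "eigen_measure (\<lambda>e. \<mu> [e]) = eigen_measure (\<lambda>e. \<mu>' [e])" by blast
  then show ?thesis using eig_eq_eigen_measure assms(1,2) by metis
qed

lemma predecessors_eq: "{e' \<in> E. turn e' e} = rev_edge ` succs (rev_edge e)"
proof
  show "{e' \<in> E. turn e' e} \<subseteq> rev_edge ` succs (rev_edge e)"
  proof
    fix x assume "x \<in> {e' \<in> E. turn e' e}"
    then have "rev_edge x \<in> succs (rev_edge e)" using E_rev turn_rev[of x e] by (auto simp: succs_def)
    then show "x \<in> rev_edge ` succs (rev_edge e)" by (metis image_eqI rev_rev_edge)
  qed
next
  show "rev_edge ` succs (rev_edge e) \<subseteq> {e' \<in> E. turn e' e}"
  proof
    fix x assume "x \<in> rev_edge ` succs (rev_edge e)"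
    then obtain d where d: "x = rev_edge d" "d \<in> E" "turn (rev_edge e) d" by (auto simp: succs_def)
    then have "turn (rev_edge d) e" using turn_rev[of "rev_edge d" e] by simp
    then show "x \<in> {e' \<in> E. turn e' e}" using d E_rev by simp
  qed
qed

lemma Sop_rev: "Sop V adj g e = (\<Sum>d\<in>succs (rev_edge e). g (rev_edge d))"
  unfolding Sop_def predecessors_eq by (subst sum.reindex) (auto simp: inj_on_def)

lemma fmu_inj: "inj_on (fmu V adj) EIG"
proof
  fix \<mu> \<mu>' assume mu: "\<mu> \<in> EIG" "\<mu>' \<in> EIG" and eq: "fmu V adj \<mu> = fmu V adj \<mu>'"
  show "\<mu> = \<mu>'"
  proof (rule eig_ext[OF mu])
    fix e assume e: "e \<in> E"
    have "fmu V adj \<mu> (rev_edge e) = fmu V adj \<mu>' (rev_edge e)" using eq by simp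
    then show "\<mu> [e] = \<mu>' [e]" using E_rev[OF e] by (simp add: fmu_def)
  qed
qed

lemma fmu_EQS: assumes mu: "\<mu> \<in> EIG" shows "fmu V adj \<mu> \<in> EQS"
proof -
  have "Sop V adj (fmu V adj \<mu>) e = z * fmu V adj \<mu> e" if e: "e \<in> E" for e
  proof -
    have "Sop V adj (fmu V adj \<mu>) e = (\<Sum>d\<in>succs (rev_edge e). \<mu> [d])"
      unfolding Sop_rev by (rule sum.cong) (auto simp: fmu_def succs_def E_rev)
    also have "\<dots> = z * \<mu> [rev_edge e]" by (rule eig_edge[OF mu E_rev[OF e]])
    finally show ?thesis using e by (simp add: fmu_def)
  qed
  then show ?thesis by (auto simp: EqS_def fmu_def)
qed

lemma fmu_surj: assumes g: "g \<in> EQS" shows "g \<in> fmu V adj ` EIG"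
proof -
  define m where "m = (\<lambda>e. g (rev_edge e))"
  have m: "(\<Sum>d\<in>succs e. m d) = z * m e" if e: "e \<in> E" for e
  proof -
    have "(\<Sum>d\<in>succs e. m d) = Sop V adj g (rev_edge e)" unfolding Sop_rev m_def by simp
    also have "\<dots> = z * m e" using g E_rev[OF e] by (simp add: EqS_def m_def)
    finally show ?thesis .
  qed
  have "fmu V adj (eigen_measure m) = g"
  proof
    fix e show "fmu V adj (eigen_measure m) e = g e"
    proof (cases "e \<in> E")
      case True
      then have "postal V adj [rev_edge e]" using E_rev by (simp add: postal_iff)
      then show ?thesis using True by (simp add: fmu_def eigen_measure_def m_def)
    next
      case False
      then show ?thesis using g by (cases e) (simp add: EqS_def fmu_def)
    qed
  qed
  then show ?thesis using eigen_measure_eig[OF m] by blast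
qed

lemma fmu_iso: "lin_iso (fmu V adj) EIG EQS"
  unfolding lin_iso_def
proof (intro conjI ballI allI)
  show "bij_betw (fmu V adj) EIG EQS"
    by (rule bij_betw_imageI[OF fmu_inj]) (use fmu_EQS fmu_surj in blast)
next
  fix x y show "fmu V adj (\<lambda>a. x a + y a) = (\<lambda>b. fmu V adj x b + fmu V adj y b)"
    by (auto simp: fmu_def)
next
  fix c x show "fmu V adj (\<lambda>a. c * x a) = (\<lambda>b. c * fmu V adj x b)"
    by (auto simp: fmu_def)
qed
end

section \<open>From edges to vertices\<close>

context rooted_graph_eigen begin

definition inflow :: "('a edge \<Rightarrow> complex) \<Rightarrow> 'a \<Rightarrow> complex" where
  "inflow g v = (\<Sum>u\<in>nbr V adj v. g (u, v))"
definition outflow :: "('a edge \<Rightarrow> complex) \<Rightarrow> 'a \<Rightarrow> complex" where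
  "outflow g v = (\<Sum>w\<in>nbr V adj v. g (v, w))"

lemma edges_into_eq: "{e\<in>E. snd e = v} = (\<lambda>u. (u, v)) ` nbr V adj v"
proof
  show "{e\<in>E. snd e = v} \<subseteq> (\<lambda>u. (u, v)) ` nbr V adj v"
  proof
    fix e assume "e \<in> {e\<in>E. snd e = v}"
    then show "e \<in> (\<lambda>u. (u, v)) ` nbr V adj v"
      by (cases e) (auto simp: in_E nbr_iff sym)
  qed
qed (auto simp: in_E nbr_iff sym)

lemma sum_edges_into: "(\<Sum>e\<in>{e\<in>E. snd e = v}. g e) = inflow g v"
  unfolding edges_into_eq inflow_def by (subst sum.reindex) (auto simp: inj_on_def)

lemma Iop_In: "v \<in> V \<Longrightarrow> Iop V adj g v = inflow g v"
  by (simp add: Iop_def sum_edges_into)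

lemma Sop_pair: assumes ab: "(a, b) \<in> E" shows "Sop V adj g (a, b) = inflow g a - g (b, a)"
proof -
  have ba: "(b, a) \<in> E" using E_rev[OF ab] by (simp add: rev_edge_def)
  have "{e'\<in>E. turn e' (a, b)} = {e\<in>E. snd e = a} - {(b, a)}"
    by (auto simp: turn_def rev_edge_def)
  then have "Sop V adj g (a, b) = (\<Sum>e\<in>{e\<in>E. snd e = a} - {(b, a)}. g e)" by (simp add: Sop_def)
  also have "\<dots> = (\<Sum>e\<in>{e\<in>E. snd e = a}. g e) - g (b, a)"
    using ba finE by (subst sum_diff1) auto
  finally show ?thesis by (simp add: sum_edges_into)
qed

lemma card_nbr: "v \<in> V \<Longrightarrow> (of_nat (card (nbr V adj v)) :: complex) = 1 + qv V adj v"
  by (simp add: qv_def)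

lemma EqS_In_Out: assumes g: "g \<in> EQS" and v: "v \<in> V"
  shows "z * outflow g v = qv V adj v * inflow g v"
proof -
  have "z * outflow g v = (\<Sum>w\<in>nbr V adj v. Sop V adj g (v, w))"
    unfolding outflow_def sum_distrib_left
    by (rule sum.cong) (use g in \<open>auto simp: EqS_def in_E nbr_iff\<close>)
  also have "\<dots> = (\<Sum>w\<in>nbr V adj v. inflow g v - g (w, v))"
    by (rule sum.cong) (auto simp: Sop_pair in_E nbr_iff)
  also have "\<dots> = of_nat (card (nbr V adj v)) * inflow g v - inflow g v"
    by (simp add: sum_subtractf inflow_def)
  finally show ?thesis by (simp add: qv_def algebra_simps)
qed

lemma EqS_Sigma: assumes g: "g \<in> EQS" and v: "v \<in> V"
  shows "Sigma_op V adj (Iop V adj g) v = z * inflow g v + outflow g v"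
proof -
  have "Sigma_op V adj (Iop V adj g) v = (\<Sum>w\<in>nbr V adj v. inflow g w)"
    unfolding Sigma_op_def by (rule sum.cong) (auto simp: Iop_In nbr_def)
  also have "\<dots> = (\<Sum>w\<in>nbr V adj v. z * g (w, v) + g (v, w))"
  proof (rule sum.cong)
    fix w assume w: "w \<in> nbr V adj v"
    then have wv: "(w, v) \<in> E" using sym by (simp add: in_E nbr_iff)
    have "Sop V adj g (w, v) = z * g (w, v)" using g wv by (simp add: EqS_def)
    then show "inflow g w = z * g (w, v) + g (v, w)" using Sop_pair[OF wv, of g] by (simp add: diff_eq_eq)
  qed simp
  also have "\<dots> = z * inflow g v + outflow g v"
    by (simp add: sum.distrib sum_distrib_left inflow_def outflow_def)
  finally show ?thesis .
qed

lemma Iop_EQV: assumes g: "g \<in> EQS" shows "Iop V adj g \<in> EQV"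
  unfolding EqV_def
proof (intro CollectI conjI allI impI ballI)
  fix v assume "v \<notin> V" then show "Iop V adj g v = 0" by (simp add: Iop_def)
next
  fix v assume v: "v \<in> V"
  have "Sigma_op V adj (Iop V adj g) v = z * inflow g v + outflow g v" by (rule EqS_Sigma[OF g v])
  also have "outflow g v = qv V adj v * inflow g v / z" using EqS_In_Out[OF g v] z_nonzero by (simp add: field_simps)
  finally show "Sigma_op V adj (Iop V adj g) v = Rz V adj z (Iop V adj g) v"
    using v by (simp add: Rz_def Iop_In field_simps)
qed

lemma EqS_diff: "g \<in> EQS \<Longrightarrow> g' \<in> EQS \<Longrightarrow> (\<lambda>e. g e - g' e) \<in> EQS"
  by (auto simp: EqS_def Sop_def sum_subtractf algebra_simps)

lemma EqS_zero: assumes g: "g \<in> EQS" and I0: "\<And>v. v \<in> V \<Longrightarrow> inflow g v = 0" shows "g = (\<lambda>e. 0)"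
proof
  fix e show "g e = 0"
  proof (cases "e \<in> E")
    case False then show ?thesis using g by (cases e) (auto simp: EqS_def)
  next
    case True
    obtain a b where e: "e = (a, b)" by (cases e)
    have ab: "(a, b) \<in> E" and ba: "(b, a) \<in> E" using True E_rev e by (auto simp: rev_edge_def)
    have a: "a \<in> V" and b: "b \<in> V" using E_V[OF ab] by auto
    have 1: "z * g (a, b) = - g (b, a)" using Sop_pair[OF ab, of g] g ab I0[OF a] by (simp add: EqS_def)
    have 2: "z * g (b, a) = - g (a, b)" using Sop_pair[OF ba, of g] g ba I0[OF b] by (simp add: EqS_def)
    have "z * z * g (a, b) = g (a, b)" using 1 2 by (metis minus_minus mult.assoc mult_minus_right)
    then have "(z * z - 1) * g (a, b) = 0" by (simp add: algebra_simps)
    then show ?thesis using z_square_ne_1 e by simp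
  qed
qed

lemma Iop_inj: "inj_on (Iop V adj) EQS"
proof
  fix g g' assume g: "g \<in> EQS" "g' \<in> EQS" and eq: "Iop V adj g = Iop V adj g'"
  have "(\<lambda>e. g e - g' e) = (\<lambda>e. 0)"
  proof (rule EqS_zero[OF EqS_diff[OF g]])
    fix v assume v: "v \<in> V"
    have "inflow g v = inflow g' v" using eq Iop_In[OF v] by metis
    then show "inflow (\<lambda>e. g e - g' e) v = 0" by (simp add: inflow_def sum_subtractf)
  qed
  then show "g = g'" by (metis eq_iff_diff_eq_0 ext)
qed

definition edge_lift :: "('a \<Rightarrow> complex) \<Rightarrow> 'a edge \<Rightarrow> complex" where
  "edge_lift f e = (if e \<in> E then (z * f (fst e) - f (snd e)) / (z * z - 1) else 0)"

lemma inflow_edge_lift: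
  "inflow (edge_lift f) a = (z * Sigma_op V adj f a - of_nat (card (nbr V adj a)) * f a) / (z * z - 1)"
proof -
  have "inflow (edge_lift f) a = (\<Sum>u\<in>nbr V adj a. (z * f u - f a) / (z * z - 1))"
    unfolding inflow_def by (rule sum.cong) (auto simp: edge_lift_def in_E nbr_iff sym)
  also have "\<dots> = (\<Sum>u\<in>nbr V adj a. z * f u - f a) / (z * z - 1)"
    by (simp add: sum_divide_distrib)
  finally show ?thesis by (simp add: sum_subtractf sum_distrib_left Sigma_op_def)
qed

lemma edge_lift_EQS: assumes f: "f \<in> EQV" shows "edge_lift f \<in> EQS"
  unfolding EqS_def
proof (intro CollectI conjI allI impI ballI)
  fix e assume "e \<notin> E" then show "edge_lift f e = 0" by (simp add: edge_lift_def)
next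
  fix e assume e: "e \<in> E"
  obtain a b where ab: "e = (a, b)" by (cases e)
  have abE: "(a, b) \<in> E" and baE: "(b, a) \<in> E" using e ab E_rev by (auto simp: rev_edge_def)
  have a: "a \<in> V" using E_V[OF abE] by simp
  have fS: "Sigma_op V adj f a = (z + qv V adj a * inverse z) * f a"
    using f a by (simp add: EqV_def Rz_def)
  have "Sop V adj (edge_lift f) e = inflow (edge_lift f) a - edge_lift f (b, a)"
    using Sop_pair[OF abE] ab by simp
  also have "\<dots> = (z * ((z + qv V adj a * inverse z) * f a) - (1 + qv V adj a) * f a - (z * f b - f a))
      / (z * z - 1)"
    using inflow_edge_lift[of f a] fS card_nbr[OF a] baE by (simp add: edge_lift_def diff_divide_distrib)
  also have "\<dots> = z * edge_lift f e" using z_nonzero abE ab by (simp add: edge_lift_def field_simps)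
  finally show "Sop V adj (edge_lift f) e = z * edge_lift f e" .
qed

lemma Iop_edge_lift: assumes f: "f \<in> EQV" shows "Iop V adj (edge_lift f) = f"
proof
  fix v show "Iop V adj (edge_lift f) v = f v"
  proof (cases "v \<in> V")
    case False then show ?thesis using f by (simp add: Iop_def EqV_def)
  next
    case True
    have "Sigma_op V adj f v = (z + qv V adj v * inverse z) * f v"
      using f True by (simp add: EqV_def Rz_def)
    then have "Iop V adj (edge_lift f) v
        = (z * ((z + qv V adj v * inverse z) * f v) - (1 + qv V adj v) * f v) / (z * z - 1)"
      using Iop_In[OF True] inflow_edge_lift[of f v] card_nbr[OF True] by simp
    also have "\<dots> = f v" using z_nonzero z_square_ne_1 by (simp add: field_simps)
    finally show ?thesis .
  qed
qed

lemma Iop_iso: "lin_iso (Iop V adj) EQS EQV"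
  unfolding lin_iso_def
proof (intro conjI ballI allI)
  have "EQV \<subseteq> Iop V adj ` EQS" using Iop_edge_lift edge_lift_EQS by (metis image_eqI subsetI)
  then show "bij_betw (Iop V adj) EQS EQV"
    using Iop_inj Iop_EQV by (auto simp: bij_betw_def)
next
  fix x y show "Iop V adj (\<lambda>a. x a + y a) = (\<lambda>b. Iop V adj x b + Iop V adj y b)"
    by (auto simp: Iop_def sum.distrib)
next
  fix c x show "Iop V adj (\<lambda>a. c * x a) = (\<lambda>b. c * Iop V adj x b)"
    by (auto simp: Iop_def sum_distrib_left)
qed

lemma Sigma_Delta: "EQV = EqV V (Delta_op V adj) (Lz V adj z)"
proof -
  have "Sigma_op V adj f v = Rz V adj z f v \<longleftrightarrow> Delta_op V adj f v = Lz V adj z f v" if v: "v \<in> V" for f v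
  proof -
    have "card (nbr V adj v) \<ge> 2" using deg2 v by auto
    then have ne: "1 + qv V adj v \<noteq> 0" using card_nbr[OF v] by (metis of_nat_eq_0_iff not_numeral_le_zero)
    show ?thesis using ne by (auto simp: Delta_op_def Lz_def Rz_def field_simps)
  qed
  then show ?thesis by (auto simp: EqV_def)
qed

end

section \<open>The universal covering tree\<close>

context rooted_graph begin

abbreviation "TV \<equiv> treevert V adj v0"
abbreviation "PR \<equiv> pr v0"
abbreviation "GAM \<equiv> Gam V adj v0"

lemma tv_iff: "TV x \<longleftrightarrow> set x \<subseteq> E \<and> nonbacktracking x \<and> walk v0 x (PR x)"
proof (cases "x = []")
  case True then show ?thesis by (simp add: treevert_def pr_def)
next
  case False
  show ?thesis
  proof
    assume "TV x"
    then have "postal V adj x" "fst (hd x) = v0" using False by (auto simp: treevert_def)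
    moreover have "PR x = snd (last x)" using False by (simp add: pr_def)
    ultimately show "set x \<subseteq> E \<and> nonbacktracking x \<and> walk v0 x (PR x)"
      using nonbacktracking_walk[OF False] by (simp add: postal_iff)
  next
    assume "set x \<subseteq> E \<and> nonbacktracking x \<and> walk v0 x (PR x)"
    then show "TV x" using False walk_hd by (auto simp: treevert_def postal_iff)
  qed
qed

lemma tv_walk: assumes "TV x" "walk v0 x t" shows "PR x = t"
proof -
  have "walk v0 x (PR x)" using assms(1) by (simp add: tv_iff)
  then show ?thesis by (rule walk_fun[OF _ assms(2)])
qed

lemma tv_of_walk: "set x \<subseteq> E \<Longrightarrow> nonbacktracking x \<Longrightarrow> walk v0 x t \<Longrightarrow> TV x \<and> PR x = t"
proof -
  assume a: "set x \<subseteq> E" "nonbacktracking x" "walk v0 x t"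
  have "PR x = t"
  proof (cases "x = []")
    case True then show ?thesis using a by (simp add: pr_def)
  next
    case False then show ?thesis using a walk_last by (simp add: pr_def)
  qed
  then show ?thesis using a tv_iff by auto
qed

lemma gam_iff: "l \<in> GAM \<longleftrightarrow> set l \<subseteq> E \<and> nonbacktracking l \<and> walk v0 l v0"
proof
  assume "l \<in> GAM"
  then have "TV l" "PR l = v0" by (auto simp: Gam_def)
  then show "set l \<subseteq> E \<and> nonbacktracking l \<and> walk v0 l v0" using tv_iff by metis
next
  assume "set l \<subseteq> E \<and> nonbacktracking l \<and> walk v0 l v0"
  then have "TV l \<and> PR l = v0" using tv_of_walk by blast
  then show "l \<in> GAM" by (simp add: Gam_def)
qed

lemma pr_V: "TV x \<Longrightarrow> PR x \<in> V"
proof (cases "x = []")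
  case True then show ?thesis by (simp add: pr_def v0)
next
  case False
  assume "TV x"
  then have "last x \<in> E" using False by (auto simp: tv_iff)
  then show ?thesis using E_V False by (simp add: pr_def)
qed

lemma tact_tv: assumes l: "l \<in> GAM" and x: "TV x" shows "TV (tact l x) \<and> PR (tact l x) = PR x"
proof -
  have "walk v0 (tact l x) (PR x) \<and> set (tact l x) \<subseteq> E \<and> nonbacktracking (tact l x)"
    using tact_walk[of v0 l v0 x "PR x"] l x by (auto simp: gam_iff tv_iff)
  then show ?thesis using tv_of_walk by blast
qed

lemma tv_butlast: "TV x \<Longrightarrow> x \<noteq> [] \<Longrightarrow> TV (butlast x) \<and> PR (butlast x) = fst (last x)"
proof -
  assume x: "TV x" "x \<noteq> []"
  have "x = butlast x @ [last x]" using x by simp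
  then have "walk v0 (butlast x) (fst (last x))" using x walk_snoc[of v0 "butlast x" "last x"] by (metis tv_iff)
  moreover have "set (butlast x) \<subseteq> E" using x by (meson in_set_butlastD subset_iff tv_iff)
  moreover have "nonbacktracking (butlast x)" using x by (simp add: nonbacktracking_butlast tv_iff)
  ultimately show ?thesis using tv_of_walk by blast
qed

lemma tv_snoc: "TV x \<Longrightarrow> adj (PR x) w \<Longrightarrow> (x = [] \<or> w \<noteq> fst (last x)) \<Longrightarrow> TV (x @ [(PR x, w)]) \<and> PR (x @ [(PR x, w)]) = w"
proof -
  assume x: "TV x" and w: "adj (PR x) w" and nw: "x = [] \<or> w \<noteq> fst (last x)"
  have "set (x @ [(PR x, w)]) \<subseteq> E" using x w by (auto simp: tv_iff in_E)
  moreover have "nonbacktracking (x @ [(PR x, w)])"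
  proof -
    have "x \<noteq> [] \<Longrightarrow> snd (last x) = PR x" by (simp add: pr_def)
    then have "x \<noteq> [] \<Longrightarrow> turn (last x) (PR x, w)" using nw by (auto simp: turn_def rev_edge_def)
    then show ?thesis using x by (simp add: nonbacktracking_snoc tv_iff)
  qed
  moreover have "walk v0 (x @ [(PR x, w)]) w" using x by (simp add: walk_snoc tv_iff)
  ultimately show ?thesis using tv_of_walk by blast
qed

definition tree_step :: "'a edge list \<Rightarrow> 'a \<Rightarrow> 'a edge list" where
  "tree_step x w = (if x \<noteq> [] \<and> w = fst (last x) then butlast x else x @ [(PR x, w)])"

lemma tree_step_props: assumes x: "TV x" and w: "w \<in> nbr V adj (PR x)"
  shows "TV (tree_step x w) \<and> PR (tree_step x w) = w"
proof (cases "x \<noteq> [] \<and> w = fst (last x)")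
  case True then show ?thesis using tv_butlast[OF x] by (simp add: tree_step_def)
next
  case False
  have "adj (PR x) w" using w adjV by (simp add: nbr_def)
  then show ?thesis using tv_snoc[OF x] False by (auto simp: tree_step_def)
qed

lemma tnbr_eq: assumes x: "TV x" shows "tnbr V adj v0 x = tree_step x ` nbr V adj (PR x)"
proof
  show "tnbr V adj v0 x \<subseteq> tree_step x ` nbr V adj (PR x)"
  proof
    fix y assume "y \<in> tnbr V adj v0 x"
    then obtain e where y: "TV y" "y = x @ [e] \<or> x = y @ [e]" by (auto simp: tnbr_def)
    from y(2) show "y \<in> tree_step x ` nbr V adj (PR x)"
    proof
      assume ye: "y = x @ [e]"
      have eE: "e \<in> E" and nbx: "nonbacktracking (x @ [e])" and wk: "walk v0 (x @ [e]) (PR y)"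
        using y(1) ye by (auto simp: tv_iff)
      have fe: "fst e = PR x" using wk x tv_walk walk_snoc by (metis)
      have ne: "x \<noteq> [] \<Longrightarrow> snd e \<noteq> fst (last x)"
      proof -
        assume xne: "x \<noteq> []"
        then have "turn (last x) e" using nbx by (simp add: nonbacktracking_snoc)
        moreover have "snd (last x) = fst e" using fe xne by (simp add: pr_def)
        ultimately show "snd e \<noteq> fst (last x)" by (cases e) (auto simp: turn_def rev_edge_def)
      qed
      have "snd e \<in> nbr V adj (PR x)" using eE fe by (cases e) (auto simp: in_E nbr_iff)
      moreover have "tree_step x (snd e) = y" using ne ye fe by (cases e) (auto simp: tree_step_def)
      ultimately show ?thesis by blast
    next
      assume xe: "x = y @ [e]"
      then have xne: "x \<noteq> []" and yb: "y = butlast x" and le: "last x = e" by auto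
      have eE: "e \<in> E" using x xe by (auto simp: tv_iff)
      have "PR x = snd e" using xe by (simp add: pr_def)
      then have "fst e \<in> nbr V adj (PR x)" using eE sym by (cases e) (auto simp: in_E nbr_iff)
      moreover have "tree_step x (fst e) = y" using xne yb le by (simp add: tree_step_def)
      ultimately show ?thesis by blast
    qed
  qed
next
  show "tree_step x ` nbr V adj (PR x) \<subseteq> tnbr V adj v0 x"
  proof
    fix y assume "y \<in> tree_step x ` nbr V adj (PR x)"
    then obtain w where w: "w \<in> nbr V adj (PR x)" "y = tree_step x w" by blast
    have "TV y" using tree_step_props[OF x w(1)] w(2) by simp
    moreover have "\<exists>e. y = x @ [e] \<or> x = y @ [e]"
    proof (cases "x \<noteq> [] \<and> w = fst (last x)")
      case True
      then have "x = y @ [last x]" using w(2) by (simp add: tree_step_def)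
      then show ?thesis by blast
    qed (use w(2) in \<open>auto simp: tree_step_def\<close>)
    ultimately show "y \<in> tnbr V adj v0 x" by (simp add: tnbr_def)
  qed
qed

lemma tree_step_inj: "TV x \<Longrightarrow> inj_on (tree_step x) (nbr V adj (PR x))"
  by (rule inj_on_inverseI[of _ PR]) (use tree_step_props in auto)

lemma SigmaT_eq: "TV x \<Longrightarrow> SigmaT V adj v0 F x = (\<Sum>w\<in>nbr V adj (PR x). F (tree_step x w))"
  by (simp add: SigmaT_def tnbr_eq sum.reindex tree_step_inj)

lemma qT_eq: "TV x \<Longrightarrow> qT V adj v0 x = qv V adj (PR x)"
  by (simp add: qT_def qv_def tnbr_eq card_image tree_step_inj)

lemma reach_vertex: "v \<in> V \<Longrightarrow> \<exists>x. TV x \<and> PR x = v"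
proof -
  assume v: "v \<in> V"
  have "(v0, v) \<in> {(a, b). adj a b}\<^sup>*" using conn v0 v by blast
  then show ?thesis
  proof (induction rule: rtrancl_induct)
    case base
    then show ?case by (intro exI[of _ "[]"]) (simp add: treevert_def pr_def)
  next
    case (step u w)
    then obtain x where x: "TV x" "PR x = u" by blast
    have uw: "adj u w" using step by simp
    have "walk v0 (tact x [(u, w)]) w \<and> set (tact x [(u, w)]) \<subseteq> E \<and> nonbacktracking (tact x [(u, w)])"
      using tact_walk[of v0 x u "[(u, w)]" w] x uw by (auto simp: tv_iff in_E)
    then show ?case using tv_of_walk by blast
  qed
qed

lemma tact_rebase_append: assumes x: "TV x" and x': "TV x'" and eq: "PR x = PR x'" and xs: "nonbacktracking (x @ s)"
  shows "tact (tact x (rev_path x')) (x' @ s) = x @ s"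
proof -
  obtain k where k: "k \<le> length x" "k \<le> length (rev_path x')"
    "tact x (rev_path x') = take (length x - k) x @ drop k (rev_path x')"
    "\<forall>j<k. rev_path x' ! j = rev_edge (x ! (length x - 1 - j))"
    using tact_char[of x "rev_path x'"] by blast
  define p where "p = take (length x - k) x"
  define s0 where "s0 = drop (length x - k) x"
  define p' where "p' = take (length x' - k) x'"
  define s0' where "s0' = drop (length x' - k) x'"
  have ss: "s0 = s0'"
  proof (rule nth_equalityI)
    show "length s0 = length s0'" using k by (simp add: s0_def s0'_def)
    fix i assume i: "i < length s0"
    then have ik: "i < k" using k by (simp add: s0_def)
    have "rev_path x' ! (k - 1 - i) = rev_edge (x ! (length x - 1 - (k - 1 - i)))"
      using k(4) ik by simp
    moreover have "rev_path x' ! (k - 1 - i) = rev_edge (x' ! (length x' - 1 - (k - 1 - i)))"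
      using k(2) ik by (simp add: rev_path_nth)
    ultimately have e: "x ! (length x - 1 - (k - 1 - i)) = x' ! (length x' - 1 - (k - 1 - i))" by simp
    have i1: "length x - 1 - (k - 1 - i) = length x - k + i" using k ik by simp
    have i2: "length x' - 1 - (k - 1 - i) = length x' - k + i" using k ik by simp
    have "s0 ! i = x ! (length x - k + i)" using k ik by (simp add: s0_def)
    moreover have "s0' ! i = x' ! (length x' - k + i)" using k ik by (simp add: s0'_def)
    ultimately show "s0 ! i = s0' ! i" using e unfolding i1 i2 by simp
  qed
  have xs0: "x = p @ s0" and xs0': "x' = p' @ s0'" by (simp_all add: p_def s0_def p'_def s0'_def)
  have "drop k (rev_path x') = rev_path p'"
  proof -
    have "rev_path x' = rev_path s0' @ rev_path p'" using xs0' by (simp add: rev_path_append)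
    moreover have "length (rev_path s0') = k" using k by (simp add: s0'_def)
    ultimately show ?thesis by simp
  qed
  then have tl: "tact x (rev_path x') = p @ rev_path p'" using k(3) by (simp add: p_def)
  have "tact (p @ rev_path p') (x' @ s) = tact (p @ rev_path p') (p' @ (s0 @ s))" using xs0' ss by simp
  also have "\<dots> = tact p (s0 @ s)" by (rule tact_cancel)
  also have "\<dots> = p @ (s0 @ s)"
  proof (rule tact_noncancel)
    show "s0 @ s = [] \<or> p = [] \<or> hd (s0 @ s) \<noteq> rev_edge (last p)"
    proof (cases "s0 @ s = [] \<or> p = []")
      case False
      have "nonbacktracking (p @ (s0 @ s))" using xs xs0 by simp
      then have "turn (last p) (hd (s0 @ s))" using False by (simp add: nonbacktracking_append)
      then show ?thesis by (auto simp: turn_def)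
    qed blast
  qed
  finally show ?thesis using tl xs0 by simp
qed

lemma tact_rebase: assumes x: "TV x" and x': "TV x'" and eq: "PR x = PR x'"
  shows "tact x (rev_path x') \<in> GAM \<and> tact (tact x (rev_path x')) x' = x"
proof -
  have wx: "walk v0 x (PR x)" and wx': "walk v0 x' (PR x)" using x x' eq by (auto simp: tv_iff)
  have "set (rev_path x') \<subseteq> E" using x' E_rev by (auto simp: set_rev_path tv_iff)
  then have "walk v0 (tact x (rev_path x')) v0 \<and> set (tact x (rev_path x')) \<subseteq> E \<and>
      nonbacktracking (tact x (rev_path x'))"
    using tact_walk[OF wx walk_rev_path[OF wx']] x x' by (simp add: tv_iff nonbacktracking_rev_path)
  then show ?thesis using tact_rebase_append[OF x x' eq, of "[]"] x by (simp add: gam_iff tv_iff)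
qed


end

context rooted_graph_eigen begin

abbreviation "INVT \<equiv> {F \<in> EqT V adj v0 z. invariantT V adj v0 F}"
abbreviation "LIFT \<equiv> lift V adj v0"

lemma lift_INVT: assumes f: "f \<in> EQV" shows "LIFT f \<in> INVT"
proof -
  have "SigmaT V adj v0 (LIFT f) x = RzT V adj v0 z (LIFT f) x" if x: "TV x" for x
  proof -
    have v: "PR x \<in> V" by (rule pr_V[OF x])
    have "SigmaT V adj v0 (LIFT f) x = (\<Sum>w\<in>nbr V adj (PR x). f w)"
      unfolding SigmaT_eq[OF x] by (rule sum.cong) (auto simp: lift_def tree_step_props[OF x])
    also have "\<dots> = Rz V adj z f (PR x)" using f v by (simp add: EqV_def Sigma_op_def)
    also have "\<dots> = RzT V adj v0 z (LIFT f) x" using x by (simp add: Rz_def RzT_def qT_eq lift_def)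
    finally show ?thesis .
  qed
  moreover have "LIFT f x = 0" if "\<not> TV x" for x using that by (simp add: lift_def)
  moreover have "LIFT f (tact l x) = LIFT f x" if "l \<in> GAM" "TV x" for l x
    using tact_tv[OF that] that by (simp add: lift_def)
  ultimately show ?thesis by (simp add: EqT_def invariantT_def)
qed

lemma lift_inj: "inj_on LIFT EQV"
proof
  fix f f' assume f: "f \<in> EQV" "f' \<in> EQV" and eq: "LIFT f = LIFT f'"
  show "f = f'"
  proof
    fix v show "f v = f' v"
    proof (cases "v \<in> V")
      case True
      then obtain x where x: "TV x" "PR x = v" using reach_vertex by blast
      have "LIFT f x = LIFT f' x" using eq by simp
      then show ?thesis using x by (simp add: lift_def)
    next
      case False then show ?thesis using f by (simp add: EqV_def)
    qed
  qed
qed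

lemma invariant_descends:
  assumes F: "F \<in> INVT" and x: "TV x" and x': "TV x'" and eq: "PR x = PR x'"
  shows "F x = F x'"
proof -
  obtain l where l: "l \<in> GAM" "tact l x' = x" using tact_rebase[OF x x' eq] by blast
  have "\<forall>l\<in>GAM. \<forall>x. TV x \<longrightarrow> F (tact l x) = F x" using F by (simp add: invariantT_def)
  then have "F (tact l x') = F x'" using l(1) x' by blast
  then show ?thesis using l(2) by simp
qed

lemma lift_surj: assumes F: "F \<in> INVT" shows "F \<in> LIFT ` EQV"
proof -
  define xv where "xv v = (SOME x. TV x \<and> PR x = v)" for v
  have xv: "TV (xv v) \<and> PR (xv v) = v" if "v \<in> V" for v
    unfolding xv_def using reach_vertex[OF that] by (rule someI_ex)
  define f where "f v = (if v \<in> V then F (xv v) else 0)" for v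
  have Fx: "F x = f (PR x)" if x: "TV x" for x
    using invariant_descends[OF F x] xv[OF pr_V[OF x]] pr_V[OF x] by (simp add: f_def)
  have "LIFT f = F"
  proof
    fix x show "LIFT f x = F x"
      using Fx F by (cases "TV x") (auto simp: lift_def EqT_def)
  qed
  moreover have "f \<in> EQV"
    unfolding EqV_def
  proof (intro CollectI conjI allI impI ballI)
    fix v assume "v \<notin> V" then show "f v = 0" by (simp add: f_def)
  next
    fix v assume v: "v \<in> V"
    have x: "TV (xv v)" "PR (xv v) = v" using xv[OF v] by auto
    have "Sigma_op V adj f v = SigmaT V adj v0 F (xv v)"
      unfolding SigmaT_eq[OF x(1)] Sigma_op_def x(2)
      by (rule sum.cong) (use Fx tree_step_props[OF x(1)] x in auto)
    also have "\<dots> = RzT V adj v0 z F (xv v)" using F x by (simp add: EqT_def)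
    also have "\<dots> = Rz V adj z f v" using x v by (simp add: RzT_def Rz_def qT_eq f_def)
    finally show "Sigma_op V adj f v = Rz V adj z f v" .
  qed
  ultimately show ?thesis by blast
qed

lemma lift_iso: "lin_iso LIFT EQV INVT"
  unfolding lin_iso_def
proof (intro conjI ballI allI)
  show "bij_betw LIFT EQV INVT"
    by (rule bij_betw_imageI[OF lift_inj]) (use lift_INVT lift_surj in blast)
next
  fix x y show "LIFT (\<lambda>a. x a + y a) = (\<lambda>b. LIFT x b + LIFT y b)" by (auto simp: lift_def)
next
  fix c x show "LIFT (\<lambda>a. c * x a) = (\<lambda>b. c * LIFT x b)" by (auto simp: lift_def)
qed

end

section \<open>The Poisson transform\<close>

lemma lcp_self: "lcp a a = length a"
  by (induction a) auto

lemma lcp_snoc: "length a = length b \<Longrightarrow>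
  lcp (a @ [u]) (b @ [v]) = (if a = b \<and> u = v then Suc (length a) else lcp a b)"
  by (induction a b rule: lcp.induct) auto


lemma bracket_eq: "bracket x \<omega> = 2 * int (lcp x (map \<omega> [0..<length x])) - int (length x)"
  by (simp add: bracket_def horo_def tdist_def)

context rooted_graph begin

abbreviation "POI \<equiv> Poisson V adj v0"

lemma integ_add: "integ V adj v0 (\<lambda>A. \<nu> A + \<nu>' A) f = integ V adj v0 \<nu> f + integ V adj v0 \<nu>' f"
  by (simp add: integ_def Let_def sum.distrib distrib_left)

lemma integ_smult: "integ V adj v0 (\<lambda>A. a * \<nu> A) f = a * integ V adj v0 \<nu> f"
  by (simp add: integ_def Let_def sum_distrib_left algebra_simps)

lemma prefix_rep: "c \<in> C0 M \<Longrightarrow> k \<le> M \<Longrightarrow> map (district_rep c) [0..<k] = take k c"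
proof -
  assume c: "c \<in> C0 M" and k: "k \<le> M"
  have "district_rep c \<in> P c" by (rule district_rep_C0[OF c])
  then have "map (district_rep c) [0..<M] = c" using c by (simp add: district_iff codes0_iff)
  then have "take k (map (district_rep c) [0..<M]) = take k c" by simp
  then show ?thesis using k by (simp add: take_map)
qed

lemma const_bracket: "length x \<le> M \<Longrightarrow> const_level (\<lambda>\<omega>. w powi bracket x \<omega>) M"
  unfolding const_level_def
proof (intro ballI)
  fix c \<omega> \<omega>' assume "length x \<le> M" "c \<in> C0 M" "\<omega> \<in> P c" "\<omega>' \<in> P c"
  then have "map \<omega> [0..<M] = c" "map \<omega>' [0..<M] = c" by (auto simp: district_iff codes0_iff)
  then have eqm: "map \<omega> [0..<length x] = map \<omega>' [0..<length x]"
    using \<open>length x \<le> M\<close> by (metis take_map take_upt add_0 min.absorb1)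
  show "w powi bracket x \<omega> = w powi bracket x \<omega>'" unfolding bracket_eq eqm by (rule refl)
qed

lemma Poisson_level:
  assumes nu: "\<nu> \<in> FAE" and x: "TV x" and M: "length x \<le> M" "1 \<le> M"
  shows "POI w \<nu> x = (\<Sum>c\<in>C0 M. w powi (2 * int (lcp x (take (length x) c)) - int (length x)) * \<nu> (P c))"
proof -
  have "POI w \<nu> x = (\<Sum>c\<in>C0 M. w powi bracket x (district_rep c) * \<nu> (P c))"
    using x integ_level[OF FAE_DA[OF nu] M(2) const_bracket[OF M(1)]] by (simp add: Poisson_def)
  also have "\<dots> = (\<Sum>c\<in>C0 M. w powi (2 * int (lcp x (take (length x) c)) - int (length x)) * \<nu> (P c))"
    by (rule sum.cong) (auto simp: bracket_eq prefix_rep M)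
  finally show ?thesis .
qed

lemma Poisson_Nil: assumes nu: "\<nu> \<in> FAE" shows "POI w \<nu> [] = (\<Sum>c\<in>C0 1. \<nu> (P c))"
  using Poisson_level[OF nu, of "[]" 1 w] by (simp add: treevert_def)

lemma tv_snoc_C0: "TV (x @ [e]) \<Longrightarrow> x @ [e] \<in> C0 (Suc (length x))"
  by (auto simp: treevert_def codes0_iff)

lemma Poisson_snoc:
  assumes nu: "\<nu> \<in> FAE" and x: "TV x" and xe: "TV (x @ [e])" and w: "w \<noteq> 0"
  shows "POI w \<nu> (x @ [e]) = POI w \<nu> x / w + (w powi (int (length x) + 1) - w powi (int (length x) - 1)) * \<nu> (P (x @ [e]))"
proof -
  let ?n = "length x"
  have "POI w \<nu> (x @ [e]) = (\<Sum>c\<in>C0 (Suc ?n). w powi (2 * int (lcp (x @ [e]) (take (length (x @ [e])) c)) - int (length (x @ [e]))) * \<nu> (P c))"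
    using Poisson_level[OF nu xe, of "Suc ?n" w] by (simp add: codes0_iff)
  also have "\<dots> = (\<Sum>c\<in>C0 (Suc ?n). w powi (2 * int (lcp (x @ [e]) c) - int (Suc ?n)) * \<nu> (P c))"
    by (rule sum.cong) (auto simp: codes0_iff)
  finally have A: "POI w \<nu> (x @ [e]) = (\<Sum>c\<in>C0 (Suc ?n). w powi (2 * int (lcp (x @ [e]) c) - int (Suc ?n)) * \<nu> (P c))" .
  have B: "POI w \<nu> x / w = (\<Sum>c\<in>C0 (Suc ?n). w powi (2 * int (lcp x (take ?n c)) - int ?n) / w * \<nu> (P c))"
    using Poisson_level[OF nu x, of "Suc ?n" w] by (simp add: sum_divide_distrib)
  have trm: "w powi (2 * int (lcp (x @ [e]) c) - int (Suc ?n)) * \<nu> (P c) =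
      w powi (2 * int (lcp x (take ?n c)) - int ?n) / w * \<nu> (P c) +
      (if c = x @ [e] then (w powi (int ?n + 1) - w powi (int ?n - 1)) * \<nu> (P c) else 0)"
    if c: "c \<in> C0 (Suc ?n)" for c
  proof -
    have lc: "length c = Suc ?n" using c by (simp add: codes0_iff)
    then have cs: "c = take ?n c @ [last c]"
      by (metis append_butlast_last_id butlast_conv_take diff_Suc_1 length_greater_0_conv zero_less_Suc)
    have lt: "length (take ?n c) = ?n" using lc by simp
    have L: "lcp (x @ [e]) c = (if x = take ?n c \<and> e = last c then Suc ?n else lcp x (take ?n c))"
      using lcp_snoc[of x "take ?n c" e "last c"] lt cs by (metis)
    have div: "w powi k / w = w powi (k - 1)" for k using w by (simp add: power_int_diff)
    have pn: "w powi (int ?n - 1) = w ^ ?n / w" using w by (simp add: power_int_diff)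
    show ?thesis
    proof (cases "c = x @ [e]")
      case True
      then have "take ?n c = x" "last c = e" by auto
      then show ?thesis using True by (simp add: L lcp_self div pn algebra_simps)
    next
      case False
      then have "\<not> (x = take ?n c \<and> e = last c)" using cs by metis
      then have L': "lcp (x @ [e]) c = lcp x (take ?n c)" using L by (simp only: if_False)
      show ?thesis using False by (simp add: L' div algebra_simps)
    qed
  qed
  have "POI w \<nu> (x @ [e]) = POI w \<nu> x / w + (\<Sum>c\<in>C0 (Suc ?n). if c = x @ [e] then (w powi (int ?n + 1) - w powi (int ?n - 1)) * \<nu> (P c) else 0)"
    unfolding A B sum.distrib[symmetric] by (rule sum.cong[OF refl]) (erule trm)
  also have "(\<Sum>c\<in>C0 (Suc ?n). if c = x @ [e] then (w powi (int ?n + 1) - w powi (int ?n - 1)) * \<nu> (P c) else 0)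
      = (w powi (int ?n + 1) - w powi (int ?n - 1)) * \<nu> (P (x @ [e]))"
    using tv_snoc_C0[OF xe] fin_codes0 by (simp add: sum.delta')
  finally show ?thesis .
qed

end

context rooted_graph_eigen begin

lemma codes0_1: "C0 1 = (\<lambda>u. [(v0, u)]) ` nbr V adj v0"
proof
  show "C0 1 \<subseteq> (\<lambda>u. [(v0, u)]) ` nbr V adj v0"
  proof
    fix c assume c: "c \<in> C0 1"
    then obtain e where e: "c = [e]" "e \<in> E" "fst e = v0" by (cases c) (auto simp: codes0_iff postal_iff)
    then show "c \<in> (\<lambda>u. [(v0, u)]) ` nbr V adj v0" by (cases e) (auto simp: in_E nbr_iff)
  qed
qed (auto simp: codes0_iff postal_iff in_E nbr_iff)

lemma succs_pair: "(a, b) \<in> E \<Longrightarrow> succs (a, b) = (\<lambda>u. (b, u)) ` (nbr V adj b - {a})"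
proof
  show "succs (a, b) \<subseteq> (\<lambda>u. (b, u)) ` (nbr V adj b - {a})"
  proof
    fix d assume "d \<in> succs (a, b)"
    then show "d \<in> (\<lambda>u. (b, u)) ` (nbr V adj b - {a})"
      by (cases d) (auto simp: succs_def turn_def rev_edge_def in_E nbr_iff)
  qed
qed (auto simp: succs_def turn_def rev_edge_def in_E nbr_iff)

definition vertex_mass :: "('a edge list \<Rightarrow> complex) \<Rightarrow> 'a \<Rightarrow> complex" where
  "vertex_mass \<mu> v = (\<Sum>u\<in>nbr V adj v. \<mu> [(v, u)])"

lemma sum_succs_pair: "(a, b) \<in> E \<Longrightarrow> (\<Sum>d\<in>succs (a, b). (h :: _ \<Rightarrow> complex) d) = (\<Sum>u\<in>nbr V adj b. h (b, u)) - h (b, a)"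
proof -
  assume ab: "(a, b) \<in> E"
  have a: "a \<in> nbr V adj b" using ab sym by (simp add: in_E nbr_iff)
  have "(\<Sum>d\<in>succs (a, b). h d) = (\<Sum>u\<in>nbr V adj b - {a}. h (b, u))"
    unfolding succs_pair[OF ab] by (subst sum.reindex) (auto simp: inj_on_def)
  also have "\<dots> = (\<Sum>u\<in>nbr V adj b. h (b, u)) - h (b, a)"
    using a fin_nbr by (simp add: sum_diff1)
  finally show ?thesis .
qed

lemma vertex_mass_rel: assumes mu: "\<mu> \<in> EIG" and ab: "(a, b) \<in> E"
  shows "vertex_mass \<mu> b = vertex_mass \<mu> a / z + (z - inverse z) * \<mu> [(a, b)]"
proof -
  have ba: "(b, a) \<in> E" using E_rev[OF ab] by (simp add: rev_edge_def)
  have 1: "vertex_mass \<mu> b - \<mu> [(b, a)] = z * \<mu> [(a, b)]"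
    using eig_edge[OF mu ab] sum_succs_pair[OF ab, of "\<lambda>d. \<mu> [d]"] by (simp add: vertex_mass_def)
  have 2: "vertex_mass \<mu> a - \<mu> [(a, b)] = z * \<mu> [(b, a)]"
    using eig_edge[OF mu ba] sum_succs_pair[OF ba, of "\<lambda>d. \<mu> [d]"] by (simp add: vertex_mass_def)
  show ?thesis using 1 2 z_nonzero by (simp add: field_simps)
qed

lemma Iop_fmu: "v \<in> V \<Longrightarrow> Iop V adj (fmu V adj \<mu>) v = vertex_mass \<mu> v"
  unfolding Iop_In inflow_def vertex_mass_def
  by (rule sum.cong) (auto simp: fmu_def in_E nbr_iff sym rev_edge_def)

lemma Poisson_Res: assumes mu: "\<mu> \<in> EIG" and x: "TV x" shows "POI z (RES \<mu>) x = vertex_mass \<mu> (PR x)"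
  using x
proof (induction x rule: rev_induct)
  case Nil
  have fa: "\<mu> \<in> FAP" using mu by (simp add: eigFA_iff)
  have "POI z (RES \<mu>) [] = (\<Sum>c\<in>C0 1. \<mu> c)"
    unfolding Poisson_Nil[OF Res_FAE[OF fa]] by (rule sum.cong) (auto simp: Res_district[OF fa])
  also have "\<dots> = vertex_mass \<mu> v0" unfolding codes0_1 vertex_mass_def by (subst sum.reindex) (auto simp: inj_on_def)
  finally show ?case by (simp add: pr_def)
next
  case (snoc e x)
  have fa: "\<mu> \<in> FAP" using mu by (simp add: eigFA_iff)
  have x: "TV x" and pe: "PR x = fst e" using tv_butlast[OF snoc.prems] by auto
  have xe: "x @ [e] \<in> C0 (Suc (length x))" by (rule tv_snoc_C0[OF snoc.prems])
  have eE: "e \<in> E" using snoc.prems by (auto simp: tv_iff)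
  have pxe: "PR (x @ [e]) = snd e" by (simp add: pr_def)
  have mxe: "\<mu> (x @ [e]) = \<mu> [e] / z ^ length x"
    using eig_formula[OF mu] xe by (simp add: codes0_iff)
  have "POI z (RES \<mu>) (x @ [e]) = vertex_mass \<mu> (fst e) / z + (z powi (int (length x) + 1) - z powi (int (length x) - 1)) * (\<mu> [e] / z ^ length x)"
    using Poisson_snoc[OF Res_FAE[OF fa] x snoc.prems z_nonzero] snoc.IH[OF x] pe Res_district[OF fa xe] mxe by simp
  also have "(z powi (int (length x) + 1) - z powi (int (length x) - 1)) * (\<mu> [e] / z ^ length x) = (z - inverse z) * \<mu> [e]"
    using z_nonzero by (simp add: power_int_add power_int_diff field_simps)
  also have "vertex_mass \<mu> (fst e) / z + (z - inverse z) * \<mu> [e] = vertex_mass \<mu> (snd e)"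
    using vertex_mass_rel[OF mu, of "fst e" "snd e"] eE by simp
  finally show ?case using pxe by simp
qed

lemma lift_Iop_fmu_eq_Poisson_Res: assumes mu: "\<mu> \<in> EIG" shows "LIFT (Iop V adj (fmu V adj \<mu>)) = POI z (RES \<mu>)"
proof
  fix x show "LIFT (Iop V adj (fmu V adj \<mu>)) x = POI z (RES \<mu>) x"
  proof (cases "TV x")
    case True then show ?thesis using Poisson_Res[OF mu True] Iop_fmu[OF pr_V[OF True]] by (simp add: lift_def)
  next
    case False then show ?thesis by (simp add: lift_def Poisson_def)
  qed
qed

lemma Poisson_inj: assumes nu: "\<nu> \<in> FAE" "\<nu>' \<in> FAE" and eq: "POI z \<nu> = POI z \<nu>'" shows "\<nu> = \<nu>'"
proof (rule FAE_eqI[OF nu])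
  fix n c assume c: "c \<in> C0 n"
  have cne: "c \<noteq> []" using c by (auto simp: codes0_iff postal_iff)
  define x where "x = butlast c"
  define e where "e = last c"
  have cxe: "c = x @ [e]" using cne by (simp add: x_def e_def)
  have tc: "TV (x @ [e])" using c cxe by (auto simp: treevert_def codes0_iff)
  have tx: "TV x" using tv_butlast[OF tc] by simp
  let ?k = "z powi (int (length x) + 1) - z powi (int (length x) - 1)"
  have "POI z \<nu> (x @ [e]) = POI z \<nu>' (x @ [e])" "POI z \<nu> x = POI z \<nu>' x" using eq by auto
  then have "?k * \<nu> (P (x @ [e])) = ?k * \<nu>' (P (x @ [e]))"
    using Poisson_snoc[OF nu(1) tx tc z_nonzero] Poisson_snoc[OF nu(2) tx tc z_nonzero] by simp
  moreover have "?k \<noteq> 0"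
  proof
    assume "?k = 0"
    then have "z powi (int (length x) - 1) * (z * z - 1) = 0"
      using z_nonzero by (simp add: power_int_add power_int_diff field_simps)
    then show False using z_nonzero z_square_ne_1 by simp
  qed
  ultimately show "\<nu> (P c) = \<nu>' (P c)" using cxe by simp
qed

lemma Poisson_add: "POI w (\<lambda>A. \<nu> A + \<nu>' A) = (\<lambda>x. POI w \<nu> x + POI w \<nu>' x)"
  by (auto simp: Poisson_def integ_add)

lemma Poisson_smult: "POI w (\<lambda>A. a * \<nu> A) = (\<lambda>x. a * POI w \<nu> x)"
  by (auto simp: Poisson_def integ_smult)

end

section \<open>Every edge is the last edge of a postal code from the base vertex\<close>

lemma card_by_snd: "finite B \<Longrightarrow> snd ` B \<subseteq> S \<Longrightarrow> finite S \<Longrightarrow> card B = (\<Sum>x\<in>S. card {b\<in>B. snd b = x})"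
  using sum.group[of B S snd "\<lambda>_. 1::nat"] by simp

lemma card_by_fst: "finite B \<Longrightarrow> fst ` B \<subseteq> S \<Longrightarrow> finite S \<Longrightarrow> card B = (\<Sum>x\<in>S. card {b\<in>B. fst b = x})"
  using sum.group[of B S fst "\<lambda>_. 1::nat"] by simp

context rooted_graph begin

definition reach :: "'a edge \<Rightarrow> 'a edge set" where
  "reach a = {b. \<exists>ws. ws \<noteq> [] \<and> hd ws = a \<and> last ws = b \<and> set ws \<subseteq> E \<and> nonbacktracking ws}"

lemma reach_self: "a \<in> E \<Longrightarrow> a \<in> reach a"
  unfolding reach_def by (intro CollectI exI[of _ "[a]"]) auto

lemma reach_step: "b \<in> reach a \<Longrightarrow> b' \<in> E \<Longrightarrow> turn b b' \<Longrightarrow> b' \<in> reach a"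
proof -
  assume "b \<in> reach a" "b' \<in> E" "turn b b'"
  then obtain ws where ws: "ws \<noteq> []" "hd ws = a" "last ws = b" "set ws \<subseteq> E" "nonbacktracking ws" unfolding reach_def by blast
  show ?thesis unfolding reach_def
    by (intro CollectI exI[of _ "ws @ [b']"]) (use ws \<open>b' \<in> E\<close> \<open>turn b b'\<close> in \<open>auto simp: nonbacktracking_snoc\<close>)
qed

lemma reach_E: "b \<in> reach a \<Longrightarrow> b \<in> E"
  unfolding reach_def by auto

lemma reach_pred: "b \<in> reach a \<Longrightarrow> b \<noteq> a \<Longrightarrow> \<exists>b''\<in>reach a. snd b'' = fst b"
proof -
  assume "b \<in> reach a" "b \<noteq> a"
  then obtain ws where ws: "ws \<noteq> []" "hd ws = a" "last ws = b" "set ws \<subseteq> E" "nonbacktracking ws" unfolding reach_def by blast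
  have "butlast ws \<noteq> []"
  proof
    assume "butlast ws = []"
    then have "ws = [last ws]" using ws(1) by (metis append_butlast_last_id append_Nil)
    then show False using ws \<open>b \<noteq> a\<close> by (metis list.sel(1))
  qed
  moreover have wsd: "ws = butlast ws @ [b]" using ws(1) ws(3) by (metis append_butlast_last_id)
  ultimately have t: "turn (last (butlast ws)) b" using ws(5) by (metis nonbacktracking_snoc)
  have "hd (butlast ws) = a" using ws(2) wsd \<open>butlast ws \<noteq> []\<close> by (metis hd_append2)
  moreover have "set (butlast ws) \<subseteq> E" using ws(4) by (meson in_set_butlastD subset_iff)
  moreover have "nonbacktracking (butlast ws)" using ws(5) by (rule nonbacktracking_butlast)
  ultimately have "last (butlast ws) \<in> reach a" unfolding reach_def using \<open>butlast ws \<noteq> []\<close> by blast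
  then show ?thesis using t by (auto simp: turn_def)
qed

lemma finite_reach: "finite (reach a)"
  by (rule finite_subset[OF _ finE]) (auto dest: reach_E)

definition reach_into :: "'a edge \<Rightarrow> 'a \<Rightarrow> 'a edge set" where
  "reach_into a x = {b \<in> reach a - {a}. snd b = x}"

definition reach_out :: "'a edge \<Rightarrow> 'a \<Rightarrow> 'a edge set" where
  "reach_out a x = {b \<in> reach a - {a}. fst b = x}"

lemma reach_out_mem:
  assumes nw: "fst a \<notin> snd ` reach a" and b: "b \<in> reach a" "snd b = x"
    and y: "y \<in> nbr V adj x" "y \<noteq> fst b"
  shows "(x, y) \<in> reach_out a x"
proof -
  have "(x, y) \<in> reach a"
    using reach_step[OF b(1)] b(2) y by (auto simp: in_E nbr_iff turn_def rev_edge_def)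
  moreover have "(x, y) \<noteq> a" using nw b by force
  ultimately show ?thesis by (simp add: reach_out_def)
qed

lemma card_reach_into_le:
  assumes nw: "fst a \<notin> snd ` reach a"
  shows "card (reach_into a x) \<le> card (reach_out a x)"
proof -
  have fin: "finite (reach_into a x)" "finite (reach_out a x)"
    using finite_reach by (auto simp: reach_into_def reach_out_def)
  show ?thesis
  proof (cases "card (reach_into a x) \<le> 1")
    case True
    show ?thesis
    proof (cases "reach_into a x = {}")
      case False
      then obtain b where b: "b \<in> reach a" "snd b = x" by (auto simp: reach_into_def)
      have "x \<in> V" using b reach_E E_V by blast
      then obtain y where "y \<in> nbr V adj x" "y \<noteq> fst b" using exists_other_nbr by blast
      then have "reach_out a x \<noteq> {}" using reach_out_mem[OF nw b] by blast
      then have "card (reach_out a x) \<ge> 1" using fin(2) by (simp add: Suc_le_eq card_gt_0_iff)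
      then show ?thesis using True by simp
    qed simp
  next
    case False
    then obtain b1 b2 where b: "b1 \<in> reach_into a x" "b2 \<in> reach_into a x" "b1 \<noteq> b2"
      using card_le_Suc0_iff_eq[OF fin(1)] by auto
    then have b1: "b1 \<in> reach a" "snd b1 = x" and b2: "b2 \<in> reach a" "snd b2 = x"
      by (auto simp: reach_into_def)
    have "fst b1 \<noteq> fst b2" using b(3) b1(2) b2(2) by (metis prod_eq_iff)
    \<comment> \<open>two distinct incoming edges leave no excluded backtrack at x\<close>
    then have sub: "(\<lambda>y. (x, y)) ` nbr V adj x \<subseteq> reach_out a x"
      using reach_out_mem[OF nw b1] reach_out_mem[OF nw b2] by blast
    have "card (nbr V adj x) = card ((\<lambda>y. (x, y)) ` nbr V adj x)"
      by (rule card_image[symmetric]) (simp add: inj_on_def)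
    also have "\<dots> \<le> card (reach_out a x)" by (rule card_mono[OF fin(2) sub])
    finally have "card (nbr V adj x) \<le> card (reach_out a x)" .
    moreover have "card (reach_into a x) \<le> card (nbr V adj x)"
    proof -
      have "reach_into a x \<subseteq> (\<lambda>y. (y, x)) ` nbr V adj x"
      proof
        fix b assume "b \<in> reach_into a x"
        then have "b \<in> E" "snd b = x" by (auto simp: reach_into_def intro: reach_E)
        then show "b \<in> (\<lambda>y. (y, x)) ` nbr V adj x" using sym by (cases b) (auto simp: in_E nbr_iff)
      qed
      then have "card (reach_into a x) \<le> card ((\<lambda>y. (y, x)) ` nbr V adj x)"
        by (rule card_mono[OF finite_imageI[OF fin_nbr]])
      also have "\<dots> \<le> card (nbr V adj x)" by (rule card_image_le[OF fin_nbr])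
      finally show ?thesis .
    qed
    ultimately show ?thesis by simp
  qed
qed

lemma reach_into_start:
  assumes a: "a \<in> E" and nw: "fst a \<notin> snd ` reach a"
  shows "reach_into a (snd a) = {}"
proof -
  have False if b: "b \<in> reach a" "b \<noteq> a" "snd b = snd a" for b
  proof -
    have "fst b \<in> snd ` reach a" using reach_pred[OF b(1,2)] by force
    then have "fst b \<noteq> fst a" using nw by (cases "fst b = fst a") simp_all
    moreover have "adj (snd a) (fst a)" using a sym by (simp add: in_E')
    ultimately have "(snd a, fst a) \<in> reach a"
      using reach_step[OF b(1)] b(3) by (auto simp: in_E turn_def rev_edge_def)
    then show False using nw by force
  qed
  then show ?thesis unfolding reach_into_def by blast
qed

text \<open>If the non-backtracking walks starting with a never came back to fst a, counting the reached
  edges (other than a) by heads and by tails would give fewer heads than tails.\<close>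

lemma reach_back: assumes a: "a \<in> E" shows "fst a \<in> snd ` reach a"
proof (rule ccontr)
  let ?S = "snd ` reach a"
  assume nw: "fst a \<notin> ?S"
  have finS: "finite ?S" using finite_reach by simp
  have uS: "snd a \<in> ?S" using reach_self[OF a] by blast
  have predS: "fst b \<in> ?S" if "b \<in> reach a" "b \<noteq> a" for b using reach_pred[OF that] by force
  have "card (reach a - {a}) = (\<Sum>x\<in>?S. card (reach_into a x))"
    unfolding reach_into_def by (rule card_by_snd) (use finite_reach finS in auto)
  moreover have "card (reach a - {a}) = (\<Sum>x\<in>?S. card (reach_out a x))"
    unfolding reach_out_def by (rule card_by_fst) (use finite_reach finS predS in auto)
  moreover have "reach_out a (snd a) \<noteq> {}"
  proof -
    have "snd a \<in> V" using E_V[OF a] by simp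
    then obtain y where "y \<in> nbr V adj (snd a)" "y \<noteq> fst a" using exists_other_nbr by blast
    then show ?thesis using reach_out_mem[OF nw reach_self[OF a] refl] by blast
  qed
  then have "card (reach_into a (snd a)) < card (reach_out a (snd a))"
    using reach_into_start[OF a nw] finite_reach by (simp add: reach_out_def card_gt_0_iff)
  then have "\<exists>x\<in>?S. card (reach_into a x) < card (reach_out a x)" using uS by blast
  then have "(\<Sum>x\<in>?S. card (reach_into a x)) < (\<Sum>x\<in>?S. card (reach_out a x))"
    by (intro sum_strict_mono_ex1[OF finS]) (use card_reach_into_le[OF nw] in auto)
  ultimately show False by simp
qed

lemma reach_all: assumes a: "a \<in> E" shows "V \<subseteq> snd ` reach a"
proof -
  let ?R = "reach a" and ?S = "snd ` reach a"
  have wS: "fst a \<in> ?S" by (rule reach_back[OF a])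
  have closed: "y \<in> ?S" if x: "x \<in> ?S" and y: "adj x y" for x y
  proof -
    obtain b where b: "b \<in> ?R" "snd b = x" using x by blast
    show ?thesis
    proof (cases "y = fst b")
      case False
      then have "(x, y) \<in> ?R" using reach_step[OF b(1)] b(2) y by (auto simp: in_E turn_def rev_edge_def)
      then show ?thesis by force
    next
      case True
      show ?thesis
      proof (cases "b = a")
        case True then show ?thesis using wS \<open>y = fst b\<close> by simp
      next
        case False
        then obtain b'' where "b'' \<in> ?R" "snd b'' = fst b" using reach_pred[OF b(1)] by blast
        then show ?thesis using \<open>y = fst b\<close> by force
      qed
    qed
  qed
  have uS: "snd a \<in> ?S" using reach_self[OF a] by blast
  have uV: "snd a \<in> V" using E_V[OF a] by simp
  show ?thesis
  proof
    fix v assume v: "v \<in> V"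
    have "(snd a, v) \<in> {(a, b). adj a b}\<^sup>*" using conn uV v by blast
    then show "v \<in> ?S"
    proof (induction rule: rtrancl_induct)
      case base then show ?case by (rule uS)
    next
      case (step x y) then show ?case using closed by blast
    qed
  qed
qed

lemma reach_edge: assumes e: "e \<in> E" shows "\<exists>y. y \<in> C0 (length y) \<and> last y = e"
proof -
  let ?a = "rev_edge e"
  have a: "?a \<in> E" by (rule E_rev[OF e])
  have "v0 \<in> snd ` reach ?a" using reach_all[OF a] v0 by blast
  then obtain b where b: "b \<in> reach ?a" "snd b = v0" by blast
  then obtain ws where ws: "ws \<noteq> []" "hd ws = ?a" "last ws = b" "set ws \<subseteq> E" "nonbacktracking ws"
    unfolding reach_def by blast
  let ?y = "rev_path ws"
  have "postal V adj ?y" using ws E_rev by (auto simp: postal_iff set_rev_path nonbacktracking_rev_path)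
  moreover have "fst (hd ?y) = v0" using ws b by (simp add: rev_path_def hd_rev last_map)
  moreover have "last ?y = e" using ws by (simp add: rev_path_def last_rev hd_map)
  ultimately show ?thesis by (intro exI[of _ ?y]) (simp add: codes0_iff)
qed

end

section \<open>The deck group acting on the boundary\<close>

lemma lcp_append_same: "lcp (p @ a) (p @ b) = length p + lcp a b"
  by (induction p) auto

lemma lcp_take_self: "n \<le> length l \<Longrightarrow> lcp l (take n l @ b) = n + lcp (drop n l) b"
  using lcp_append_same[of "take n l" "drop n l" b] by simp

lemma lcp_reduced_concat:
  assumes k: "k \<le> length l" "k < length y" and differ: "0 < k \<Longrightarrow> y ! k \<noteq> l ! (length l - k)"
  shows "lcp l (take (length l) (take (length l - k) l @ drop k y)) = length l - k"
proof -
  have "lcp l (take (length l) (take (length l - k) l @ drop k y))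
      = (length l - k) + lcp (drop (length l - k) l) (take k (drop k y))"
    using lcp_take_self[of "length l - k" l] k(1) by (simp add: take_append)
  moreover have "lcp (drop (length l - k) l) (take k (drop k y)) = 0"
  proof (cases "k = 0")
    case False
    have "drop (length l - k) l = l ! (length l - k) # drop (Suc (length l - k)) l"
      using False k(1) by (simp add: Cons_nth_drop_Suc)
    moreover have "take k (drop k y) = y ! k # take (k - 1) (drop (Suc k) y)"
      using False k(2) by (metis Cons_nth_drop_Suc Suc_pred' bot_nat_0.not_eq_extremum take_Suc_Cons)
    ultimately show ?thesis using differ False by simp
  qed simp
  ultimately show ?thesis by simp
qed

definition cancel_length :: "'v edge list \<Rightarrow> (nat \<Rightarrow> 'v edge) \<Rightarrow> nat" where
  "cancel_length l \<omega> = (LEAST k. k = length l \<or> \<omega> k \<noteq> rev_edge (l ! (length l - 1 - k)))"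

lemma cancel_length_le: "cancel_length l \<omega> \<le> length l"
  unfolding cancel_length_def by (rule Least_le) simp

lemma cancel_length_below: "j < cancel_length l \<omega> \<Longrightarrow> \<omega> j = rev_edge (l ! (length l - 1 - j))"
proof -
  assume j: "j < cancel_length l \<omega>"
  then have "\<not> (j = length l \<or> \<omega> j \<noteq> rev_edge (l ! (length l - 1 - j)))"
    unfolding cancel_length_def by (rule not_less_Least)
  then show ?thesis by simp
qed

lemma cancel_length_at: "cancel_length l \<omega> < length l \<Longrightarrow> \<omega> (cancel_length l \<omega>) \<noteq> rev_edge (l ! (length l - 1 - cancel_length l \<omega>))"
proof -
  assume a: "cancel_length l \<omega> < length l"
  have "cancel_length l \<omega> = length l \<or> \<omega> (cancel_length l \<omega>) \<noteq> rev_edge (l ! (length l - 1 - cancel_length l \<omega>))"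
    unfolding cancel_length_def by (rule LeastI[of _ "length l"]) simp
  then show ?thesis using a by simp
qed

lemma cancel_length_eqI: assumes a: "k \<le> length l" "\<forall>j<k. \<omega> j = rev_edge (l ! (length l - 1 - j))"
   "k < length l \<longrightarrow> \<omega> k \<noteq> rev_edge (l ! (length l - 1 - k))" shows "cancel_length l \<omega> = k"
  unfolding cancel_length_def
proof (rule Least_equality)
  show "k = length l \<or> \<omega> k \<noteq> rev_edge (l ! (length l - 1 - k))"
    using a by (cases "k = length l") auto
next
  fix y assume y: "y = length l \<or> \<omega> y \<noteq> rev_edge (l ! (length l - 1 - y))"
  show "k \<le> y"
  proof (rule ccontr)
    assume "\<not> k \<le> y"
    then have "y < k" by simp
    then show False using y a by auto
  qed
qed

lemma eact_eq: "eact l \<omega> = (\<lambda>i. if i < length l - cancel_length l \<omega> then l ! i else \<omega> (i - (length l - cancel_length l \<omega>) + cancel_length l \<omega>))"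
  by (simp only: eact_def cancel_length_def Let_def)

context rooted_graph begin

lemma eact_junction:
  assumes l: "l \<in> GAM" and w: "\<omega> \<in> ENDS" and kl: "cancel_length l \<omega> < length l"
  shows "turn (l ! (length l - cancel_length l \<omega> - 1)) (\<omega> (cancel_length l \<omega>))"
proof -
  let ?L = "length l" and ?k = "cancel_length l \<omega>"
  let ?r = "?L - ?k"
  have lnb: "nonbacktracking l" and lw: "walk v0 l v0" using l by (auto simp: gam_iff)
  have wp: "\<omega> \<in> paths V adj" and w0: "fst (\<omega> 0) = v0" using w by (auto simp: ends_def)
  have neq: "\<omega> ?k \<noteq> rev_edge (l ! (?r - 1))" using cancel_length_at[OF kl] by (simp add: diff_diff_add)
  have "fst (\<omega> ?k) = snd (l ! (?r - 1))"
  proof (cases "?k = 0")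
    case True
    have "l \<noteq> []" using kl by auto
    then have "snd (last l) = v0" using walk_last[OF lw] by simp
    then show ?thesis using True w0 \<open>l \<noteq> []\<close> by (simp add: last_conv_nth)
  next
    case False
    have "\<omega> (?k - 1) = rev_edge (l ! ?r)"
      using cancel_length_below[of "?k - 1" l \<omega>] False kl by (simp add: Suc_diff_le)
    moreover have "turn (\<omega> (?k - 1)) (\<omega> (Suc (?k - 1)))" using wp by (simp add: paths_iff)
    then have "turn (\<omega> (?k - 1)) (\<omega> ?k)" using False by simp
    moreover have rr: "Suc (?r - 1) = ?r" and "?r < ?L" using False kl by simp_all
    then have "turn (l ! (?r - 1)) (l ! ?r)" using lnb unfolding nonbacktracking_def by (metis rr)
    ultimately show ?thesis by (simp add: turn_def)
  qed
  then show ?thesis using neq by (simp add: turn_def)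
qed

lemma eact_ends: assumes l: "l \<in> GAM" and w: "\<omega> \<in> ENDS" shows "eact l \<omega> \<in> ENDS"
proof -
  let ?L = "length l" and ?k = "cancel_length l \<omega>"
  let ?r = "?L - ?k"
  have lE: "set l \<subseteq> E" and lnb: "nonbacktracking l" and lw: "walk v0 l v0" using l by (auto simp: gam_iff)
  have wp: "\<omega> \<in> paths V adj" and w0: "fst (\<omega> 0) = v0" using w by (auto simp: ends_def)
  have kL: "?k \<le> ?L" by (rule cancel_length_le)
  have wt: "turn (\<omega> i) (\<omega> (Suc i))" "\<omega> i \<in> E" for i using wp by (auto simp: paths_iff)
  have "eact l \<omega> \<in> paths V adj"
    unfolding paths_iff eact_eq
  proof
    fix i
    show "(if i < ?r then l ! i else \<omega> (i - ?r + ?k)) \<in> E \<and>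
      turn (if i < ?r then l ! i else \<omega> (i - ?r + ?k)) (if Suc i < ?r then l ! Suc i else \<omega> (Suc i - ?r + ?k))"
    proof (cases "Suc i < ?r")
      case True then show ?thesis using lE lnb by (auto simp: nonbacktracking_def)
    next
      case False
      show ?thesis
      proof (cases "i < ?r")
        case True
        then have "i = ?r - 1" "?k < ?L" using False by auto
        then show ?thesis using eact_junction[OF l w] lE True False by auto
      next
        case False
        then have "Suc i - ?r + ?k = Suc (i - ?r + ?k)" by simp
        then show ?thesis using wt False by simp
      qed
    qed
  qed
  moreover have "fst (eact l \<omega> 0) = v0"
  proof (cases "?r = 0")
    case False
    then have "l \<noteq> []" by auto
    then show ?thesis using False walk_hd[OF lw] by (simp add: eact_eq hd_conv_nth)
  next
    case True
    show ?thesis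
    proof (cases "?L = 0")
      case True then show ?thesis using w0 cancel_length_le[of l \<omega>] by (simp add: eact_eq)
    next
      case False
      then have kl: "?k = ?L" using True kL by simp
      have "\<omega> (?L - 1) = rev_edge (l ! 0)" using cancel_length_below[of "?L - 1" l \<omega>] kl False by simp
      moreover have "fst (\<omega> ?L) = snd (\<omega> (?L - 1))" using wt(1)[of "?L - 1"] False by (simp add: turn_def)
      moreover have "fst (l ! 0) = v0" using walk_hd[OF lw] False by (simp add: hd_conv_nth)
      ultimately show ?thesis using True kl by (simp add: eact_eq)
    qed
  qed
  ultimately show ?thesis by (simp add: ends_def)
qed

lemma eact_prefix:
  assumes eq: "\<forall>i < length l + m. \<omega> i = \<omega>' i" and i: "i < m"
  shows "eact l \<omega> i = eact l \<omega>' i"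
proof -
  have cancel_length: "cancel_length l \<omega>' = cancel_length l \<omega>"
  proof (rule cancel_length_eqI)
    show "cancel_length l \<omega> \<le> length l" by (rule cancel_length_le)
    show "\<forall>j<cancel_length l \<omega>. \<omega>' j = rev_edge (l ! (length l - 1 - j))"
      using cancel_length_below cancel_length_le eq by (metis less_le_trans trans_less_add1)
    show "cancel_length l \<omega> < length l \<longrightarrow> \<omega>' (cancel_length l \<omega>) \<noteq> rev_edge (l ! (length l - 1 - cancel_length l \<omega>))"
      using cancel_length_at eq by (metis trans_less_add1)
  qed
  have "i - (length l - cancel_length l \<omega>) + cancel_length l \<omega> < length l + m" using i cancel_length_le[of l \<omega>] by linarith
  then show ?thesis using cancel_length eq by (simp add: eact_eq)
qed

lemma prefix_clopen:
  assumes N: "1 \<le> N" and S: "S \<subseteq> ENDS"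
    and det: "\<And>\<omega> \<omega>'. \<omega> \<in> ENDS \<Longrightarrow> \<omega>' \<in> ENDS \<Longrightarrow> map \<omega> [0..<N] = map \<omega>' [0..<N] \<Longrightarrow> \<omega> \<in> S \<Longrightarrow> \<omega>' \<in> S"
  shows "CLOPEN S"
proof -
  let ?C = "{c\<in>C0 N. P c \<subseteq> S}"
  have "S = (\<Union>c\<in>?C. P c)"
  proof
    show "S \<subseteq> (\<Union>c\<in>?C. P c)"
    proof
      fix \<omega> assume w: "\<omega> \<in> S"
      then have we: "\<omega> \<in> ENDS" using S by blast
      have c: "map \<omega> [0..<N] \<in> C0 N" "\<omega> \<in> P (map \<omega> [0..<N])" using ends_prefix[OF we] N by auto
      have "P (map \<omega> [0..<N]) \<subseteq> S"
      proof
        fix \<omega>' assume w': "\<omega>' \<in> P (map \<omega> [0..<N])"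
        then have "\<omega>' \<in> ENDS" using district_ends c(1) by blast
        moreover have "map \<omega>' [0..<N] = map \<omega> [0..<N]" using w' by (simp add: district_iff)
        ultimately show "\<omega>' \<in> S" using det[OF we] w by metis
      qed
      then show "\<omega> \<in> (\<Union>c\<in>?C. P c)" using c by blast
    qed
  qed blast
  moreover have "finite ?C" using fin_codes0[of N] by simp
  moreover have "\<forall>c\<in>?C. postal V adj c \<and> fst (hd c) = v0" by (auto simp: codes0_iff)
  moreover have "\<forall>c\<in>?C. \<forall>d\<in>?C. c \<noteq> d \<longrightarrow> P c \<inter> P d = {}"
    by (auto simp: codes0_iff intro!: district_disj)
  ultimately show ?thesis unfolding clopen_def by blast
qed

abbreviation "PRE l A \<equiv> {\<omega> \<in> ENDS. eact l \<omega> \<in> A}"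

lemma pre_clopen: assumes l: "l \<in> GAM" and c: "c \<in> C0 m" shows "CLOPEN (PRE l (P c))"
proof (rule prefix_clopen[of "length l + m"])
  show "1 \<le> length l + m" using C0_pos[OF c] by simp
  show "PRE l (P c) \<subseteq> ENDS" by blast
next
  fix \<omega> \<omega>' assume w: "\<omega> \<in> ENDS" "\<omega>' \<in> ENDS" and eq: "map \<omega> [0..<length l + m] = map \<omega>' [0..<length l + m]"
    and in1: "\<omega> \<in> PRE l (P c)"
  have eqi: "\<forall>i < length l + m. \<omega> i = \<omega>' i" using eq by (metis add_0 nth_map_upt diff_zero)
  have lc: "length c = m" using c by (simp add: codes0_iff)
  have "map (eact l \<omega>') [0..<m] = map (eact l \<omega>) [0..<m]"
    using eact_prefix[OF eqi] by simp
  moreover have "map (eact l \<omega>) [0..<m] = c" using in1 lc by (simp add: district_iff)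
  moreover have "eact l \<omega>' \<in> paths V adj" using eact_ends[OF l w(2)] by (simp add: ends_def)
  ultimately show "\<omega>' \<in> PRE l (P c)" using w(2) lc by (simp add: district_iff)
qed

lemma FAE_Union_clopen:
  assumes nu: "\<nu> \<in> FAE" and "finite I" and "\<forall>i\<in>I. CLOPEN (A i)"
    and "\<forall>i\<in>I. \<forall>j\<in>I. i \<noteq> j \<longrightarrow> A i \<inter> A j = {}"
  shows "CLOPEN (\<Union>i\<in>I. A i) \<and> \<nu> (\<Union>i\<in>I. A i) = (\<Sum>i\<in>I. \<nu> (A i))"
  using assms(2-)
proof (induction I rule: finite_induct)
  case empty
  then show ?case using FAE_empty[OF nu] clopen_empty by simp
next
  case (insert i I)
  have IH: "CLOPEN (\<Union>i\<in>I. A i) \<and> \<nu> (\<Union>i\<in>I. A i) = (\<Sum>i\<in>I. \<nu> (A i))"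
    by (rule insert.IH) (use insert.prems in auto)
  have ci: "CLOPEN (A i)" using insert.prems by simp
  have "\<forall>j\<in>I. A i \<inter> A j = {}" using insert.prems(2) insert.hyps(2) by (metis insertCI)
  then have dis: "A i \<inter> (\<Union>i\<in>I. A i) = {}" by blast
  show ?case using clopen_Un[OF ci conjunct1[OF IH] dis] FAE_add[OF nu ci conjunct1[OF IH] dis] IH insert.hyps
    by simp
qed

lemma push_district_additive: assumes nu: "\<nu> \<in> FAE" and l: "l \<in> GAM" shows "district_additive (push V adj v0 l \<nu>)"
  unfolding district_additive_def
proof (intro allI impI)
  fix n c assume c: "c \<in> C0 n"
  have pc: "postal V adj c" "c \<noteq> []" using c by (auto simp: codes0_iff postal_iff)
  have ce: "c @ [e] \<in> C0 (Suc n)" if "e \<in> succs (last c)" for e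
    using c that codes0_Suc[of n] C0_pos[OF c] by auto
  have "PRE l (P c) = (\<Union>e\<in>succs (last c). PRE l (P (c @ [e])))"
    using district_snoc[OF pc(1)] by auto
  moreover have "CLOPEN (\<Union>e\<in>succs (last c). PRE l (P (c @ [e]))) \<and>
     \<nu> (\<Union>e\<in>succs (last c). PRE l (P (c @ [e]))) = (\<Sum>e\<in>succs (last c). \<nu> (PRE l (P (c @ [e]))))"
  proof (rule FAE_Union_clopen[OF nu fin_succs])
    show "\<forall>e\<in>succs (last c). CLOPEN (PRE l (P (c @ [e])))" using pre_clopen[OF l] ce by blast
    show "\<forall>e\<in>succs (last c). \<forall>e'\<in>succs (last c). e \<noteq> e' \<longrightarrow> PRE l (P (c @ [e])) \<inter> PRE l (P (c @ [e'])) = {}"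
    proof (intro ballI impI)
      fix e assume "e \<in> succs (last c)"
      fix e' assume "e' \<in> succs (last c)" "e \<noteq> e'"
      then have "P (c @ [e]) \<inter> P (c @ [e']) = {}" by (intro district_disj) auto
      then show "PRE l (P (c @ [e])) \<inter> PRE l (P (c @ [e'])) = {}" by blast
    qed
  qed
  ultimately show "push V adj v0 l \<nu> (P c) = (\<Sum>e\<in>succs (last c). push V adj v0 l \<nu> (P (c @ [e])))"
    by (simp add: push_def)
qed

lemma cgam_val: assumes w: "\<omega> \<in> P d" and len: "length l \<le> length d"
  shows "cgam a l \<omega> = a powi (int (length l) - 2 * int (lcp l (take (length l) d)))"
proof -
  have "map \<omega> [0..<length d] = d" using w by (simp add: district_iff)
  then have "take (length l) (map \<omega> [0..<length d]) = take (length l) d" by simp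
  then have m: "map \<omega> [0..<length l] = take (length l) d" using len by (simp add: take_map)
  show ?thesis by (simp add: cgam_def horo_def tdist_def m)
qed

lemma ind_Un: "A \<inter> B = {} \<Longrightarrow> ind (A \<union> B) x = ind A x + ind B x"
  by (auto simp: ind_def)

lemma twist_const: assumes "length l \<le> M" "decided A M"
  shows "const_level (\<lambda>\<omega>. ind A \<omega> * cgam a l \<omega>) M"
  unfolding const_level_def
proof (intro ballI)
  fix c \<omega> \<omega>' assume c: "c \<in> C0 M" and w: "\<omega> \<in> P c" "\<omega>' \<in> P c"
  have lc: "length c = M" using c by (simp add: codes0_iff)
  have "P c \<subseteq> A \<or> P c \<inter> A = {}" using assms(2) c unfolding decided_def by blast
  then have "\<omega> \<in> A \<longleftrightarrow> \<omega>' \<in> A" using w by blast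
  then have "ind A \<omega> = ind A \<omega>'" by (simp add: ind_def)
  moreover have "cgam a l \<omega> = cgam a l \<omega>'" using cgam_val[OF w(1)] cgam_val[OF w(2)] assms(1) lc by simp
  ultimately show "ind A \<omega> * cgam a l \<omega> = ind A \<omega>' * cgam a l \<omega>'" by simp
qed

lemma twist_level:
  assumes nu: "\<nu> \<in> FAE" and l: "l \<in> GAM" and A: "CLOPEN A" and M: "1 \<le> M" "length l \<le> M" "decided A M"
  shows "twist V adj v0 a l \<nu> A = (\<Sum>c\<in>C0 M. ind A (district_rep c) * cgam a l (district_rep c) * \<nu> (PRE l (P c)))"
  using A integ_level[OF push_district_additive[OF nu l] M(1) twist_const[OF M(2,3)]]
  by (simp add: twist_def push_def)

lemma twist_FAE: assumes nu: "\<nu> \<in> FAE" and l: "l \<in> GAM" shows "twist V adj v0 a l \<nu> \<in> FAE"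
  unfolding FAend_def
proof (intro CollectI conjI allI impI)
  fix A assume "\<not> CLOPEN A" then show "twist V adj v0 a l \<nu> A = 0" by (simp add: twist_def)
next
  fix A B assume A: "CLOPEN A" and B: "CLOPEN B" and AB: "A \<inter> B = {}"
  obtain ka where ka: "1 \<le> ka" "decided A ka" using clopen_decided[OF A] by blast
  obtain kb where kb: "1 \<le> kb" "decided B kb" using clopen_decided[OF B] by blast
  define M where "M = max (max ka kb) (length l)"
  have M: "1 \<le> M" "length l \<le> M" "decided A M" "decided B M"
    using ka kb decided_mono[OF ka(2) ka(1), of M] decided_mono[OF kb(2) kb(1), of M] by (auto simp: M_def)
  have MAB: "decided (A \<union> B) M" using M(3,4) unfolding decided_def by blast
  have "twist V adj v0 a l \<nu> (A \<union> B) = (\<Sum>c\<in>C0 M. ind (A \<union> B) (district_rep c) * cgam a l (district_rep c) * \<nu> (PRE l (P c)))"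
    by (rule twist_level[OF nu l clopen_Un[OF A B AB] M(1,2) MAB])
  also have "\<dots> = (\<Sum>c\<in>C0 M. ind A (district_rep c) * cgam a l (district_rep c) * \<nu> (PRE l (P c))) + (\<Sum>c\<in>C0 M. ind B (district_rep c) * cgam a l (district_rep c) * \<nu> (PRE l (P c)))"
    by (simp add: ind_Un[OF AB] sum.distrib[symmetric] algebra_simps)
  also have "\<dots> = twist V adj v0 a l \<nu> A + twist V adj v0 a l \<nu> B"
    using twist_level[OF nu l A M(1,2,3)] twist_level[OF nu l B M(1,2,4)] by simp
  finally show "twist V adj v0 a l \<nu> (A \<union> B) = twist V adj v0 a l \<nu> A + twist V adj v0 a l \<nu> B" .
qed

lemma twist_district:
  assumes nu: "\<nu> \<in> FAE" and l: "l \<in> GAM" and d: "d \<in> C0 M" and M: "length l \<le> M"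
  shows "twist V adj v0 a l \<nu> (P d) = a powi (int (length l) - 2 * int (lcp l (take (length l) d))) * \<nu> (PRE l (P d))"
proof -
  have M1: "1 \<le> M" by (rule C0_pos[OF d])
  have "twist V adj v0 a l \<nu> (P d) = (\<Sum>c\<in>C0 M. ind (P d) (district_rep c) * cgam a l (district_rep c) * \<nu> (PRE l (P c)))"
    by (rule twist_level[OF nu l clopen_district[OF d] M1 M decided_district[OF d]])
  also have "\<dots> = (\<Sum>c\<in>C0 M. if c = d then cgam a l (district_rep d) * \<nu> (PRE l (P d)) else 0)"
  proof (rule sum.cong[OF refl])
    fix c assume c: "c \<in> C0 M"
    show "ind (P d) (district_rep c) * cgam a l (district_rep c) * \<nu> (PRE l (P c)) = (if c = d then cgam a l (district_rep d) * \<nu> (PRE l (P d)) else 0)"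
    proof (cases "c = d")
      case True then show ?thesis using district_rep_C0[OF d] by (simp add: ind_def)
    next
      case False
      then have "P c \<inter> P d = {}" using c d district_disj by (simp add: codes0_iff)
      then have "district_rep c \<notin> P d" using district_rep_C0[OF c] by blast
      then show ?thesis using False by (simp add: ind_def)
    qed
  qed
  also have "\<dots> = cgam a l (district_rep d) * \<nu> (PRE l (P d))" using d fin_codes0 by simp
  also have "cgam a l (district_rep d) = a powi (int (length l) - 2 * int (lcp l (take (length l) d)))"
    using cgam_val[OF district_rep_C0[OF d]] M d by (simp add: codes0_iff)
  finally show ?thesis .
qed

lemma tv_C0: "TV d \<Longrightarrow> d \<noteq> [] \<Longrightarrow> d \<in> C0 (length d)"
  by (simp add: treevert_def codes0_iff)

lemma C0_tv: "d \<in> C0 n \<Longrightarrow> TV d"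
  by (simp add: treevert_def codes0_iff)

lemma cancel_length_PRE_reduced:
  assumes l: "l \<in> GAM" and ynb: "nonbacktracking y"
    and k: "k \<le> length l" "k < length y" "\<forall>j<k. y!j = rev_edge (l!(length l - 1 - j))"
    and w: "\<omega> \<in> PRE l (P (take (length l - k) l @ drop k y))"
  shows "cancel_length l \<omega> = k"
proof (rule ccontr)
  let ?L = "length l" and ?k' = "cancel_length l \<omega>"
  define d where "d = take (?L - k) l @ drop k y"
  have ld: "length d = (?L - k) + (length y - k)" using k(1) by (simp add: d_def)
  have ed: "eact l \<omega> i = d ! i" if "i < length d" for i using w that by (simp add: district_def d_def)
  have wp: "\<omega> \<in> paths V adj" using w by (simp add: ends_def)
  have k'L: "?k' \<le> ?L" by (rule cancel_length_le)
  assume ne: "?k' \<noteq> k"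
  show False
  proof (cases "?k' < k")
    case True
    have "?L - k < ?L - ?k'" using True k(1) by linarith
    then have "eact l \<omega> (?L - k) = l ! (?L - k)" by (simp add: eact_eq)
    moreover have "d ! (?L - k) = y ! k" using k(1,2) by (simp add: nth_append d_def)
    ultimately have "y ! k = l ! (?L - k)" using ed[of "?L - k"] ld k(2) by simp
    then show False using nonbacktracking_first_uncancelled[OF ynb k(3)] True k by simp
  next
    case False
    then have gt: "k < ?k'" using ne by simp
    have "eact l \<omega> (?L - ?k') = \<omega> ?k'" using gt k'L by (simp add: eact_eq)
    moreover have "?L - ?k' < ?L - k" using gt k'L by linarith
    then have "d ! (?L - ?k') = l ! (?L - ?k')" by (simp add: nth_append d_def)
    ultimately have e1: "\<omega> ?k' = l ! (?L - ?k')" using ed[of "?L - ?k'"] ld k(2) gt k'L by simp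
    have "\<omega> (?k' - 1) = rev_edge (l ! (?L - ?k'))"
      using cancel_length_below[of "?k' - 1" l \<omega>] gt k'L by (simp add: Suc_diff_le)
    moreover have "turn (\<omega> (?k' - 1)) (\<omega> ?k')"
      using wp gt by (metis Suc_pred' gr_zeroI less_nat_zero_code paths_iff)
    ultimately show False using e1 by (auto simp: turn_def)
  qed
qed

lemma PRE_reduced_sub_district:
  assumes l: "l \<in> GAM" and ynb: "nonbacktracking y"
    and k: "k \<le> length l" "k < length y" "\<forall>j<k. y!j = rev_edge (l!(length l - 1 - j))"
  shows "PRE l (P (take (length l - k) l @ drop k y)) \<subseteq> P y"
proof
  let ?L = "length l"
  fix \<omega> assume w: "\<omega> \<in> PRE l (P (take (?L - k) l @ drop k y))"
  have klen: "cancel_length l \<omega> = k" by (rule cancel_length_PRE_reduced[OF l ynb k w])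
  have ed: "eact l \<omega> i = (take (?L - k) l @ drop k y) ! i" if "i < ?L - k + (length y - k)" for i
    using w that k(1) by (simp add: district_def)
  have "\<omega> j = y ! j" if j: "j < length y" for j
  proof (cases "j < k")
    case True then show ?thesis using cancel_length_below[of j l \<omega>] klen k(3) by simp
  next
    case False
    let ?i = "j - k + (?L - k)"
    have ni: "\<not> ?i < ?L - k" and idx: "?i - (?L - k) + k = j" using False by simp_all
    then have "eact l \<omega> ?i = \<omega> j" by (simp add: eact_eq klen del: diff_diff_left)
    moreover have "(take (?L - k) l @ drop k y) ! ?i = drop k y ! (?i - (?L - k))"
      using ni k(1) by (simp add: nth_append)
    moreover have "drop k y ! (?i - (?L - k)) = y ! j" using idx False j by simp
    ultimately show ?thesis using ed[of ?i] j False by simp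
  qed
  then show "\<omega> \<in> P y" using w by (simp add: district_def ends_def)
qed

lemma district_sub_PRE_reduced:
  assumes l: "l \<in> GAM" and y: "y \<in> C0 (length y)"
    and k: "k \<le> length l" "k < length y" "\<forall>j<k. y!j = rev_edge (l!(length l - 1 - j))"
      "k < length l \<longrightarrow> y!k \<noteq> rev_edge (l!(length l - 1 - k))"
  shows "P y \<subseteq> PRE l (P (take (length l - k) l @ drop k y))"
proof
  let ?L = "length l"
  define d where "d = take (?L - k) l @ drop k y"
  fix \<omega> assume w: "\<omega> \<in> P y"
  have we: "\<omega> \<in> ENDS" using district_ends[OF y] w by blast
  have wy: "\<omega> j = y ! j" if "j < length y" for j using w that by (simp add: district_def)
  have klen: "cancel_length l \<omega> = k"
    by (rule cancel_length_eqI) (use k wy in auto)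
  have "map (eact l \<omega>) [0..<length d] = d"
  proof (rule nth_equalityI)
    fix i assume "i < length (map (eact l \<omega>) [0..<length d])"
    then have i: "i < length d" by simp
    show "map (eact l \<omega>) [0..<length d] ! i = d ! i"
    proof (cases "i < ?L - k")
      case True then show ?thesis using i k(1) by (simp add: eact_eq klen nth_append d_def)
    next
      case False
      have "i - (?L - k) + k < length y" using i k(1) False by (simp add: d_def)
      then show ?thesis using i k(1) False wy by (simp add: eact_eq klen nth_append ac_simps d_def)
    qed
  qed simp
  moreover have "eact l \<omega> \<in> paths V adj" using eact_ends[OF l we] by (simp add: ends_def)
  ultimately show "\<omega> \<in> PRE l (P (take (?L - k) l @ drop k y))" using we by (simp add: district_iff d_def)
qed

lemma tact_long:
  assumes l: "l \<in> GAM" and y: "y \<in> C0 (length y)" and ly: "length y \<ge> 2 * length l + 1"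
  defines "d \<equiv> tact l y"
  shows "d \<in> C0 (length d) \<and> last d = last y \<and> length l \<le> length d \<and>
    int (length l) - 2 * int (lcp l (take (length l) d)) = int (length y) - int (length d) \<and>
    PRE l (P d) = P y"
proof -
  let ?L = "length l"
  obtain k where k: "k \<le> ?L" "k \<le> length y" "d = take (?L - k) l @ drop k y"
    "\<forall>j<k. y!j = rev_edge (l!(?L - 1 - j))"
    "k < ?L \<and> k < length y \<longrightarrow> y!k \<noteq> rev_edge (l!(?L - 1 - k))"
    using tact_char[of l y] unfolding d_def by blast
  have ky: "k < length y" using k(1) ly by linarith
  have ld: "length d = (?L - k) + (length y - k)" using k(3) k(1) by simp
  have ynb: "nonbacktracking y" using y by (simp add: codes0_iff postal_iff)
  have "TV d" using tact_tv[OF l C0_tv[OF y]] d_def by simp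
  moreover have "d \<noteq> []" using ld ky by auto
  ultimately have dC: "d \<in> C0 (length d)" by (rule tv_C0)
  have lastd: "last d = last y" using k(3) ky by simp
  have "lcp l (take ?L d) = ?L - k"
    unfolding k(3) by (rule lcp_reduced_concat[OF k(1) ky nonbacktracking_first_uncancelled[OF ynb k(4) _ k(1) ky]])
  then have expo: "int ?L - 2 * int (lcp l (take ?L d)) = int (length y) - int (length d)"
    using ld k(1) k(2) by simp
  have "PRE l (P d) = P y"
    unfolding k(3) using k ky
    by (intro equalityI PRE_reduced_sub_district[OF l ynb] district_sub_PRE_reduced[OF l y]) auto
  then show ?thesis using dC lastd ld k(1) ly expo by simp
qed

lemma rev_path_gam: "l \<in> GAM \<Longrightarrow> rev_path l \<in> GAM"
  using walk_rev_path E_rev by (auto simp: gam_iff set_rev_path nonbacktracking_rev_path)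

lemma tact_rev_path: assumes l: "l \<in> GAM" and c: "TV c"
  shows "tact l (tact (rev_path l) c) = c \<and> length c \<le> length (tact (rev_path l) c) + length l"
proof -
  let ?L = "length l"
  obtain k where k: "k \<le> length (rev_path l)" "k \<le> length c"
    "tact (rev_path l) c = take (length (rev_path l) - k) (rev_path l) @ drop k c"
    "\<forall>j<k. c!j = rev_edge (rev_path l!(length (rev_path l) - 1 - j))"
    using tact_char[of "rev_path l" c] by blast
  have kL: "k \<le> ?L" using k(1) by simp
  have cj: "c ! j = l ! j" if "j < k" for j
    using k(4) that kL by (simp add: rev_path_nth)
  have tk: "take k c = take k l"
    by (rule nth_equalityI) (use k(2) kL cj in auto)
  have tl: "take (?L - k) (rev_path l) = rev_path (drop k l)"
  proof -
    have "rev_path l = rev_path (drop k l) @ rev_path (take k l)" by (metis append_take_drop_id rev_path_append)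
    moreover have "length (rev_path (drop k l)) = ?L - k" by simp
    ultimately show ?thesis by (metis append_eq_conv_conj)
  qed
  have y: "tact (rev_path l) c = rev_path (drop k l) @ drop k c" using k(3) tl by simp
  have "tact l (tact (rev_path l) c) = tact (take k l @ rev_path (rev_path (drop k l))) (rev_path (drop k l) @ drop k c)"
    using y by simp
  also have "\<dots> = tact (take k l) (drop k c)" by (rule tact_cancel)
  also have "\<dots> = take k l @ drop k c"
  proof (rule tact_noncancel)
    show "drop k c = [] \<or> take k l = [] \<or> hd (drop k c) \<noteq> rev_edge (last (take k l))"
    proof (cases "drop k c = [] \<or> take k l = []")
      case False
      then have kp: "0 < k" "k < length c" by auto
      have "take k l = take (k - 1) l @ [l ! (k - 1)]" using take_Suc_conv_app_nth[of "k - 1" l] kp kL by simp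
      then have "last (take k l) = c ! (k - 1)" using kp cj[of "k - 1"] by simp
      moreover have "hd (drop k c) = c ! k" using kp by (simp add: hd_drop_conv_nth)
      moreover have "turn (c ! (k - 1)) (c ! k)"
      proof -
        have "Suc (k - 1) < length c" using kp by simp
        moreover have "nonbacktracking c" using c by (simp add: tv_iff)
        ultimately have "turn (c ! (k - 1)) (c ! Suc (k - 1))" by (simp add: nonbacktracking_def)
        then show ?thesis using kp by simp
      qed
      ultimately show ?thesis by (auto simp: turn_def)
    qed blast
  qed
  also have "\<dots> = c" using tk by (metis append_take_drop_id)
  finally show ?thesis using y k(2) kL by simp
qed

end

context rooted_graph_eigen begin

abbreviation "FAI \<equiv> FAinv V adj v0 z"

lemma C0_snoc: assumes c: "c \<in> C0 n" and e: "e \<in> succs (last c)" shows "c @ [e] \<in> C0 (Suc n)"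
proof -
  have cp: "postal V adj c" "length c = n" "fst (hd c) = v0" "c \<noteq> []" using c by (auto simp: codes0_iff postal_iff)
  have "postal V adj (c @ [e])" using postal_snoc[OF cp(1)] e by (simp add: succs_def)
  then show ?thesis using cp by (simp add: codes0_iff)
qed

lemma FAE_eq_long: assumes nu: "\<nu>1 \<in> FAE" "\<nu>2 \<in> FAE"
  and eq: "\<And>c. c \<in> C0 (length c) \<Longrightarrow> length c \<ge> K \<Longrightarrow> \<nu>1 (P c) = \<nu>2 (P c)"
  shows "\<nu>1 = \<nu>2"
proof (rule FAE_eqI[OF nu])
  fix n c assume c: "c \<in> C0 n"
  define M where "M = max n K"
  have n1: "1 \<le> n" by (rule C0_pos[OF c])
  have M: "1 \<le> M" "n \<le> M" using n1 by (auto simp: M_def)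
  have dM: "decided (P c) M" using decided_mono[OF decided_district[OF c] n1 M(2)] .
  have "\<nu>1 (P c) = (\<Sum>d\<in>{d\<in>C0 M. P d \<subseteq> P c}. \<nu>1 (P d))"
    by (rule FAE_level[OF nu(1) clopen_district[OF c] M(1) dM])
  also have "\<dots> = (\<Sum>d\<in>{d\<in>C0 M. P d \<subseteq> P c}. \<nu>2 (P d))"
  proof (rule sum.cong[OF refl])
    fix d assume "d \<in> {d\<in>C0 M. P d \<subseteq> P c}"
    then have d: "d \<in> C0 M" by simp
    then have "length d = M" by (simp add: codes0_iff)
    then show "\<nu>1 (P d) = \<nu>2 (P d)" using eq d by (simp add: M_def)
  qed
  also have "\<dots> = \<nu>2 (P c)"
    by (rule FAE_level[OF nu(2) clopen_district[OF c] M(1) dM, symmetric])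
  finally show "\<nu>1 (P c) = \<nu>2 (P c)" .
qed

lemma powi_diff_shift: assumes "a \<ge> 1" "b \<ge> 1"
  shows "z powi (int a - int b) * (x / z ^ (a - 1)) = x / z ^ (b - 1)"
proof -
  obtain a' b' where ab: "a = Suc a'" "b = Suc b'" using assms by (metis Suc_pred' less_eq_Suc_le One_nat_def)
  have "z powi (int a - int b) = z ^ a / z ^ b" using z_nonzero by (simp add: power_int_diff)
  then show ?thesis using z_nonzero ab by (simp add: field_simps)
qed

lemma Res_FAI: assumes mu: "\<mu> \<in> EIG" shows "RES \<mu> \<in> FAI"
proof -
  have fa: "\<mu> \<in> FAP" using mu by (simp add: eigFA_iff)
  have nu: "RES \<mu> \<in> FAE" by (rule Res_FAE[OF fa])
  have "twist V adj v0 z l (RES \<mu>) = RES \<mu>" if l: "l \<in> GAM" for l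
  proof (rule FAE_eq_long[OF twist_FAE[OF nu l] nu])
    fix c assume c: "c \<in> C0 (length c)" and lc: "3 * length l + 1 \<le> length c"
    define y where "y = tact (rev_path l) c"
    have tc: "TV c" using C0_tv[OF c] .
    have tl: "tact l y = c" "length c \<le> length y + length l" using tact_rev_path[OF l tc] by (auto simp: y_def)
    have ty: "TV y" using tact_tv[OF rev_path_gam[OF l] tc] by (simp add: y_def)
    have ly: "length y \<ge> 2 * length l + 1" using tl(2) lc by linarith
    have "y \<noteq> []" using ly by auto
    then have yC: "y \<in> C0 (length y)" using tv_C0[OF ty] by simp
    have TL: "c \<in> C0 (length c) \<and> last c = last y \<and> length l \<le> length c \<and>
      int (length l) - 2 * int (lcp l (take (length l) c)) = int (length y) - int (length c) \<and>
      PRE l (P c) = P y" using tact_long[OF l yC ly] tl(1) by simp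
    have "twist V adj v0 z l (RES \<mu>) (P c) = z powi (int (length y) - int (length c)) * RES \<mu> (P y)"
      using twist_district[OF nu l c] TL by simp
    also have "RES \<mu> (P y) = \<mu> [last y] / z ^ (length y - 1)"
      using Res_district[OF fa yC] eig_formula[OF mu] yC by (simp add: codes0_iff)
    also have "z powi (int (length y) - int (length c)) * (\<mu> [last y] / z ^ (length y - 1)) = \<mu> [last y] / z ^ (length c - 1)"
      by (rule powi_diff_shift) (use ly lc in auto)
    also have "\<dots> = RES \<mu> (P c)"
      using Res_district[OF fa c] eig_formula[OF mu] c TL by (simp add: codes0_iff)
    finally show "twist V adj v0 z l (RES \<mu>) (P c) = RES \<mu> (P c)" .
  qed
  then show ?thesis using nu by (simp add: FAinv_def)
qed

lemma Res_inj: "inj_on RES EIG"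
proof
  fix \<mu> \<mu>' assume mu: "\<mu> \<in> EIG" "\<mu>' \<in> EIG" and eq: "RES \<mu> = RES \<mu>'"
  show "\<mu> = \<mu>'"
  proof (rule eig_ext[OF mu])
    fix e assume e: "e \<in> E"
    obtain y where y: "y \<in> C0 (length y)" "last y = e" using reach_edge[OF e] by blast
    have fa: "\<mu> \<in> FAP" "\<mu>' \<in> FAP" using mu by (auto simp: eigFA_iff)
    have "\<mu> y = \<mu>' y" using Res_district[OF fa(1) y(1)] Res_district[OF fa(2) y(1)] eq by simp
    moreover have "\<mu> y = \<mu> [e] / z ^ (length y - 1)" "\<mu>' y = \<mu>' [e] / z ^ (length y - 1)"
      using eig_formula[OF mu(1)] eig_formula[OF mu(2)] y by (auto simp: codes0_iff)
    ultimately show "\<mu> [e] = \<mu>' [e]" using z_nonzero by simp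
  qed
qed

lemma C0_swap: assumes y: "y \<in> C0 (length y)" and y': "y' \<in> C0 (length y')" and ll: "last y = last y'"
  and ys: "y @ s \<in> C0 (length (y @ s))"
  shows "y' @ s \<in> C0 (length (y' @ s))"
proof -
  have yp: "y \<noteq> []" "set y \<subseteq> E" "nonbacktracking y" and y'p: "y' \<noteq> []" "set y' \<subseteq> E" "nonbacktracking y'" "fst (hd y') = v0"
    using y y' by (auto simp: codes0_iff postal_iff)
  have ysp: "set (y @ s) \<subseteq> E" "nonbacktracking (y @ s)" using ys by (auto simp: codes0_iff postal_iff)
  have "nonbacktracking (y' @ s)" using ysp(2) y'p(3) ll yp(1) y'p(1) by (simp add: nonbacktracking_append)
  moreover have "set (y' @ s) \<subseteq> E" using ysp(1) y'p(2) by auto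
  ultimately show ?thesis using y'p(1,4) by (simp add: codes0_iff postal_iff)
qed

definition scaled_mass :: "((nat \<Rightarrow> 'a edge) set \<Rightarrow> complex) \<Rightarrow> 'a edge list \<Rightarrow> complex" where
  "scaled_mass \<nu> c = z ^ length c * \<nu> (P c)"

lemma scaled_mass_succs:
  assumes nu: "\<nu> \<in> FAE" and c: "c \<in> C0 (length c)"
  shows "scaled_mass \<nu> c = (\<Sum>e\<in>succs (last c). scaled_mass \<nu> (c @ [e])) / z"
proof -
  have "\<nu> (P c) = (\<Sum>e\<in>succs (last c). \<nu> (P (c @ [e])))"
    using FAE_DA[OF nu] c unfolding district_additive_def by blast
  then show ?thesis using z_nonzero by (simp add: scaled_mass_def sum_distrib_left sum_divide_distrib field_simps)
qed

lemma scaled_mass_tact: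
  assumes nu: "\<nu> \<in> FAI" and l: "l \<in> GAM" and y: "y \<in> C0 (length y)"
    and ly: "length y \<ge> 2 * length l + 1"
  shows "scaled_mass \<nu> (tact l y) = scaled_mass \<nu> y"
proof -
  define d where "d = tact l y"
  have TL: "d \<in> C0 (length d) \<and> last d = last y \<and> length l \<le> length d \<and>
    int (length l) - 2 * int (lcp l (take (length l) d)) = int (length y) - int (length d) \<and>
    PRE l (P d) = P y" using tact_long[OF l y ly] by (simp add: d_def)
  have nuE: "\<nu> \<in> FAE" using nu by (simp add: FAinv_def)
  have "\<nu> (P d) = twist V adj v0 z l \<nu> (P d)" using nu l by (simp add: FAinv_def)
  also have "\<dots> = z powi (int (length y) - int (length d)) * \<nu> (P y)"
    using twist_district[OF nuE l, of d "length d"] TL by simp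
  finally have "z ^ length d * \<nu> (P d) = z ^ length d * z powi (int (length y) - int (length d)) * \<nu> (P y)"
    by simp
  also have "z ^ length d * z powi (int (length y) - int (length d)) = z ^ length y"
    using z_nonzero by (simp add: power_int_diff)
  finally show ?thesis by (simp add: scaled_mass_def d_def)
qed

text \<open>Two codes with the same last edge are translates of each other after a common long extension;
  invariance handles long extensions and additivity propagates the equality back down.\<close>

lemma scaled_mass_last:
  assumes nu: "\<nu> \<in> FAI" and y: "y \<in> C0 (length y)" and y': "y' \<in> C0 (length y')"
    and ll: "last y = last y'"
  shows "scaled_mass \<nu> y = scaled_mass \<nu> y'"
proof -
  have nuE: "\<nu> \<in> FAE" using nu by (simp add: FAinv_def)
  have ty: "TV y" and ty': "TV y'" using C0_tv y y' by auto
  have "y \<noteq> []" "y' \<noteq> []" using y y' by (auto simp: codes0_iff postal_iff)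
  then have pr: "PR y' = PR y" using ll by (simp add: pr_def)
  define l where "l = tact y' (rev_path y)"
  have l: "l \<in> GAM" using tact_rebase[OF ty' ty pr] by (simp add: l_def)
  have "\<forall>s. 2 * length l + 1 \<le> length s + j \<longrightarrow> y @ s \<in> C0 (length (y @ s)) \<longrightarrow>
      scaled_mass \<nu> (y @ s) = scaled_mass \<nu> (y' @ s)" for j
  proof (induction j)
    case 0
    show ?case
    proof (intro allI impI)
      fix s assume s: "2 * length l + 1 \<le> length s + 0" and ys: "y @ s \<in> C0 (length (y @ s))"
      have "nonbacktracking (y' @ s)"
        using C0_swap[OF y y' ll ys] by (simp add: codes0_iff postal_iff)
      then have "tact l (y @ s) = y' @ s" unfolding l_def by (rule tact_rebase_append[OF ty' ty pr])
      then show "scaled_mass \<nu> (y @ s) = scaled_mass \<nu> (y' @ s)"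
        using scaled_mass_tact[OF nu l ys] s by simp
    qed
  next
    case (Suc j)
    show ?case
    proof (intro allI impI)
      fix s assume s: "2 * length l + 1 \<le> length s + Suc j" and ys: "y @ s \<in> C0 (length (y @ s))"
      have y's: "y' @ s \<in> C0 (length (y' @ s))" by (rule C0_swap[OF y y' ll ys])
      have lst: "last (y @ s) = last (y' @ s)" using ll by (cases "s = []") auto
      have ext: "scaled_mass \<nu> (y @ s @ [e]) = scaled_mass \<nu> (y' @ s @ [e])"
        if e: "e \<in> succs (last (y @ s))" for e
      proof -
        have "y @ (s @ [e]) \<in> C0 (length (y @ (s @ [e])))" using C0_snoc[OF ys e] by simp
        moreover have "2 * length l + 1 \<le> length (s @ [e]) + j" using s by simp
        ultimately show ?thesis using Suc.IH by simp
      qed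
      have "scaled_mass \<nu> (y @ s) = (\<Sum>e\<in>succs (last (y @ s)). scaled_mass \<nu> (y @ s @ [e])) / z"
        using scaled_mass_succs[OF nuE ys] by simp
      also have "\<dots> = (\<Sum>e\<in>succs (last (y' @ s)). scaled_mass \<nu> (y' @ s @ [e])) / z"
        using ext lst by (simp cong: sum.cong)
      also have "\<dots> = scaled_mass \<nu> (y' @ s)" using scaled_mass_succs[OF nuE y's] by simp
      finally show "scaled_mass \<nu> (y @ s) = scaled_mass \<nu> (y' @ s)" .
    qed
  qed
  from this[of "2 * length l + 1", rule_format, of "[]"] show ?thesis using y by simp
qed

definition edge_mass :: "((nat \<Rightarrow> 'a edge) set \<Rightarrow> complex) \<Rightarrow> 'a edge \<Rightarrow> complex" where
  "edge_mass \<nu> e = scaled_mass \<nu> (SOME y. y \<in> C0 (length y) \<and> last y = e)"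

lemma scaled_mass_eq_edge_mass:
  assumes nu: "\<nu> \<in> FAI" and c: "c \<in> C0 (length c)"
  shows "scaled_mass \<nu> c = edge_mass \<nu> (last c)"
proof -
  let ?y = "SOME y. y \<in> C0 (length y) \<and> last y = last c"
  have "last c \<in> E" using c by (auto simp: codes0_iff postal_iff)
  then have "?y \<in> C0 (length ?y) \<and> last ?y = last c" by (rule someI_ex[OF reach_edge])
  then show ?thesis using scaled_mass_last[OF nu c, of ?y] by (simp add: edge_mass_def)
qed

lemma edge_mass_eigen:
  assumes nu: "\<nu> \<in> FAI" and e: "e \<in> E"
  shows "(\<Sum>d\<in>succs e. edge_mass \<nu> d) = z * edge_mass \<nu> e"
proof -
  obtain y where y: "y \<in> C0 (length y)" "last y = e" using reach_edge[OF e] by blast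
  have "edge_mass \<nu> e = (\<Sum>d\<in>succs e. scaled_mass \<nu> (y @ [d])) / z"
    using scaled_mass_succs[of \<nu> y] scaled_mass_eq_edge_mass[OF nu y(1)] nu y by (simp add: FAinv_def)
  also have "\<dots> = (\<Sum>d\<in>succs e. edge_mass \<nu> d) / z"
    using scaled_mass_eq_edge_mass[OF nu] C0_snoc[OF y(1)] y(2) by (intro arg_cong[where f = "\<lambda>x. x / z"] sum.cong) auto
  finally show ?thesis using z_nonzero by (simp add: field_simps)
qed

lemma Res_surj: assumes nu: "\<nu> \<in> FAI" shows "\<exists>\<mu>\<in>EIG. RES \<mu> = \<nu>"
proof -
  define m where "m e = edge_mass \<nu> e / z" for e
  have meig: "(\<Sum>d\<in>succs e. m d) = z * m e" if "e \<in> E" for e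
    using edge_mass_eigen[OF nu that] by (simp add: m_def sum_divide_distrib[symmetric])
  have fa: "eigen_measure m \<in> FAP" by (rule eigen_measure_FA[OF meig])
  have "RES (eigen_measure m) = \<nu>"
  proof (rule FAE_eqI[OF Res_FAE[OF fa]])
    show "\<nu> \<in> FAE" using nu by (simp add: FAinv_def)
    fix n c assume c: "c \<in> C0 n"
    then have c': "c \<in> C0 (length c)" by (simp add: codes0_iff)
    have cp: "postal V adj c" "length c \<ge> 1" using c C0_pos[OF c] by (auto simp: codes0_iff)
    have "RES (eigen_measure m) (P c) = m (last c) / z ^ (length c - 1)"
      using Res_district[OF fa c] cp by (simp add: eigen_measure_def)
    also have "\<dots> = edge_mass \<nu> (last c) / z ^ length c"
      using cp z_nonzero by (cases "length c") (auto simp: m_def field_simps)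
    also have "\<dots> = \<nu> (P c)" using scaled_mass_eq_edge_mass[OF nu c'] z_nonzero by (simp add: scaled_mass_def field_simps)
    finally show "RES (eigen_measure m) (P c) = \<nu> (P c)" .
  qed
  then show ?thesis using eigen_measure_eig[OF meig] by blast
qed

lemma Res_iso: "lin_iso RES EIG FAI"
  unfolding lin_iso_def
proof (intro conjI ballI allI)
  show "bij_betw RES EIG FAI"
  proof (rule bij_betw_imageI[OF Res_inj])
    show "RES ` EIG = FAI" using Res_FAI Res_surj by blast
  qed
next
  fix x y show "RES (\<lambda>a. x a + y a) = (\<lambda>b. RES x b + RES y b)" by (rule Res_add)
next
  fix c x show "RES (\<lambda>a. c * x a) = (\<lambda>b. c * RES x b)" by (rule Res_smult)
qed

lemma lift_Iop_fmu_INVT: "\<mu> \<in> EIG \<Longrightarrow> LIFT (Iop V adj (fmu V adj \<mu>)) \<in> INVT"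
  using fmu_iso Iop_iso lift_iso unfolding lin_iso_def bij_betw_def by blast

lemma Poisson_iso: "lin_iso (POI z) FAI INVT"
  unfolding lin_iso_def
proof (intro conjI ballI allI)
  show "bij_betw (POI z) FAI INVT"
  proof (rule bij_betw_imageI)
    show "inj_on (POI z) FAI"
      by (rule inj_onI) (rule Poisson_inj, auto simp: FAinv_def)
    show "POI z ` FAI = INVT"
    proof
      show "POI z ` FAI \<subseteq> INVT"
      proof
        fix F assume "F \<in> POI z ` FAI"
        then obtain \<nu> where nu: "\<nu> \<in> FAI" "F = POI z \<nu>" by blast
        obtain \<mu> where mu: "\<mu> \<in> EIG" "RES \<mu> = \<nu>" using Res_surj[OF nu(1)] by blast
        show "F \<in> INVT" using lift_Iop_fmu_INVT[OF mu(1)] lift_Iop_fmu_eq_Poisson_Res[OF mu(1)] mu(2) nu(2) by simp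
      qed
    next
      show "INVT \<subseteq> POI z ` FAI"
      proof
        fix F assume F: "F \<in> INVT"
        have b1: "bij_betw (fmu V adj) EIG EQS" and b2: "bij_betw (Iop V adj) EQS EQV"
          and b3: "bij_betw LIFT EQV INVT"
          using fmu_iso Iop_iso lift_iso by (auto simp: lin_iso_def)
        obtain f where f: "f \<in> EQV" "F = LIFT f" using b3 F by (auto simp: bij_betw_def)
        obtain g where g: "g \<in> EQS" "f = Iop V adj g" using b2 f(1) by (auto simp: bij_betw_def)
        obtain \<mu> where mu: "\<mu> \<in> EIG" "g = fmu V adj \<mu>" using b1 g(1) by (auto simp: bij_betw_def)
        have "F = POI z (RES \<mu>)" using lift_Iop_fmu_eq_Poisson_Res[OF mu(1)] f g mu by simp
        then show "F \<in> POI z ` FAI" using Res_FAI[OF mu(1)] by blast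
      qed
    qed
  qed
next
  fix x y show "POI z (\<lambda>a. x a + y a) = (\<lambda>b. POI z x b + POI z y b)" by (rule Poisson_add)
next
  fix c x show "POI z (\<lambda>a. c * x a) = (\<lambda>b. c * POI z x b)" by (rule Poisson_smult)
qed

end

theorem mainTheorem20:
  fixes V :: "'v set" and adj :: "'v \<Rightarrow> 'v \<Rightarrow> bool" and v0 :: 'v and z :: complex
  assumes finV: "finite V"
    and adjV: "\<And>u w. adj u w \<Longrightarrow> u \<in> V \<and> w \<in> V"
    and sym: "\<And>u w. adj u w \<Longrightarrow> adj w u"
    and irrefl: "\<And>u. \<not> adj u u"
    and conn: "\<forall>u\<in>V. \<forall>w\<in>V. (u, w) \<in> {(a, b). adj a b}\<^sup>*"
    and deg2: "\<forall>v\<in>V. card (nbr V adj v) \<ge> 2"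
    and v0: "v0 \<in> V"
    and z: "z \<notin> {-1, 0, 1}"
  shows
    "lin_iso (fmu V adj) (eigFA V adj z) (EqS V adj z)
     \<and> EqV V (Sigma_op V adj) (Rz V adj z) = EqV V (Delta_op V adj) (Lz V adj z)
     \<and> lin_iso (Iop V adj) (EqS V adj z) (EqV V (Sigma_op V adj) (Rz V adj z))
     \<and> lin_iso (lift V adj v0) (EqV V (Sigma_op V adj) (Rz V adj z))
         {F \<in> EqT V adj v0 z. invariantT V adj v0 F}
     \<and> lin_iso (Res V adj v0) (eigFA V adj z) (FAinv V adj v0 z)
     \<and> lin_iso (Poisson V adj v0 z) (FAinv V adj v0 z)
         {F \<in> EqT V adj v0 z. invariantT V adj v0 F}
     \<and> (\<forall>\<mu> \<in> eigFA V adj z. lift V adj v0 (Iop V adj (fmu V adj \<mu>)) = Poisson V adj v0 z (Res V adj v0 \<mu>))"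
proof -
  interpret rooted_graph_eigen V adj v0 z
    by unfold_locales (use finV adjV sym irrefl conn deg2 v0 z in auto)
  show ?thesis
    using fmu_iso Sigma_Delta Iop_iso lift_iso Res_iso Poisson_iso lift_Iop_fmu_eq_Poisson_Res by blast
qed

end
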